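(* Let $k_0,k_1,k_{-1},k_2,e_T$ be nonnegative real parameters with $k_1\neq0$, $k_2\neq0$, and $k_2e_T<k_0$. Consider the system \[ \dot s = k_0-k_1(e_T-c)s+k_{-1}c,\qquad \dot c = k_1(e_T-c)s-(k_{-1}+k_2)c, \] extended to the Poincaré sphere, and let $P_0=\left(\frac{(k_{-1}+k_2)k_0}{k_1(k_2e_T-k_0)},\frac{k_0}{k_2}\right)$ (a saddle, lying in the second quadrant). Then every solution starting in the first quadrant converges to $P_1$ as $t\to\infty$, and its trajectory in the phase plane is asymptotic to the line $c=e_T$. There is a unique trajectory connecting the saddle $P_0$ to $P_1$ (i.e. with $\alpha$-limit $P_0$ and $\omega$-limit $P_1$).
   Context: The Poincaré sphere compactification: the phase plane is identified with the upper hemisphere of a sphere by central projection from the center, the vector field extends (after multiplication by a positive factor) to the whole sphere with invariant equator, and equator points represent directions at infinity. $P_1$ is the stationary point at infinity corresponding to the ray $\mathbb{R}_+(1,0)$ (the positive $s$-direction). *)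

theory Defs
  imports "HOL-Analysis.Analysis"
begin

definition mm_field :: "real \<Rightarrow> real \<Rightarrow> real \<Rightarrow> real \<Rightarrow> real \<Rightarrow> real \<times> real \<Rightarrow> real \<times> real" where
  "mm_field k0 k1 km1 k2 eT p =
     (let s = fst p; c = snd p in
       (k0 - k1 * (eT - c) * s + km1 * c, k1 * (eT - c) * s - (km1 + k2) * c))"

definition is_solution :: "(real \<times> real \<Rightarrow> real \<times> real) \<Rightarrow> real set \<Rightarrow> (real \<Rightarrow> real \<times> real) \<Rightarrow> bool" where
  "is_solution F I x \<longleftrightarrow> open I \<and> is_interval I \<and> I \<noteq> {} \<and>
     (\<forall>t\<in>I. (x has_vector_derivative F (x t)) (at t))"

definition is_maximal_solution :: "(real \<times> real \<Rightarrow> real \<times> real) \<Rightarrow> real set \<Rightarrow> (real \<Rightarrow> real \<times> real) \<Rightarrow> bool" where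
  "is_maximal_solution F I x \<longleftrightarrow> is_solution F I x \<and>
     (\<forall>J y. is_solution F J y \<and> I \<subseteq> J \<and> (\<forall>t\<in>I. y t = x t) \<longrightarrow> J = I)"

definition lower_end :: "real set \<Rightarrow> real filter" where
  "lower_end I = (if bdd_below I then at_right (Inf I) else at_bot)"

definition upper_end :: "real set \<Rightarrow> real filter" where
  "upper_end I = (if bdd_above I then at_left (Sup I) else at_top)"

text \<open>Central projection of the phase plane onto the upper hemisphere of the unit sphere
  (plane placed at height 1).\<close>
definition poincare :: "real \<times> real \<Rightarrow> real \<times> real \<times> real" where
  "poincare p = (let r = sqrt (1 + (fst p)\<^sup>2 + (snd p)\<^sup>2) in
                   (fst p / r, snd p / r, 1 / r))"

text \<open>Equator point at infinity in direction (1,0).\<close>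
definition P1 :: "real \<times> real \<times> real" where
  "P1 = (1, 0, 0)"

definition P0 :: "real \<Rightarrow> real \<Rightarrow> real \<Rightarrow> real \<Rightarrow> real \<Rightarrow> real \<times> real" where
  "P0 k0 k1 km1 k2 eT = ((km1 + k2) * k0 / (k1 * (k2 * eT - k0)), k0 / k2)"

end

(* In the first quadrant the field points inwards on the axes and s + c grows at most linearly,
   so solutions starting there exist for all t >= 0 and stay there.  Since c' < 0 whenever
   c > eT, eventually c <= eT + eps; then (s + c)' = k0 - k2 c is bounded below by a positive
   constant because k2 eT < k0, so s tends to infinity, which in turn drives c to eT.  With c
   bounded this is convergence to P1 on the Poincare sphere.

   In the coordinates u = s + c - s0 - c0, w = c0 - c centred at the saddle P0 the system reads
   u' = k2 w, w' = k1 d0 u - w (k1 (u + w) + b0).  A wedge between a concave lower edge and the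
   unstable eigendirection w = mu u is forward invariant, and in it u grows linearly.  The
   orbits leaving the eigendirection at u = 1/(n + 1) are graphs of solutions of
   dw/du = H(u, w); as H decreases in w these graphs approach each other, and their limit is
   the unstable manifold w = W(u).  The orbit on it connects P0 to P1.  Conversely, an orbit
   from P0 to P1 lies in the open quadrant u, w > 0: elsewhere u w <= 0, so u^2 decreases
   there while tending to 0 at P0, which would force the orbit to rest at P0.  In the quadrant
   its distance w - W(u) to the graph shrinks in time and tends to 0 at P0, so it is the same
   orbit. *)

theory Submission
  imports Defs
begin

section \<open>Differential inequalities\<close>

lemma vector_mvt_bound:
  fixes f :: "real \<Rightarrow> 'a::real_normed_vector"
  assumes der: "\<And>t. t \<in> {a..b} \<Longrightarrow> (f has_vector_derivative f' t) (at t within {a..b})"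
    and bound: "\<And>t. t \<in> {a..b} \<Longrightarrow> norm (f' t) \<le> B"
    and x: "x \<in> {a..b}" and y: "y \<in> {a..b}"
  shows "norm (f x - f y) \<le> B * \<bar>x - y\<bar>"
proof -
  have "norm (f x - f y) \<le> B * norm (x - y)"
  proof (rule differentiable_bound[of "{a..b}" f "\<lambda>t h. h *\<^sub>R f' t" B])
    show "(f has_derivative (\<lambda>h. h *\<^sub>R f' t)) (at t within {a..b})" if "t \<in> {a..b}" for t
      using der[OF that] by (simp add: has_vector_derivative_def)
    show "onorm (\<lambda>h. h *\<^sub>R f' t) \<le> B" if "t \<in> {a..b}" for t
    proof (rule onorm_le)
      fix h :: real
      have "norm (h *\<^sub>R f' t) \<le> \<bar>h\<bar> * B" using bound[OF that] by (simp add: mult_left_mono)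
      then show "norm (h *\<^sub>R f' t) \<le> B * norm h" by (simp add: mult.commute)
    qed
  qed (use x y in auto)
  then show ?thesis by simp
qed

lemma DERIV_barrier_le:
  fixes f f' :: "real \<Rightarrow> real"
  assumes "a \<le> b"
    and der: "\<And>t. a \<le> t \<Longrightarrow> t \<le> b \<Longrightarrow> (f has_real_derivative f' t) (at t)"
    and inward: "\<And>t. a \<le> t \<Longrightarrow> t \<le> b \<Longrightarrow> f t > e \<Longrightarrow> f' t \<le> 0"
    and "f a \<le> e"
  shows "f b \<le> e"
proof (rule ccontr)
  assume above: "\<not> f b \<le> e"
  have cont: "continuous_on {a..b} f"
    using der by (meson DERIV_isCont atLeastAtMost_iff continuous_at_imp_continuous_on)
  define S where "S = {a..b} \<inter> f -` {..e}"
  have "closed S" unfolding S_def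
    by (rule continuous_closed_preimage[OF cont]) auto
  moreover have "a \<in> S" "bdd_above S"
    using assms by (auto simp: S_def intro: bdd_aboveI[where M=b])
  ultimately have last: "Sup S \<in> S" using closed_contains_Sup by blast
  then have last_le: "a \<le> Sup S" "Sup S \<le> b" "f (Sup S) \<le> e" by (auto simp: S_def)
  have after_last: "f t > e" if "Sup S < t" "t \<le> b" for t
  proof (rule ccontr)
    assume "\<not> f t > e"
    then have "t \<in> S" using that last_le by (auto simp: S_def)
    then show False using that cSup_upper[OF _ \<open>bdd_above S\<close>] by fastforce
  qed
  have "f b \<le> f (Sup S)"
  proof (rule DERIV_nonpos_imp_decreasing_open[of "Sup S" b f])
    show "Sup S \<le> b" by (rule last_le(2))
    show "\<exists>y. (f has_real_derivative y) (at x) \<and> y \<le> 0" if "Sup S < x" "x < b" for x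
      using der[of x] inward[of x] after_last[of x] that last_le by auto
    show "continuous_on {Sup S..b} f"
      by (rule continuous_on_subset[OF cont]) (use last_le in auto)
  qed
  then show False using last_le above by simp
qed

lemma real_interval_induct:
  fixes a b :: real
  assumes ab: "a \<le> b"
    and closed: "\<And>t. a \<le> t \<Longrightarrow> t \<le> b \<Longrightarrow> (\<And>\<tau>. a \<le> \<tau> \<Longrightarrow> \<tau> < t \<Longrightarrow> P \<tau>) \<Longrightarrow> P t"
    and step: "\<And>t. a \<le> t \<Longrightarrow> t < b \<Longrightarrow> (\<And>\<tau>. a \<le> \<tau> \<Longrightarrow> \<tau> \<le> t \<Longrightarrow> P \<tau>) \<Longrightarrow>
                 \<exists>d>0. \<forall>\<tau>. t < \<tau> \<and> \<tau> < t + d \<longrightarrow> P \<tau>"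
  shows "P b"
proof -
  define S where "S = {t. a \<le> t \<and> t \<le> b \<and> (\<forall>\<tau>. a \<le> \<tau> \<and> \<tau> \<le> t \<longrightarrow> P \<tau>)}"
  have Pa: "P a" using closed[of a] ab by auto
  have aS: "a \<in> S" using ab Pa by (auto simp: S_def)
  have bdd: "bdd_above S" unfolding S_def by (auto intro: bdd_aboveI[where M=b])
  define m where "m = Sup S"
  have am: "a \<le> m" unfolding m_def using aS bdd by (simp add: cSup_upper)
  have mb: "m \<le> b" unfolding m_def using aS by (intro cSup_least) (auto simp: S_def)
  have below: "P \<tau>" if H: "a \<le> \<tau>" "\<tau> < m" for \<tau>
  proof -
    obtain s where "s \<in> S" "\<tau> < s" using less_cSup_iff[of S \<tau>] aS bdd H unfolding m_def by auto
    then show ?thesis using H by (auto simp: S_def)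
  qed
  have Pm: "P m" using closed[OF am mb below] by blast
  have mS: "\<forall>\<tau>. a \<le> \<tau> \<and> \<tau> \<le> m \<longrightarrow> P \<tau>"
    using below Pm by (metis order.not_eq_order_implies_strict)
  show ?thesis
  proof (cases "m < b")
    case True
    obtain d where d: "d > 0" "\<forall>\<tau>. m < \<tau> \<and> \<tau> < m + d \<longrightarrow> P \<tau>"
      using step[OF am True] mS by blast
    define m' where "m' = min (m + d/2) b"
    have m'1: "a \<le> m'" "m' \<le> b" "m < m'" "m' < m + d" using am True d(1) by (auto simp: m'_def)
    have "P \<tau>" if "a \<le> \<tau>" "\<tau> \<le> m'" for \<tau>
    proof (cases "\<tau> \<le> m")
      case True then show ?thesis using mS that by blast
    next
      case False then show ?thesis using d(2) m'1 that by auto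
    qed
    then have "m' \<in> S" unfolding S_def using m'1 by blast
    then have "m' \<le> m" unfolding m_def using bdd by (simp add: cSup_upper)
    then show ?thesis using True d by (auto simp: m'_def)
  next
    case False
    then show ?thesis using mb Pm by simp
  qed
qed

lemma gronwall_vanishing:
  fixes e e' :: "real \<Rightarrow> real"
  assumes der: "\<And>t. a \<le> t \<Longrightarrow> t \<le> b \<Longrightarrow> (e has_real_derivative e' t) (at t)"
    and nonneg: "\<And>t. a \<le> t \<Longrightarrow> t \<le> b \<Longrightarrow> e t \<ge> 0"
    and bound: "\<And>t. a \<le> t \<Longrightarrow> t \<le> b \<Longrightarrow> \<bar>e' t\<bar> \<le> M * e t"
    and tz: "a \<le> tz" "tz \<le> b" "e tz = 0"
    and t: "a \<le> t" "t \<le> b"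
  shows "e t = 0"
proof (cases "tz \<le> t")
  case True
  have "e t * exp (- M * t) \<le> e tz * exp (- M * tz)"
  proof (rule DERIV_nonpos_imp_nonincreasing[OF True, of "\<lambda>t. e t * exp (- M * t)"])
    fix x assume x: "tz \<le> x" "x \<le> t"
    have "((\<lambda>t. e t * exp (- M * t)) has_real_derivative
        (e' x - M * e x) * exp (- M * x)) (at x)"
      using der[of x] x tz t by (auto intro!: derivative_eq_intros) (simp add: algebra_simps)
    moreover have "(e' x - M * e x) * exp (- M * x) \<le> 0"
      using bound[of x] x tz t by (simp add: mult_nonpos_nonneg)
    ultimately show "\<exists>y. ((\<lambda>t. e t * exp (- M * t)) has_real_derivative y) (at x) \<and> y \<le> 0"
      by blast
  qed
  then show ?thesis using nonneg[OF t] tz(3) by (simp add: mult_le_0_iff)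
next
  case False
  have "e t * exp (M * t) \<le> e tz * exp (M * tz)"
  proof (rule DERIV_nonneg_imp_nondecreasing[of t tz "\<lambda>t. e t * exp (M * t)"])
    show "t \<le> tz" using False by simp
    fix x assume x: "t \<le> x" "x \<le> tz"
    have "((\<lambda>t. e t * exp (M * t)) has_real_derivative
        (e' x + M * e x) * exp (M * x)) (at x)"
      using der[of x] x tz t by (auto intro!: derivative_eq_intros) (simp add: algebra_simps)
    moreover have "(e' x + M * e x) * exp (M * x) \<ge> 0"
      using bound[of x] x tz t by simp
    ultimately show "\<exists>y. ((\<lambda>t. e t * exp (M * t)) has_real_derivative y) (at x) \<and> y \<ge> 0"
      by blast
  qed
  then show ?thesis using nonneg[OF t] tz(3) by (simp add: mult_le_0_iff)
qed

lemma isCont_lowerbound_left: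
  fixes f :: "real \<Rightarrow> real"
  assumes "isCont f t" "a < t" "\<And>\<tau>. a < \<tau> \<Longrightarrow> \<tau> < t \<Longrightarrow> f \<tau> \<ge> v"
  shows "f t \<ge> v"
proof (rule tendsto_lowerbound)
  show "(f \<longlongrightarrow> f t) (at_left t)"
    using assms(1) by (simp add: isCont_def filterlim_at_split)
  show "\<forall>\<^sub>F x in at_left t. v \<le> f x"
    using eventually_at_left_real[OF assms(2)] by eventually_elim (use assms(3) in auto)
qed simp

lemma DERIV_pos_right:
  fixes f :: "real \<Rightarrow> real"
  assumes der: "(f has_real_derivative f') (at t)" and "f t > 0 \<or> (f t \<ge> 0 \<and> f' > 0)"
  shows "\<exists>d>0. \<forall>h. 0 < h \<and> h < d \<longrightarrow> f (t + h) > 0"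
proof (cases "f t > 0")
  case True
  have "\<forall>\<^sub>F y in at t. f y > 0"
    using DERIV_isCont[OF der] True by (simp add: isCont_def order_tendsto_iff)
  then obtain d where "d > 0" "\<And>y. y \<noteq> t \<Longrightarrow> dist y t < d \<Longrightarrow> f y > 0"
    unfolding eventually_at by auto
  then show ?thesis by (intro exI[where x=d]) (auto simp: dist_real_def)
next
  case False
  then show ?thesis
    using assms DERIV_pos_inc_right[OF der] by (meson order_le_less_trans)
qed

lemma isCont_lowerbound_right:
  fixes f :: "real \<Rightarrow> real"
  assumes "isCont f t" "t < b" "\<And>\<tau>. t < \<tau> \<Longrightarrow> \<tau> < b \<Longrightarrow> f \<tau> \<ge> v"
  shows "f t \<ge> v"
proof (rule tendsto_lowerbound)
  show "(f \<longlongrightarrow> f t) (at_right t)"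
    using assms(1) by (simp add: isCont_def filterlim_at_split)
  show "\<forall>\<^sub>F x in at_right t. v \<le> f x"
    using eventually_at_right_real[OF assms(2)] by eventually_elim (use assms(3) in auto)
qed simp

lemma isCont_upperbound_right:
  fixes f :: "real \<Rightarrow> real"
  assumes "isCont f t" "t < b" "\<And>\<tau>. t < \<tau> \<Longrightarrow> \<tau> < b \<Longrightarrow> f \<tau> \<le> v"
  shows "f t \<le> v"
proof -
  have "isCont (\<lambda>t. - f t) t" using assms(1) by (rule isCont_minus)
  from isCont_lowerbound_right[OF this assms(2), of "- v"] assms(3) show ?thesis by simp
qed

lemma positive_quadrant_weak_invariant:
  fixes U W \<phi> :: "real \<Rightarrow> real"
  assumes ab: "a > 0" "b > 0"
    and dU: "\<And>t. ta \<le> t \<Longrightarrow> t \<le> tb \<Longrightarrow> (U has_real_derivative a * W t) (at t)"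
    and dW: "\<And>t. ta \<le> t \<Longrightarrow> t \<le> tb \<Longrightarrow> (W has_real_derivative b * U t - W t * \<phi> t) (at t)"
    and U1: "U ta > 0" and W1: "W ta > 0"
    and t: "ta \<le> t" "t \<le> tb"
  shows "U t \<ge> U ta \<and> W t \<ge> 0"
proof (rule real_interval_induct[where a=ta and b=t and P="\<lambda>\<tau>. U \<tau> \<ge> U ta \<and> W \<tau> \<ge> 0"])
  show "ta \<le> t" by (rule t(1))
next
  fix \<tau> assume \<tau>: "ta \<le> \<tau>" "\<tau> \<le> t" and H: "\<And>\<sigma>. ta \<le> \<sigma> \<Longrightarrow> \<sigma> < \<tau> \<Longrightarrow> U \<sigma> \<ge> U ta \<and> W \<sigma> \<ge> 0"
  show "U \<tau> \<ge> U ta \<and> W \<tau> \<ge> 0"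
  proof (cases "\<tau> = ta")
    case True then show ?thesis using W1 by simp
  next
    case False
    then have lt: "ta < \<tau>" using \<tau> by simp
    have "U \<tau> \<ge> U ta" by (rule isCont_lowerbound_left[OF DERIV_isCont[OF dU] lt]) (use \<tau> t H in auto)
    moreover have "W \<tau> \<ge> 0" by (rule isCont_lowerbound_left[OF DERIV_isCont[OF dW] lt]) (use \<tau> t H in auto)
    ultimately show ?thesis by simp
  qed
next
  fix \<tau> assume \<tau>: "ta \<le> \<tau>" "\<tau> < t" and H: "\<And>\<sigma>. ta \<le> \<sigma> \<Longrightarrow> \<sigma> \<le> \<tau> \<Longrightarrow> U \<sigma> \<ge> U ta \<and> W \<sigma> \<ge> 0"
  have P\<tau>: "U \<tau> \<ge> U ta" "W \<tau> \<ge> 0" using H[of \<tau>] \<tau> by auto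
  have dW\<tau>: "(W has_real_derivative b * U \<tau> - W \<tau> * \<phi> \<tau>) (at \<tau>)" using dW \<tau> t by simp
  have "W \<tau> > 0 \<or> (W \<tau> \<ge> 0 \<and> b * U \<tau> - W \<tau> * \<phi> \<tau> > 0)"
  proof (cases "W \<tau> > 0")
    case False
    then have "W \<tau> = 0" using P\<tau> by simp
    then show ?thesis using ab U1 P\<tau> by simp
  qed simp
  from DERIV_pos_right[OF dW\<tau> this] obtain d1 where d1: "d1 > 0" "\<And>h. 0 < h \<Longrightarrow> h < d1 \<Longrightarrow> W (\<tau> + h) > 0"
    by blast
  define d where "d = min d1 (t - \<tau>)"
  have dpos: "d > 0" using d1 \<tau> by (simp add: d_def)
  have "\<forall>\<sigma>. \<tau> < \<sigma> \<and> \<sigma> < \<tau> + d \<longrightarrow> U \<sigma> \<ge> U ta \<and> W \<sigma> \<ge> 0"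
  proof (intro allI impI)
    fix \<sigma> assume \<sigma>: "\<tau> < \<sigma> \<and> \<sigma> < \<tau> + d"
    have Wge: "W u \<ge> 0" if "\<tau> \<le> u" "u \<le> \<sigma>" for u
    proof (cases "u = \<tau>")
      case True then show ?thesis using P\<tau> by simp
    next
      case False
      then have "0 < u - \<tau>" "u - \<tau> < d1" using that \<sigma> by (auto simp: d_def)
      then show ?thesis using d1(2)[of "u - \<tau>"] by simp
    qed
    have "U \<tau> \<le> U \<sigma>"
    proof (rule DERIV_nonneg_imp_nondecreasing[where f=U])
      show "\<tau> \<le> \<sigma>" using \<sigma> by simp
      fix u assume u: "\<tau> \<le> u" "u \<le> \<sigma>"
      have "d \<le> t - \<tau>" by (simp add: d_def)
      then have "ta \<le> u" "u \<le> tb" using u \<tau> \<sigma> t by linarith+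
      then have "(U has_real_derivative a * W u) (at u)" using dU by simp
      moreover have "a * W u \<ge> 0" using ab Wge[OF u] by simp
      ultimately show "\<exists>y. (U has_real_derivative y) (at u) \<and> 0 \<le> y" by blast
    qed
    then show "U \<sigma> \<ge> U ta \<and> W \<sigma> \<ge> 0" using P\<tau> Wge[of \<sigma>] \<sigma> by simp
  qed
  then show "\<exists>d>0. \<forall>\<sigma>. \<tau> < \<sigma> \<and> \<sigma> < \<tau> + d \<longrightarrow> U \<sigma> \<ge> U ta \<and> W \<sigma> \<ge> 0"
    using dpos by blast
qed

lemma positive_quadrant_invariant:
  fixes U W \<phi> :: "real \<Rightarrow> real"
  assumes ab: "a > 0" "b > 0" and t12: "ta \<le> tb"
    and dU: "\<And>t. ta \<le> t \<Longrightarrow> t \<le> tb \<Longrightarrow> (U has_real_derivative a * W t) (at t)"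
    and dW: "\<And>t. ta \<le> t \<Longrightarrow> t \<le> tb \<Longrightarrow> (W has_real_derivative b * U t - W t * \<phi> t) (at t)"
    and U1: "U ta > 0" and W1: "W ta > 0"
  shows "U tb > 0 \<and> W tb > 0"
proof -
  have main: "U t \<ge> U ta \<and> W t \<ge> 0" if "ta \<le> t" "t \<le> tb" for t
    using positive_quadrant_weak_invariant[OF ab dU dW U1 W1 that] .
  have "W tb > 0"
  proof (cases "tb = ta")
    case True then show ?thesis using W1 by simp
  next
    case False
    then have lt: "ta < tb" using t12 by simp
    show ?thesis
    proof (rule ccontr)
      assume "\<not> W tb > 0"
      then have W0: "W tb = 0" using main[of tb] t12 by simp
      have "b * U tb - W tb * \<phi> tb > 0" using W0 main[of tb] t12 ab U1 by simp
      from DERIV_pos_inc_left[OF dW[OF t12 order.refl] this] obtain d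
        where d: "d > 0" "\<And>h. 0 < h \<Longrightarrow> h < d \<Longrightarrow> W (tb - h) < W tb" by blast
      define h where "h = min (d/2) (tb - ta)"
      have h: "0 < h" "h < d" "ta \<le> tb - h" using d lt by (auto simp: h_def)
      have "W (tb - h) < 0" using d(2)[OF h(1,2)] W0 by simp
      moreover have "W (tb - h) \<ge> 0" using main[of "tb - h"] h by simp
      ultimately show False by simp
    qed
  qed
  moreover have "U tb > 0" using main[of tb] t12 U1 by simp
  ultimately show ?thesis by simp
qed

lemma inverse_of_increasing_unbounded:
  fixes U U' :: "real \<Rightarrow> real"
  assumes dU: "\<And>t. t \<ge> 0 \<Longrightarrow> (U has_real_derivative U' t) (at t)"
    and pos: "\<And>t. t \<ge> 0 \<Longrightarrow> U' t > 0"
    and grow: "\<And>t. t \<ge> 0 \<Longrightarrow> U 0 + \<kappa> * t \<le> U t" and \<kappa>: "\<kappa> > 0"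
  obtains \<tau> where "\<And>v. v \<ge> U 0 \<Longrightarrow> \<tau> v \<ge> 0 \<and> U (\<tau> v) = v"
    and "\<And>t. t \<ge> 0 \<Longrightarrow> \<tau> (U t) = t"
proof -
  have smono: "U a < U b" if "0 \<le> a" "a < b" for a b
  proof (rule DERIV_pos_imp_increasing[OF that(2)])
    fix y assume "a \<le> y" "y \<le> b"
    then have "y \<ge> 0" using that by simp
    then show "\<exists>d. (U has_real_derivative d) (at y) \<and> d > 0"
      using dU pos by blast
  qed
  have inj: "a = b" if "0 \<le> a" "0 \<le> b" "U a = U b" for a b
    using smono[of a b] smono[of b a] that by (cases a b rule: linorder_cases) auto
  have ex: "\<exists>t\<ge>0. U t = v" if v: "v \<ge> U 0" for v
  proof -
    define T where "T = (v - U 0) / \<kappa>"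
    have T0: "T \<ge> 0" using v \<kappa> by (simp add: T_def)
    have UT: "v \<le> U T" using grow[OF T0] \<kappa> by (simp add: T_def)
    have cont: "continuous_on {0..T} U"
      using dU by (meson DERIV_isCont atLeastAtMost_iff continuous_at_imp_continuous_on)
    obtain t where "0 \<le> t" "t \<le> T" "U t = v" using IVT'[of U 0 v T, OF _ UT T0 cont] v by auto
    then show ?thesis by blast
  qed
  define \<tau> where "\<tau> v = (THE t. 0 \<le> t \<and> U t = v)" for v
  have \<tau>: "0 \<le> \<tau> v \<and> U (\<tau> v) = v" if v: "v \<ge> U 0" for v
  proof -
    obtain t where t: "0 \<le> t" "U t = v" using ex[OF v] by blast
    show ?thesis unfolding \<tau>_def
      by (rule theI[of "\<lambda>t. 0 \<le> t \<and> U t = v" t]) (use t inj in auto)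
  qed
  have \<tau>U: "\<tau> (U t) = t" if t: "t \<ge> 0" for t
  proof -
    have "U t \<ge> U 0" using smono[of 0 t] t by (cases "t = 0") auto
    then show ?thesis using \<tau>[of "U t"] inj[of "\<tau> (U t)" t] t by auto
  qed
  from that[OF _ \<tau>U] \<tau> show ?thesis by blast
qed

lemma DERIV_inverse_of_increasing:
  fixes U U' :: "real \<Rightarrow> real"
  assumes dU: "\<And>t. t \<ge> 0 \<Longrightarrow> (U has_real_derivative U' t) (at t)"
    and pos: "\<And>t. t \<ge> 0 \<Longrightarrow> U' t > 0"
    and \<tau>: "\<And>v. v \<ge> U 0 \<Longrightarrow> \<tau> v \<ge> 0 \<and> U (\<tau> v) = v" and \<tau>U: "\<And>t. t \<ge> 0 \<Longrightarrow> \<tau> (U t) = t"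
    and v: "v > U 0"
  shows "(\<tau> has_real_derivative inverse (U' (\<tau> v))) (at v)"
proof -
  define t where "t = \<tau> v"
  have t: "0 \<le> t" "U t = v" using \<tau>[of v] v by (auto simp: t_def)
  have tpos: "t > 0" using t v by (cases "t = 0") auto
  have "isCont \<tau> (U t)"
  proof (rule isCont_inverse_function[where d="t/2" and f=U])
    show "0 < t / 2" using tpos by simp
    show "\<tau> (U z) = z" "isCont U z" if z: "\<bar>z - t\<bar> \<le> t / 2" for z
    proof -
      have "z \<ge> 0" using abs_le_D2[OF z] tpos by linarith
      then show "\<tau> (U z) = z" "isCont U z" using \<tau>U[of z] DERIV_isCont[OF dU[of z]] by simp_all
    qed
  qed
  show ?thesis
  proof (rule DERIV_inverse_function[where f=U and a="U 0" and b="v + 1"])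
    show "(U has_real_derivative U' (\<tau> v)) (at (\<tau> v))" using dU t(1) by (simp add: t_def)
    show "U' (\<tau> v) \<noteq> 0" using pos t(1) by (simp add: t_def less_imp_neq[symmetric])
    show "U (\<tau> y) = y" if y: "U 0 < y" "y < v + 1" for y using \<tau>[of y] y by simp
    show "isCont \<tau> v" using \<open>isCont \<tau> (U t)\<close> t by simp
  qed (use v in simp_all)
qed

lemma DERIV_sequence_limit:
  fixes f :: "nat \<Rightarrow> real \<Rightarrow> real"
  assumes v: "a < v" "v < b"
    and f: "\<And>j u. u \<in> {a..b} \<Longrightarrow> (f j has_real_derivative f' j u) (at u)"
    and lim: "\<And>u. u \<in> {a..b} \<Longrightarrow> (\<lambda>j. f j u) \<longlonglongrightarrow> g u"
    and unif: "\<And>e. e > 0 \<Longrightarrow> \<forall>\<^sub>F j in sequentially. \<forall>u\<in>{a..b}. \<bar>f' j u - g' u\<bar> \<le> e"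
  shows "(g has_real_derivative g' v) (at v)"
proof -
  have vS: "v \<in> {a..b}" using v by simp
  obtain G where G: "\<forall>u\<in>{a..b}. (\<lambda>j. f j u) \<longlonglongrightarrow> G u \<and> (G has_derivative (*) (g' u)) (at u within {a..b})"
  proof -
    have "\<exists>G. \<forall>u\<in>{a..b}. (\<lambda>j. f j u) \<longlonglongrightarrow> G u \<and> (G has_derivative (*) (g' u)) (at u within {a..b})"
    proof (rule has_derivative_sequence[where f'="\<lambda>j u. (*) (f' j u)"])
      show "(f j has_derivative (*) (f' j u)) (at u within {a..b})" if "u \<in> {a..b}" for j u
        using has_field_derivative_imp_has_derivative[OF f[OF that]] has_derivative_at_withinI by blast
      show "(\<lambda>j. f j v) \<longlonglongrightarrow> g v" by (rule lim[OF vS])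
      fix e :: real assume "e > 0"
      from unif[OF this] show "\<forall>\<^sub>F j in sequentially. \<forall>u\<in>{a..b}. \<forall>h. norm (f' j u * h - g' u * h) \<le> e * norm h"
        by (rule eventually_mono) (simp add: left_diff_distrib[symmetric] abs_mult mult_right_mono)
    qed (use vS in auto)
    then show ?thesis using that by blast
  qed
  have Gg: "G u = g u" if "u \<in> {a..b}" for u
    using G that LIMSEQ_unique[OF _ lim[OF that]] by blast
  have "(G has_derivative (*) (g' v)) (at v within {a..b})" using G vS by blast
  then have "(g has_derivative (*) (g' v)) (at v within {a..b})"
    by (rule has_derivative_transform[OF vS, rotated]) (simp add: Gg)
  moreover have "at v within {a..b} = at v" by (rule at_within_Icc_at) (use v in auto)
  ultimately show ?thesis by (simp add: has_field_derivative_def)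
qed

lemma interval_unbounded_above_mem:
  fixes I :: "real set"
  assumes "is_interval I" "t0 \<in> I" "\<not> bdd_above I" "t0 \<le> t"
  shows "t \<in> I"
proof -
  obtain t' where "t' \<in> I" "t < t'" using assms(3) unfolding bdd_above_def by (meson not_le)
  then show ?thesis using mem_is_interval_1_I[OF assms(1,2)] assms(4) by simp
qed

lemma interval_unbounded_below_mem:
  fixes I :: "real set"
  assumes "is_interval I" "t0 \<in> I" "\<not> bdd_below I" "t \<le> t0"
  shows "t \<in> I"
proof -
  obtain t' where "t' \<in> I" "t' < t" using assms(3) unfolding bdd_below_def by (meson not_le)
  then show ?thesis using mem_is_interval_1_I[OF assms(1) _ assms(2)] assms(4) by simp
qed

section \<open>Picard iteration\<close>

context
  fixes F :: "'a::banach \<Rightarrow> 'a" and p :: 'a and L M \<delta> t0 :: real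
  assumes lipschitz: "L-lipschitz_on (cball p 1) F"
    and bounded: "\<And>x. x \<in> cball p 1 \<Longrightarrow> norm (F x) \<le> M"
    and \<delta>_pos: "0 < \<delta>" and \<delta>M: "\<delta> * M \<le> 1" and \<delta>L: "\<delta> * L \<le> 1/2"
begin

primrec picard_iterate :: "nat \<Rightarrow> real \<Rightarrow> 'a" where
  "picard_iterate 0 = (\<lambda>t. p)"
| "picard_iterate (Suc n) = (\<lambda>t. p + (integral {t0 - \<delta>..t} (\<lambda>\<tau>. F (picard_iterate n \<tau>)) -
                                       integral {t0 - \<delta>..t0} (\<lambda>\<tau>. F (picard_iterate n \<tau>))))"

private abbreviation "S \<equiv> {t0 - \<delta>..t0 + \<delta>}"

private lemma t0_in: "t0 \<in> S"
  using \<delta>_pos by simp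

private lemma L_nonneg: "0 \<le> L"
  using lipschitz by (rule lipschitz_on_nonneg)

private lemma F_continuous: "continuous_on (cball p 1) F"
  using lipschitz by (rule lipschitz_on_continuous_on)

lemma picard_iterate_has_vector_derivative:
  assumes "continuous_on S (picard_iterate n)" "\<forall>t\<in>S. picard_iterate n t \<in> cball p 1" "t \<in> S"
  shows "(picard_iterate (Suc n) has_vector_derivative F (picard_iterate n t)) (at t within S)"
proof -
  have "continuous_on S (\<lambda>\<tau>. F (picard_iterate n \<tau>))"
    using assms by (intro continuous_on_compose2[OF F_continuous]) auto
  then have "((\<lambda>u. integral {t0 - \<delta>..u} (\<lambda>\<tau>. F (picard_iterate n \<tau>))) has_vector_derivative
      F (picard_iterate n t)) (at t within S)"
    using integral_has_vector_derivative assms(3) by blast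
  then show ?thesis
    by (auto intro!: derivative_eq_intros)
qed

lemma picard_iterate_in_cball:
  "continuous_on S (picard_iterate n) \<and> (\<forall>t\<in>S. picard_iterate n t \<in> cball p 1)"
proof (induction n)
  case 0
  then show ?case by simp
next
  case (Suc n)
  note der = picard_iterate_has_vector_derivative[OF Suc[THEN conjunct1] Suc[THEN conjunct2]]
  have "picard_iterate (Suc n) t \<in> cball p 1" if "t \<in> S" for t
  proof -
    have "norm (picard_iterate (Suc n) t - picard_iterate (Suc n) t0) \<le> M * \<bar>t - t0\<bar>"
      using vector_mvt_bound[OF der bounded] Suc that t0_in by blast
    also have "\<dots> \<le> M * \<delta>"
      using that bounded[of p] by (intro mult_left_mono) (auto intro: order_trans[OF norm_ge_zero])
    finally show ?thesis using \<delta>M by (simp add: dist_norm norm_minus_commute mult.commute)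
  qed
  moreover have "continuous_on S (picard_iterate (Suc n))"
    using der by (meson continuous_on_eq_continuous_within has_vector_derivative_continuous)
  ultimately show ?case by blast
qed

lemma picard_iterate_derivative:
  "t \<in> S \<Longrightarrow> (picard_iterate (Suc n) has_vector_derivative F (picard_iterate n t)) (at t within S)"
  using picard_iterate_has_vector_derivative picard_iterate_in_cball by blast

lemma picard_iterate_step_le: "t \<in> S \<Longrightarrow> norm (picard_iterate (Suc n) t - picard_iterate n t) \<le> (1/2) ^ n"
proof (induction n arbitrary: t)
  case 0
  then show ?case using picard_iterate_in_cball[of "Suc 0"] by (simp add: dist_norm norm_minus_commute)
next
  case (Suc n)
  let ?d = "\<lambda>t. picard_iterate (Suc (Suc n)) t - picard_iterate (Suc n) t"
  have "norm (?d t - ?d t0) \<le> L * (1/2)^n * \<bar>t - t0\<bar>"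
  proof (rule vector_mvt_bound[OF _ _ Suc.prems t0_in])
    show "(?d has_vector_derivative F (picard_iterate (Suc n) s) - F (picard_iterate n s)) (at s within S)"
      if "s \<in> S" for s
      using picard_iterate_derivative[OF that] by (intro derivative_intros)
    show "norm (F (picard_iterate (Suc n) s) - F (picard_iterate n s)) \<le> L * (1/2)^n" if "s \<in> S" for s
    proof -
      have "norm (F (picard_iterate (Suc n) s) - F (picard_iterate n s))
          \<le> L * norm (picard_iterate (Suc n) s - picard_iterate n s)"
        using lipschitz_on_normD[OF lipschitz] picard_iterate_in_cball that by blast
      also have "\<dots> \<le> L * (1/2)^n" using Suc.IH[OF that] L_nonneg by (rule mult_left_mono)
      finally show ?thesis .
    qed
  qed
  also have "\<dots> \<le> L * (1/2)^n * \<delta>"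
    using Suc.prems L_nonneg by (intro mult_left_mono) auto
  also have "\<dots> \<le> (1/2) ^ Suc n" using mult_right_mono[OF \<delta>L, of "(1/2)^n"] by (simp add: algebra_simps)
  finally show ?case by simp
qed

lemma picard_iterate_cauchy_le:
  assumes "t \<in> S" "n \<le> m"
  shows "norm (picard_iterate m t - picard_iterate n t) \<le> 2 * (1/2)^n"
proof -
  have telescope: "norm (picard_iterate (n + k) t - picard_iterate n t) \<le> 2 * (1/2)^n - 2 * (1/2)^(n + k)"
    for k
  proof (induction k)
    case (Suc k)
    have "picard_iterate (n + Suc k) t - picard_iterate n t
        = (picard_iterate (Suc (n + k)) t - picard_iterate (n + k) t)
          + (picard_iterate (n + k) t - picard_iterate n t)"
      by simp
    then have "norm (picard_iterate (n + Suc k) t - picard_iterate n t)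
        \<le> norm (picard_iterate (Suc (n + k)) t - picard_iterate (n + k) t)
          + norm (picard_iterate (n + k) t - picard_iterate n t)"
      by (metis norm_triangle_ineq)
    also have "\<dots> \<le> (1/2)^(n + k) + (2 * (1/2)^n - 2 * (1/2)^(n + k))"
      using picard_iterate_step_le[OF assms(1)] Suc by (rule add_mono)
    finally show ?case by simp
  qed simp
  obtain k where m: "m = n + k" using le_Suc_ex[OF assms(2)] by blast
  have "0 \<le> 2 * (1/2::real)^(n + k)" by simp
  then show ?thesis unfolding m using telescope[of k] by linarith
qed

lemma picard_iterate_Cauchy:
  assumes t: "t \<in> S"
  shows "Cauchy (\<lambda>n. picard_iterate n t)"
proof (rule metric_CauchyI)
  fix e :: real assume "e > 0"
  moreover have "(\<lambda>n. 2 * (1/2::real)^n) \<longlonglongrightarrow> 0"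
    by (intro tendsto_mult_right_zero LIMSEQ_power_zero) auto
  ultimately have "\<forall>\<^sub>F n in sequentially. 2 * (1/2::real)^n < e"
    by (simp add: order_tendsto_iff)
  then obtain N where N: "\<And>n. n \<ge> N \<Longrightarrow> 2 * (1/2::real)^n < e"
    unfolding eventually_sequentially by blast
  have "dist (picard_iterate m t) (picard_iterate n t) < e" if "N \<le> m" "N \<le> n" for m n
  proof (cases "n \<le> m")
    case True
    then show ?thesis using picard_iterate_cauchy_le[OF t True] N[of n] that
      by (simp add: dist_norm)
  next
    case False
    then show ?thesis using picard_iterate_cauchy_le[OF t, of m n] N[of m] that
      by (simp add: dist_norm norm_minus_commute)
  qed
  then show "\<exists>N. \<forall>m\<ge>N. \<forall>n\<ge>N. dist (picard_iterate m t) (picard_iterate n t) < e" by blast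
qed

lemma picard_local_solution:
  "\<exists>z. z t0 = p \<and> (\<forall>t\<in>{t0 - \<delta><..<t0 + \<delta>}. (z has_vector_derivative F (z t)) (at t))"
proof -
  define \<phi> where "\<phi> t = lim (\<lambda>n. picard_iterate n t)" for t
  have conv: "(\<lambda>n. picard_iterate n t) \<longlonglongrightarrow> \<phi> t" if "t \<in> S" for t
    using picard_iterate_Cauchy[OF that] by (simp add: \<phi>_def Cauchy_convergent_iff convergent_LIMSEQ_iff)
  have limit_le: "norm (\<phi> t - picard_iterate n t) \<le> 2 * (1/2)^n" if "t \<in> S" for t n
    using picard_iterate_cauchy_le[OF that]
    by (intro LIMSEQ_le_const2[OF tendsto_norm[OF tendsto_diff[OF conv[OF that] tendsto_const]]]) auto
  have limit_in_cball: "\<phi> t \<in> cball p 1" if "t \<in> S" for t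
    using picard_iterate_in_cball that
    by (intro closed_sequentially[OF closed_cball _ conv[OF that]]) auto
  obtain g where g: "\<forall>t\<in>S. (\<lambda>n. picard_iterate (Suc n) t) \<longlonglongrightarrow> g t \<and>
      (g has_derivative (\<lambda>h. h *\<^sub>R F (\<phi> t))) (at t within S)"
  proof -
    have "\<exists>g. \<forall>t\<in>S. (\<lambda>n. picard_iterate (Suc n) t) \<longlonglongrightarrow> g t \<and>
      (g has_derivative (\<lambda>h. h *\<^sub>R F (\<phi> t))) (at t within S)"
    proof (rule has_derivative_sequence[where f'="\<lambda>n t h. h *\<^sub>R F (picard_iterate n t)"])
      show "(picard_iterate (Suc n) has_derivative (\<lambda>h. h *\<^sub>R F (picard_iterate n t))) (at t within S)"
        if "t \<in> S" for n t
        using picard_iterate_derivative[OF that] by (simp add: has_vector_derivative_def)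
      show "(\<lambda>n. picard_iterate (Suc n) t0) \<longlonglongrightarrow> p" by simp
      fix e :: real assume "0 < e"
      moreover have "(\<lambda>n. 2 * L * (1/2::real)^n) \<longlonglongrightarrow> 0"
        by (intro tendsto_mult_right_zero LIMSEQ_power_zero) auto
      ultimately have "\<forall>\<^sub>F n in sequentially. 2 * L * (1/2::real)^n < e"
        by (simp add: order_tendsto_iff)
      then show "\<forall>\<^sub>F n in sequentially. \<forall>t\<in>S. \<forall>h.
          norm (h *\<^sub>R F (picard_iterate n t) - h *\<^sub>R F (\<phi> t)) \<le> e * norm h"
      proof eventually_elim
        case (elim n)
        show ?case
        proof (intro ballI allI)
          fix t h assume t: "t \<in> S"
          have "norm (F (picard_iterate n t) - F (\<phi> t)) \<le> L * norm (picard_iterate n t - \<phi> t)"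
            using lipschitz_on_normD[OF lipschitz] picard_iterate_in_cball limit_in_cball t by blast
          also have "\<dots> \<le> L * (2 * (1/2)^n)"
            using limit_le[OF t, of n] L_nonneg by (simp add: mult_left_mono norm_minus_commute)
          finally have "norm (F (picard_iterate n t) - F (\<phi> t)) \<le> e" using elim by simp
          then have "\<bar>h\<bar> * norm (F (picard_iterate n t) - F (\<phi> t)) \<le> \<bar>h\<bar> * e"
            by (rule mult_left_mono) simp
          then show "norm (h *\<^sub>R F (picard_iterate n t) - h *\<^sub>R F (\<phi> t)) \<le> e * norm h"
            by (simp add: scaleR_right_diff_distrib[symmetric] mult.commute)
        qed
      qed
    qed (use t0_in in auto)
    then show ?thesis using that by blast
  qed
  have g_eq: "g t = \<phi> t" if "t \<in> S" for t
    using g that LIMSEQ_unique[OF _ LIMSEQ_Suc[OF conv[OF that]]] by blast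
  show ?thesis
  proof (intro exI conjI ballI)
    have "(\<lambda>n. picard_iterate (Suc n) t0) \<longlonglongrightarrow> g t0" using g t0_in by blast
    then show "g t0 = p" by (simp add: LIMSEQ_const_iff)
    fix t assume t: "t \<in> {t0 - \<delta><..<t0 + \<delta>}"
    then have "(g has_vector_derivative F (g t)) (at t within S)"
      using g g_eq by (simp add: has_vector_derivative_def)
    moreover have "at t within S = at t" by (rule at_within_Icc_at) (use t in auto)
    ultimately show "(g has_vector_derivative F (g t)) (at t)" by simp
  qed
qed

end

section \<open>Autonomous systems with a locally Lipschitz field\<close>

lemma solution_open_interval:
  assumes "is_solution F I x"
  shows "open I" "is_interval I" "I \<noteq> {}"
  using assms by (simp_all add: is_solution_def)

lemma solution_derivative:
  "is_solution F I x \<Longrightarrow> t \<in> I \<Longrightarrow> (x has_vector_derivative F (x t)) (at t)"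
  by (simp add: is_solution_def)

lemma solution_isCont: "is_solution F I x \<Longrightarrow> t \<in> I \<Longrightarrow> isCont x t"
  using solution_derivative has_vector_derivative_continuous by blast

lemma has_vector_derivative_components:
  assumes "(x has_vector_derivative v) F"
  shows "((\<lambda>t. fst (x t)) has_real_derivative fst v) F"
    and "((\<lambda>t. snd (x t)) has_real_derivative snd v) F"
  using has_derivative_fst[OF assms[unfolded has_vector_derivative_def]]
    has_derivative_snd[OF assms[unfolded has_vector_derivative_def]]
  by (auto simp: has_real_derivative_iff_has_vector_derivative has_vector_derivative_def)

lemma constant_solution:
  "F q = 0 \<Longrightarrow> open K \<Longrightarrow> is_interval K \<Longrightarrow> K \<noteq> {} \<Longrightarrow> is_solution F K (\<lambda>t. q)"
  by (simp add: is_solution_def)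

lemma solution_Un:
  assumes x: "is_solution F I x" and z: "is_solution F J z"
    and agree: "\<And>t. t \<in> I \<Longrightarrow> t \<in> J \<Longrightarrow> x t = z t" and "I \<inter> J \<noteq> {}"
  shows "is_solution F (I \<union> J) (\<lambda>t. if t \<in> I then x t else z t)"
  unfolding is_solution_def
proof (intro conjI ballI)
  note I = solution_open_interval[OF x] and J = solution_open_interval[OF z]
  show "open (I \<union> J)" "I \<union> J \<noteq> {}" using I J by auto
  have "connected (I \<union> J)"
    using I J \<open>I \<inter> J \<noteq> {}\<close> by (intro connected_Un) (simp_all add: is_interval_connected_1)
  then show "is_interval (I \<union> J)" by (simp add: is_interval_connected_1)
  fix t assume t: "t \<in> I \<union> J"
  show "((\<lambda>t. if t \<in> I then x t else z t) has_vector_derivative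
      F (if t \<in> I then x t else z t)) (at t)"
  proof (cases "t \<in> I")
    case True
    have "((\<lambda>t. if t \<in> I then x t else z t) has_vector_derivative F (x t)) (at t)"
      by (rule has_vector_derivative_transform_within_open[OF solution_derivative[OF x True], where S=I])
         (use I True in auto)
    then show ?thesis using True by simp
  next
    case False
    then have "t \<in> J" using t by blast
    have "((\<lambda>t. if t \<in> I then x t else z t) has_vector_derivative F (z t)) (at t)"
      by (rule has_vector_derivative_transform_within_open[OF solution_derivative[OF z \<open>t \<in> J\<close>], where S=J])
         (use J \<open>t \<in> J\<close> agree in auto)
    then show ?thesis using False by simp
  qed
qed

locale lipschitz_field =
  fixes F :: "real \<times> real \<Rightarrow> real \<times> real"
  assumes lipschitz_on_cball: "\<exists>L. L-lipschitz_on (cball 0 R) F"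
begin

lemma local_existence:
  "\<exists>\<delta>>0. \<forall>p t0. norm p \<le> R \<longrightarrow> (\<exists>z. z t0 = p \<and> is_solution F {t0 - \<delta><..<t0 + \<delta>} z)"
proof -
  obtain L where L: "L-lipschitz_on (cball 0 (\<bar>R\<bar> + 1)) F" using lipschitz_on_cball by blast
  have L0: "0 \<le> L" using L by (rule lipschitz_on_nonneg)
  define M where "M = norm (F 0) + L * (\<bar>R\<bar> + 1)"
  have M0: "M \<ge> 0" using L0 by (simp add: M_def)
  define \<delta> where "\<delta> = 1 / (M + 2 * L + 1)"
  have \<delta>: "\<delta> > 0" "\<delta> * M \<le> 1" "\<delta> * L \<le> 1/2"
    using L0 M0 by (simp_all add: \<delta>_def field_simps)
  have "\<exists>z. z t0 = p \<and> is_solution F {t0 - \<delta><..<t0 + \<delta>} z" if p: "norm p \<le> R" for p t0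
  proof -
    have sub: "cball p 1 \<subseteq> cball 0 (\<bar>R\<bar> + 1)"
    proof
      fix y assume "y \<in> cball p 1"
      moreover have "norm y \<le> norm p + norm (y - p)" by (rule norm_triangle_sub)
      ultimately show "y \<in> cball 0 (\<bar>R\<bar> + 1)" using p by (simp add: dist_norm norm_minus_commute)
    qed
    have Lp: "L-lipschitz_on (cball p 1) F" using lipschitz_on_mono[OF L sub order_refl] .
    have "norm (F x) \<le> M" if "x \<in> cball p 1" for x
    proof -
      have x: "x \<in> cball 0 (\<bar>R\<bar> + 1)" using sub that by blast
      have "norm (F x - F 0) \<le> L * norm (x - 0)"
        using lipschitz_on_normD[OF L x, of 0] by simp
      moreover have "L * norm x \<le> L * (\<bar>R\<bar> + 1)" using x L0 by (simp add: mult_left_mono)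
      ultimately show ?thesis using norm_triangle_ineq2[of "F x" "F 0"] by (simp add: M_def)
    qed
    from picard_local_solution[OF Lp this \<delta>] obtain z
      where "z t0 = p" "\<forall>t\<in>{t0 - \<delta><..<t0 + \<delta>}. (z has_vector_derivative F (z t)) (at t)"
      by blast
    then show ?thesis using \<delta>(1) by (auto simp: is_solution_def is_interval_1)
  qed
  then show ?thesis using \<delta>(1) by blast
qed

lemma solutions_agree:
  assumes x: "is_solution F I x" and y: "is_solution F J y"
    and t1: "t1 \<in> I" "t1 \<in> J" "x t1 = y t1" and t: "t \<in> I" "t \<in> J"
  shows "x t = y t"
proof -
  define a b where "a = min t t1" and "b = max t t1"
  have ab: "a \<in> I \<inter> J" "b \<in> I \<inter> J" using t t1 by (simp_all add: a_def b_def min_def max_def)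
  have K: "is_interval (I \<inter> J)"
    using solution_open_interval(2)[OF x] solution_open_interval(2)[OF y] by (rule is_interval_Int)
  have sub: "\<tau> \<in> I" "\<tau> \<in> J" if "\<tau> \<in> {a..b}" for \<tau>
    using K[unfolded is_interval_1, rule_format, OF ab] that by auto
  have cx: "continuous_on {a..b} x"
    by (rule continuous_at_imp_continuous_on, rule ballI) (use sub solution_isCont[OF x] in blast)
  have cy: "continuous_on {a..b} y"
    by (rule continuous_at_imp_continuous_on, rule ballI) (use sub solution_isCont[OF y] in blast)
  obtain Rx where Rx: "\<forall>z\<in>x ` {a..b}. norm z \<le> Rx"
    using compact_imp_bounded[OF compact_continuous_image[OF cx compact_Icc]] unfolding bounded_iff by blast
  obtain Ry where Ry: "\<forall>z\<in>y ` {a..b}. norm z \<le> Ry"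
    using compact_imp_bounded[OF compact_continuous_image[OF cy compact_Icc]] unfolding bounded_iff by blast
  have R: "x \<tau> \<in> cball 0 (max Rx Ry)" "y \<tau> \<in> cball 0 (max Rx Ry)" if "\<tau> \<in> {a..b}" for \<tau>
    using bspec[OF Rx imageI[OF that]] bspec[OF Ry imageI[OF that]] by simp_all
  obtain L where L: "L-lipschitz_on (cball 0 (max Rx Ry)) F" using lipschitz_on_cball by blast
  define e where "e \<tau> = (fst (x \<tau>) - fst (y \<tau>))\<^sup>2 + (snd (x \<tau>) - snd (y \<tau>))\<^sup>2" for \<tau>
  define e' where "e' \<tau> = 2 * (fst (x \<tau>) - fst (y \<tau>)) * fst (F (x \<tau>) - F (y \<tau>))
      + 2 * (snd (x \<tau>) - snd (y \<tau>)) * snd (F (x \<tau>) - F (y \<tau>))" for \<tau>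
  have e_norm: "e \<tau> = (norm (x \<tau> - y \<tau>))\<^sup>2" for \<tau>
    by (simp add: e_def norm_Pair norm_prod_def)
  have "e t = 0"
  proof (rule gronwall_vanishing[where e=e and e'=e' and M="2 * L" and a=a and b=b and tz=t1])
    fix \<tau> assume \<tau>: "a \<le> \<tau>" "\<tau> \<le> b"
    have \<tau>_in: "\<tau> \<in> I" "\<tau> \<in> J" using sub \<tau> by simp_all
    show "(e has_real_derivative e' \<tau>) (at \<tau>)"
      unfolding e_def e'_def using \<tau>_in
      using has_vector_derivative_components[OF solution_derivative[OF x]]
        has_vector_derivative_components[OF solution_derivative[OF y]]
      by (auto intro!: derivative_eq_intros simp: algebra_simps)
    have "e' \<tau> = 2 * inner (x \<tau> - y \<tau>) (F (x \<tau>) - F (y \<tau>))"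
      by (simp add: e'_def inner_prod_def algebra_simps)
    then have "\<bar>e' \<tau>\<bar> \<le> 2 * (norm (x \<tau> - y \<tau>) * norm (F (x \<tau>) - F (y \<tau>)))"
      using Cauchy_Schwarz_ineq2[of "x \<tau> - y \<tau>" "F (x \<tau>) - F (y \<tau>)"] by simp
    also have "\<dots> \<le> 2 * (norm (x \<tau> - y \<tau>) * (L * norm (x \<tau> - y \<tau>)))"
      using lipschitz_on_normD[OF L] R \<tau> by (simp add: mult_left_mono)
    also have "\<dots> = 2 * L * e \<tau>" by (simp add: e_norm power2_eq_square)
    finally show "\<bar>e' \<tau>\<bar> \<le> 2 * L * e \<tau>" .
  qed (use t t1 in \<open>auto simp: a_def b_def e_def\<close>)
  then show ?thesis using e_norm[of t] by simp
qed

lemma solution_through_equilibrium: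
  assumes z: "is_solution F K z" and "F q = 0" "t \<in> K" "z t = q" "t' \<in> K"
  shows "z t' = q"
proof -
  have "is_solution F K (\<lambda>_. q)"
    using constant_solution[of F q K] assms(2) solution_open_interval[OF z] by blast
  from solutions_agree[OF z this assms(3) assms(3) _ assms(5) assms(5)] assms(4) show ?thesis
    by simp
qed

lemma maximal_solution_exists: "\<exists>I x. is_maximal_solution F I x \<and> t0 \<in> I \<and> x t0 = p"
proof -
  define Sols where "Sols = {(J, y). is_solution F J y \<and> t0 \<in> J \<and> y t0 = p}"
  define I where "I = \<Union> (fst ` Sols)"
  define x where "x t = (SOME y. \<exists>J. (J, y) \<in> Sols \<and> t \<in> J) t" for t
  have memI: "t \<in> I \<longleftrightarrow> (\<exists>J y. (J, y) \<in> Sols \<and> t \<in> J)" for t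
    unfolding I_def by force
  have agree: "y1 t = y2 t" if "(J1, y1) \<in> Sols" "(J2, y2) \<in> Sols" "t \<in> J1" "t \<in> J2" for J1 J2 y1 y2 t
    using solutions_agree[of J1 y1 J2 y2 t0 t] that by (auto simp: Sols_def)
  have x_eq: "x t = y t" if "(J, y) \<in> Sols" "t \<in> J" for J y t
  proof -
    have ex: "\<exists>y'. \<exists>J'. (J', y') \<in> Sols \<and> t \<in> J'" using that by blast
    obtain J' where J': "(J', SOME y. \<exists>J. (J, y) \<in> Sols \<and> t \<in> J) \<in> Sols \<and> t \<in> J'"
      using someI_ex[OF ex] by blast
    then show ?thesis unfolding x_def using agree[OF _ that(1) _ that(2)] by blast
  qed
  obtain \<delta> where \<delta>: "\<delta> > 0" "\<forall>p' t0'. norm p' \<le> norm p \<longrightarrow>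
      (\<exists>z. z t0' = p' \<and> is_solution F {t0' - \<delta><..<t0' + \<delta>} z)"
    using local_existence[of "norm p"] by blast
  obtain z where z: "z t0 = p" "is_solution F {t0 - \<delta><..<t0 + \<delta>} z"
    using \<delta>(2) by blast
  have zS: "({t0 - \<delta><..<t0 + \<delta>}, z) \<in> Sols"
    using z \<delta>(1) by (simp add: Sols_def)
  have t0I: "t0 \<in> I" using zS \<delta>(1) memI by auto
  have xt0: "x t0 = p" using x_eq[OF zS] \<delta>(1) z(1) by auto
  have openI: "open I" unfolding I_def by (auto simp: Sols_def is_solution_def)
  have "t0 \<in> \<Inter> (fst ` Sols)" by (auto simp: Sols_def)
  then have "connected I" unfolding I_def
    by (intro connected_Union) (auto simp: Sols_def is_solution_def is_interval_connected_1)
  then have intI: "is_interval I" by (simp add: is_interval_connected_1)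
  have solI: "is_solution F I x"
    unfolding is_solution_def
  proof (intro conjI ballI)
    show "open I" "is_interval I" by (fact openI, fact intI)
    show "I \<noteq> {}" using t0I by blast
    fix t assume "t \<in> I"
    then obtain J y where Jy: "(J, y) \<in> Sols" "t \<in> J" using memI by blast
    have sol: "is_solution F J y" using Jy by (auto simp: Sols_def)
    have "(x has_vector_derivative F (y t)) (at t)"
      by (rule has_vector_derivative_transform_within_open[OF solution_derivative[OF sol Jy(2)], where S=J])
         (use sol Jy x_eq in \<open>auto simp: is_solution_def\<close>)
    then show "(x has_vector_derivative F (x t)) (at t)" using x_eq[OF Jy] by simp
  qed
  have "is_maximal_solution F I x"
    unfolding is_maximal_solution_def
  proof (intro conjI allI impI solI)
    fix J y assume H: "is_solution F J y \<and> I \<subseteq> J \<and> (\<forall>t\<in>I. y t = x t)"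
    then have "(J, y) \<in> Sols" using t0I xt0 by (auto simp: Sols_def)
    then have "J \<subseteq> I" by (auto simp: I_def)
    then show "J = I" using H by blast
  qed
  then show ?thesis using t0I xt0 by blast
qed

lemma maximal_solution_margin:
  "\<exists>\<delta>>0. \<forall>I x t1. is_maximal_solution F I x \<longrightarrow> t1 \<in> I \<longrightarrow> norm (x t1) \<le> R \<longrightarrow>
      {t1 - \<delta><..<t1 + \<delta>} \<subseteq> I"
proof -
  obtain \<delta> where \<delta>: "\<delta> > 0"
    and ex: "\<And>p t0. norm p \<le> R \<Longrightarrow> \<exists>z. z t0 = p \<and> is_solution F {t0 - \<delta><..<t0 + \<delta>} z"
    using local_existence[of R] by blast
  have "{t1 - \<delta><..<t1 + \<delta>} \<subseteq> I"
    if mx: "is_maximal_solution F I x" and t1: "t1 \<in> I" "norm (x t1) \<le> R" for I x t1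
  proof -
    obtain z where z: "z t1 = x t1" "is_solution F {t1 - \<delta><..<t1 + \<delta>} z" using ex t1 by blast
    have sol: "is_solution F I x" using mx by (simp add: is_maximal_solution_def)
    have t1_in: "t1 \<in> {t1 - \<delta><..<t1 + \<delta>}" using \<delta> by simp
    have "is_solution F (I \<union> {t1 - \<delta><..<t1 + \<delta>}) (\<lambda>t. if t \<in> I then x t else z t)"
    proof (rule solution_Un[OF sol z(2)])
      show "x t = z t" if "t \<in> I" "t \<in> {t1 - \<delta><..<t1 + \<delta>}" for t
        using solutions_agree[OF sol z(2) t1(1) t1_in z(1)[symmetric] that] .
      show "I \<inter> {t1 - \<delta><..<t1 + \<delta>} \<noteq> {}" using t1(1) t1_in by blast
    qed
    then have "I \<union> {t1 - \<delta><..<t1 + \<delta>} = I"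
      using mx[unfolded is_maximal_solution_def, THEN conjunct2, rule_format,
          of "I \<union> {t1 - \<delta><..<t1 + \<delta>}" "\<lambda>t. if t \<in> I then x t else z t"]
      by simp
    then show ?thesis by blast
  qed
  then show ?thesis using \<delta> by blast
qed

lemma maximal_solution_unbounded_above:
  assumes mx: "is_maximal_solution F I x" and t0: "t0 \<in> I"
    and bounded: "\<And>t. t \<in> I \<Longrightarrow> t \<ge> t0 \<Longrightarrow> norm (x t) \<le> R"
  shows "\<not> bdd_above I"
proof
  assume bdd: "bdd_above I"
  obtain \<delta> where "\<delta> > 0" and margin: "\<forall>I x t1. is_maximal_solution F I x \<longrightarrow> t1 \<in> I \<longrightarrow>
      norm (x t1) \<le> R \<longrightarrow> {t1 - \<delta><..<t1 + \<delta>} \<subseteq> I"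
    using maximal_solution_margin[of R] by blast
  note \<delta> = \<open>\<delta> > 0\<close> margin[rule_format, OF mx]
  obtain t' where t': "t' \<in> I" "Sup I - \<delta>/2 < t'"
    using less_cSup_iff[OF _ bdd, of "Sup I - \<delta>/2"] t0 \<delta>(1) by auto
  define t1 where "t1 = max t0 t'"
  have t1: "t1 \<in> I" "t1 \<ge> t0" "t1 \<ge> t'" using t0 t' by (simp_all add: t1_def max_def)
  then have "{t1 - \<delta><..<t1 + \<delta>} \<subseteq> I" using \<delta>(2)[OF t1(1) bounded[OF t1(1,2)]] by simp
  moreover have "t1 + \<delta>/2 \<in> {t1 - \<delta><..<t1 + \<delta>}" using \<delta>(1) by simp
  ultimately have "t1 + \<delta>/2 \<le> Sup I" using cSup_upper[OF _ bdd] by blast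
  then show False using t' t1(3) by linarith
qed

lemma maximal_solution_unbounded_below:
  assumes mx: "is_maximal_solution F I x" and t0: "t0 \<in> I"
    and bounded: "\<And>t. t \<in> I \<Longrightarrow> t \<le> t0 \<Longrightarrow> norm (x t) \<le> R"
  shows "\<not> bdd_below I"
proof
  assume bdd: "bdd_below I"
  obtain \<delta> where "\<delta> > 0" and margin: "\<forall>I x t1. is_maximal_solution F I x \<longrightarrow> t1 \<in> I \<longrightarrow>
      norm (x t1) \<le> R \<longrightarrow> {t1 - \<delta><..<t1 + \<delta>} \<subseteq> I"
    using maximal_solution_margin[of R] by blast
  note \<delta> = \<open>\<delta> > 0\<close> margin[rule_format, OF mx]
  obtain t' where t': "t' \<in> I" "t' < Inf I + \<delta>/2"
    using cInf_less_iff[OF _ bdd, of "Inf I + \<delta>/2"] t0 \<delta>(1) by auto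
  define t1 where "t1 = min t0 t'"
  have t1: "t1 \<in> I" "t1 \<le> t0" "t1 \<le> t'" using t0 t' by (simp_all add: t1_def min_def)
  then have "{t1 - \<delta><..<t1 + \<delta>} \<subseteq> I" using \<delta>(2)[OF t1(1) bounded[OF t1(1,2)]] by simp
  moreover have "t1 - \<delta>/2 \<in> {t1 - \<delta><..<t1 + \<delta>}" using \<delta>(1) by simp
  ultimately have "Inf I \<le> t1 - \<delta>/2" using cInf_lower[OF _ bdd] by blast
  then show False using t' t1(3) by linarith
qed

end

section \<open>Ends of the existence interval and the Poincare sphere\<close>

lemma lower_end_neq_bot [simp]: "lower_end K \<noteq> bot"
  by (simp add: lower_end_def)

lemma upper_end_neq_bot [simp]: "upper_end K \<noteq> bot"
  by (simp add: upper_end_def)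

lemma lower_end_UNIV: "lower_end (UNIV :: real set) = at_bot"
proof -
  have "\<not> bdd_below (UNIV :: real set)"
  proof
    assume "bdd_below (UNIV :: real set)"
    then obtain M :: real where "\<And>x. M \<le> x" unfolding bdd_below_def by blast
    from this[of "M - 1"] show False by simp
  qed
  then show ?thesis by (simp add: lower_end_def)
qed

lemma upper_end_UNIV: "upper_end (UNIV :: real set) = at_top"
proof -
  have "\<not> bdd_above (UNIV :: real set)"
  proof
    assume "bdd_above (UNIV :: real set)"
    then obtain M :: real where "\<And>x. x \<le> M" unfolding bdd_above_def by blast
    from this[of "M + 1"] show False by simp
  qed
  then show ?thesis by (simp add: upper_end_def)
qed

lemma open_real_has_smaller:
  fixes K :: "real set"
  assumes "open K" "t0 \<in> K"
  shows "\<exists>t\<in>K. t < t0"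
proof -
  obtain e where e: "e > 0" "ball t0 e \<subseteq> K" using assms openE by blast
  then have "t0 - e/2 \<in> K" by (auto simp: dist_real_def)
  then show ?thesis using e by (intro bexI[where x="t0 - e/2"]) auto
qed

lemma open_real_has_greater:
  fixes K :: "real set"
  assumes "open K" "t0 \<in> K"
  shows "\<exists>t\<in>K. t > t0"
proof -
  obtain e where e: "e > 0" "ball t0 e \<subseteq> K" using assms openE by blast
  then have "t0 + e/2 \<in> K" by (auto simp: dist_real_def)
  then show ?thesis using e by (intro bexI[where x="t0 + e/2"]) auto
qed

lemma eventually_lower_end:
  fixes K :: "real set"
  assumes K: "open K" "is_interval K" and t0: "t0 \<in> K"
  shows "\<forall>\<^sub>F t in lower_end K. t \<in> K \<and> t < t0"
proof (cases "bdd_below K")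
  case True
  obtain t1 where t1: "t1 \<in> K" "t1 < t0" using open_real_has_smaller[OF K(1) t0] by blast
  have lt: "Inf K < t0" using True t1 by (meson cInf_lower order_le_less_trans)
  have "\<forall>\<^sub>F t in at_right (Inf K). t \<in> K \<and> t < t0"
    using eventually_at_right_real[OF lt]
  proof (rule eventually_mono)
    fix t assume t: "t \<in> {Inf K<..<t0}"
    then obtain k where "k \<in> K" "k < t" using cInf_less_iff[of K t] t0 True by auto
    then show "t \<in> K \<and> t < t0" using K(2)[unfolded is_interval_1, rule_format, of k t0 t] t t0 by auto
  qed
  then show ?thesis using True by (simp add: lower_end_def)
next
  case False
  have "\<forall>\<^sub>F t in at_bot. t < t0" using eventually_at_bot_dense by blast
  then have "\<forall>\<^sub>F t in at_bot. t \<in> K \<and> t < t0"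
  proof (rule eventually_mono)
    fix t assume t: "t < t0"
    obtain k where "k \<in> K" "k < t" using False unfolding bdd_below_def by (meson not_le)
    then show "t \<in> K \<and> t < t0" using K(2)[unfolded is_interval_1, rule_format, of k t0 t] t t0 by auto
  qed
  then show ?thesis using False by (simp add: lower_end_def)
qed

lemma eventually_upper_end:
  fixes K :: "real set"
  assumes K: "open K" "is_interval K" and t0: "t0 \<in> K"
  shows "\<forall>\<^sub>F t in upper_end K. t \<in> K \<and> t > t0"
proof (cases "bdd_above K")
  case True
  obtain t1 where t1: "t1 \<in> K" "t1 > t0" using open_real_has_greater[OF K(1) t0] by blast
  have lt: "t0 < Sup K" using True t1 by (meson cSup_upper order_less_le_trans)
  have "\<forall>\<^sub>F t in at_left (Sup K). t \<in> K \<and> t > t0"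
    using eventually_at_left_real[OF lt]
  proof (rule eventually_mono)
    fix t assume t: "t \<in> {t0<..<Sup K}"
    then obtain k where "k \<in> K" "t < k" using less_cSup_iff[of K t] t0 True by auto
    then show "t \<in> K \<and> t0 < t" using K(2)[unfolded is_interval_1, rule_format, of t0 k t] t t0 by auto
  qed
  then show ?thesis using True by (simp add: upper_end_def)
next
  case False
  have "\<forall>\<^sub>F t in at_top. t > t0" by simp
  then have "\<forall>\<^sub>F t in at_top. t \<in> K \<and> t > t0"
  proof (rule eventually_mono)
    fix t assume t: "t0 < t"
    obtain k where "k \<in> K" "t < k" using False unfolding bdd_above_def by (meson not_le)
    then show "t \<in> K \<and> t0 < t" using K(2)[unfolded is_interval_1, rule_format, of t0 k t] t t0 by auto
  qed
  then show ?thesis using False by (simp add: upper_end_def)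
qed

lemma poincare_radius_pos: "sqrt (1 + (fst p)\<^sup>2 + (snd p)\<^sup>2) > 0"
  by (simp add: add_pos_nonneg)

lemma poincare_neq_P1: "poincare p \<noteq> P1"
  using poincare_radius_pos[of p] by (simp add: poincare_def P1_def Let_def)

lemma tendsto_poincare_iff: "((\<lambda>t. poincare (x t)) \<longlongrightarrow> poincare p) F \<longleftrightarrow> (x \<longlongrightarrow> p) F"
proof
  define unproject where
    "unproject = (\<lambda>q :: real \<times> real \<times> real. (fst q / snd (snd q), fst (snd q) / snd (snd q)))"
  have unproject_poincare: "unproject (poincare q) = q" for q
    using poincare_radius_pos[of q] by (simp add: unproject_def poincare_def Let_def)
  have "isCont unproject (poincare p)"
    using poincare_radius_pos[of p] unfolding unproject_def
    by (intro continuous_intros) (simp_all add: poincare_def Let_def)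
  moreover assume "((\<lambda>t. poincare (x t)) \<longlongrightarrow> poincare p) F"
  ultimately have "((\<lambda>t. unproject (poincare (x t))) \<longlongrightarrow> unproject (poincare p)) F"
    by (rule isCont_tendsto_compose)
  then show "(x \<longlongrightarrow> p) F" by (simp add: unproject_poincare)
next
  have "isCont poincare p"
    using poincare_radius_pos[of p] unfolding poincare_def Let_def by (intro continuous_intros) auto
  moreover assume "(x \<longlongrightarrow> p) F"
  ultimately show "((\<lambda>t. poincare (x t)) \<longlongrightarrow> poincare p) F"
    by (rule isCont_tendsto_compose)
qed

lemma tendsto_poincare_P1:
  fixes s c :: "'a \<Rightarrow> real"
  assumes s: "filterlim s at_top F" and c: "\<forall>\<^sub>F t in F. \<bar>c t\<bar> \<le> C"
  shows "((\<lambda>t. poincare (s t, c t)) \<longlongrightarrow> P1) F"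
proof -
  define r where "r t = sqrt (1 + (s t)\<^sup>2 + (c t)\<^sup>2)" for t
  have spos: "\<forall>\<^sub>F t in F. s t > 0" using s by (simp add: filterlim_at_top_dense)
  have i0: "((\<lambda>t. inverse (s t)) \<longlongrightarrow> 0) F" by (rule tendsto_inverse_0_at_top[OF s])
  have cs0: "((\<lambda>t. c t / s t) \<longlongrightarrow> 0) F"
  proof (rule tendsto_0_le[OF i0, where K=C, unfolded mult.commute[of _ C]])
    show "\<forall>\<^sub>F t in F. norm (c t / s t) \<le> C * norm (inverse (s t))"
      using c by (rule eventually_mono) (simp add: divide_inverse abs_mult mult_right_mono)
  qed
  have q: "((\<lambda>t. sqrt ((inverse (s t))\<^sup>2 + 1 + (c t / s t)\<^sup>2)) \<longlongrightarrow> 1) F"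
    using tendsto_real_sqrt[OF tendsto_add[OF tendsto_add[OF tendsto_power[OF i0, of 2] tendsto_const[of 1]]
          tendsto_power[OF cs0, of 2]]]
    by simp
  have eq: "\<forall>\<^sub>F t in F. sqrt ((inverse (s t))\<^sup>2 + 1 + (c t / s t)\<^sup>2) = r t / s t"
    using spos
  proof eventually_elim
    case (elim t)
    have "(inverse (s t))\<^sup>2 + 1 + (c t / s t)\<^sup>2 = (1 + (s t)\<^sup>2 + (c t)\<^sup>2) / (s t)\<^sup>2"
      using elim by (simp add: field_simps power2_eq_square)
    then have "sqrt ((inverse (s t))\<^sup>2 + 1 + (c t / s t)\<^sup>2) = sqrt (1 + (s t)\<^sup>2 + (c t)\<^sup>2) / s t"
      using elim by (simp add: real_sqrt_divide)
    then show ?case by (simp add: r_def)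
  qed
  have rs: "((\<lambda>t. r t / s t) \<longlongrightarrow> 1) F" using Lim_transform_eventually[OF q eq] .
  have sr: "((\<lambda>t. s t / r t) \<longlongrightarrow> 1) F"
  proof -
    have "((\<lambda>t. inverse (r t / s t)) \<longlongrightarrow> inverse 1) F" by (rule tendsto_inverse[OF rs]) simp
    moreover have "\<forall>\<^sub>F t in F. inverse (r t / s t) = s t / r t" by simp
    ultimately show ?thesis using Lim_transform_eventually by fastforce
  qed
  have cr: "((\<lambda>t. c t / r t) \<longlongrightarrow> 0) F"
  proof -
    have "((\<lambda>t. (c t / s t) * (s t / r t)) \<longlongrightarrow> 0 * 1) F" by (rule tendsto_mult[OF cs0 sr])
    moreover have "\<forall>\<^sub>F t in F. (c t / s t) * (s t / r t) = c t / r t" using spos by eventually_elim simp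
    ultimately show ?thesis using Lim_transform_eventually by fastforce
  qed
  have ir: "((\<lambda>t. 1 / r t) \<longlongrightarrow> 0) F"
  proof -
    have "((\<lambda>t. inverse (s t) * (s t / r t)) \<longlongrightarrow> 0 * 1) F" by (rule tendsto_mult[OF i0 sr])
    moreover have "\<forall>\<^sub>F t in F. inverse (s t) * (s t / r t) = 1 / r t" using spos by eventually_elim (simp add: field_simps)
    ultimately show ?thesis using Lim_transform_eventually by fastforce
  qed
  have "((\<lambda>t. (s t / r t, c t / r t, 1 / r t)) \<longlongrightarrow> (1, 0, 0)) F"
    by (intro tendsto_Pair sr cr ir)
  then show ?thesis by (simp add: poincare_def P1_def r_def Let_def)
qed

lemma poincare_tendsto_P1_imp_at_top:
  assumes "((\<lambda>t. poincare (y t)) \<longlongrightarrow> P1) G"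
  shows "filterlim (\<lambda>t. fst (y t) + a * snd (y t) + b) at_top G"
proof -
  define r where "r t = sqrt (1 + (fst (y t))\<^sup>2 + (snd (y t))\<^sup>2)" for t
  have r_pos: "r t > 0" for t using poincare_radius_pos[of "y t"] by (simp add: r_def)
  have e: "poincare (y t) = (fst (y t) / r t, snd (y t) / r t, 1 / r t)" for t
    by (simp add: poincare_def Let_def r_def)
  have "((\<lambda>t. fst (poincare (y t))) \<longlongrightarrow> fst P1) G"
    "((\<lambda>t. fst (snd (poincare (y t)))) \<longlongrightarrow> fst (snd P1)) G"
    "((\<lambda>t. snd (snd (poincare (y t)))) \<longlongrightarrow> snd (snd P1)) G"
    by (intro tendsto_intros assms)+
  then have comps: "((\<lambda>t. fst (y t) / r t) \<longlongrightarrow> 1) G" "((\<lambda>t. snd (y t) / r t) \<longlongrightarrow> 0) G"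
      "((\<lambda>t. 1 / r t) \<longlongrightarrow> 0) G"
    by (simp_all add: e P1_def)
  have q: "((\<lambda>t. fst (y t) / r t + a * (snd (y t) / r t) + b * (1 / r t)) \<longlongrightarrow> 1 + a * 0 + b * 0) G"
    by (intro tendsto_intros comps)
  have r_top: "filterlim (\<lambda>t. inverse (1 / r t)) at_top G"
    by (rule filterlim_inverse_at_top[OF comps(3)]) (simp add: r_pos)
  have "filterlim (\<lambda>t. (fst (y t) / r t + a * (snd (y t) / r t) + b * (1 / r t)) * inverse (1 / r t))
      at_top G"
    by (rule filterlim_tendsto_pos_mult_at_top[OF q _ r_top]) simp
  moreover have "(fst (y t) / r t + a * (snd (y t) / r t) + b * (1 / r t)) * inverse (1 / r t)
      = fst (y t) + a * snd (y t) + b" for t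
    using r_pos[of t] by (simp add: field_simps)
  ultimately show ?thesis by simp
qed

section \<open>The system and its first quadrant\<close>

lemma abs_fst_le_norm: "\<bar>fst v\<bar> \<le> norm (v :: real \<times> real)"
  using norm_fst_le[of "fst v" "snd v"] by simp

lemma abs_snd_le_norm: "\<bar>snd v\<bar> \<le> norm (v :: real \<times> real)"
  using norm_snd_le[of "snd v" "fst v"] by simp

lemma norm_prod_le_abs_sum: "norm (v :: real \<times> real) \<le> \<bar>fst v\<bar> + \<bar>snd v\<bar>"
  using norm_Pair_le[of "fst v" "snd v"] by simp

locale mm_system =
  fixes k0 k1 km1 k2 eT :: real
  assumes k0: "k0 \<ge> 0" and k1: "k1 \<ge> 0" and km1: "km1 \<ge> 0" and k2: "k2 \<ge> 0" and eT: "eT \<ge> 0"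
    and k1_neq: "k1 \<noteq> 0" and k2_neq: "k2 \<noteq> 0" and inflow_dominates: "k2 * eT < k0"
begin

abbreviation "F \<equiv> mm_field k0 k1 km1 k2 eT"

lemma F_components:
  "fst (F x) = k0 - k1 * (eT - snd x) * fst x + km1 * snd x"
  "snd (F x) = k1 * (eT - snd x) * fst x - (km1 + k2) * snd x"
  by (simp_all add: mm_field_def Let_def)

lemma k1_pos: "k1 > 0" using k1 k1_neq by simp
lemma k2_pos: "k2 > 0" using k2 k2_neq by simp
lemma k0_pos: "k0 > 0" using inflow_dominates k2 eT by (smt (verit) mult_nonneg_nonneg)

lemma F_lipschitz_bound:
  assumes "norm x \<le> R" "norm y \<le> R"
  shows "norm (F x - F y) \<le> (2 * k1 * eT + 4 * k1 * R + 2 * km1 + k2) * norm (x - y)"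
proof -
  define n where "n = norm (x - y)"
  have hs: "\<bar>fst x - fst y\<bar> \<le> n" using abs_fst_le_norm[of "x - y"] by (simp add: n_def)
  have hc: "\<bar>snd x - snd y\<bar> \<le> n" using abs_snd_le_norm[of "x - y"] by (simp add: n_def)
  have c1: "\<bar>snd x\<bar> \<le> R" using abs_snd_le_norm[of x] assms by simp
  have s2: "\<bar>fst y\<bar> \<le> R" using abs_fst_le_norm[of y] assms by simp
  have R0: "0 \<le> R" using assms(1) norm_ge_zero order_trans by blast
  have prod: "\<bar>snd x * fst x - snd y * fst y\<bar> \<le> 2 * R * n"
  proof -
    have "snd x * fst x - snd y * fst y = snd x * (fst x - fst y) + fst y * (snd x - snd y)"
      by (simp add: algebra_simps)
    then have "\<bar>snd x * fst x - snd y * fst y\<bar> \<le> \<bar>snd x\<bar> * \<bar>fst x - fst y\<bar> + \<bar>fst y\<bar> * \<bar>snd x - snd y\<bar>"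
      by (metis abs_mult abs_triangle_ineq)
    also have "\<dots> \<le> R * n + R * n"
      by (intro add_mono mult_mono c1 s2 hs hc) (use R0 in auto)
    finally show ?thesis by simp
  qed
  have d1: "fst (F x - F y) = - k1 * eT * (fst x - fst y) + k1 * (snd x * fst x - snd y * fst y) + km1 * (snd x - snd y)"
    by (simp add: F_components algebra_simps)
  have d2: "snd (F x - F y) = k1 * eT * (fst x - fst y) - k1 * (snd x * fst x - snd y * fst y) - (km1 + k2) * (snd x - snd y)"
    by (simp add: F_components algebra_simps)
  have a1: "\<bar>k1 * eT * (fst x - fst y)\<bar> \<le> k1 * eT * n"
    using hs k1 eT by (simp add: abs_mult mult_left_mono)
  have a2: "\<bar>k1 * (snd x * fst x - snd y * fst y)\<bar> \<le> k1 * (2 * R * n)"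
    using prod k1 by (simp add: abs_mult mult_left_mono)
  have a3: "\<bar>km1 * (snd x - snd y)\<bar> \<le> km1 * n"
    using hc km1 by (simp add: abs_mult mult_left_mono)
  have a4: "\<bar>(km1 + k2) * (snd x - snd y)\<bar> \<le> (km1 + k2) * n"
    using hc km1 k2 by (simp add: abs_mult mult_left_mono)
  have "\<bar>fst (F x - F y)\<bar> \<le> k1 * eT * n + k1 * (2 * R * n) + km1 * n"
    unfolding d1 using a1 a2 a3 by linarith
  moreover have "\<bar>snd (F x - F y)\<bar> \<le> k1 * eT * n + k1 * (2 * R * n) + (km1 + k2) * n"
    unfolding d2 using a1 a2 a4 by linarith
  ultimately have "norm (F x - F y) \<le> (k1 * eT * n + k1 * (2 * R * n) + km1 * n) + (k1 * eT * n + k1 * (2 * R * n) + (km1 + k2) * n)"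
    using norm_prod_le_abs_sum[of "F x - F y"] by linarith
  then show ?thesis by (simp add: n_def algebra_simps)
qed

sublocale lipschitz_field F
proof
  fix R :: real
  let ?L = "2 * k1 * eT + 4 * k1 * \<bar>R\<bar> + 2 * km1 + k2"
  have "norm (F x - F y) \<le> ?L * norm (x - y)" if "x \<in> cball 0 R" "y \<in> cball 0 R" for x y
    using F_lipschitz_bound[of x "\<bar>R\<bar>" y] that by simp
  moreover have "?L \<ge> 0" using k1 eT km1 k2 by simp
  ultimately have "?L-lipschitz_on (cball 0 R) F" by (intro lipschitz_onI) (simp_all add: dist_norm)
  then show "\<exists>L. L-lipschitz_on (cball 0 R) F" ..
qed

lemma solution_component_deriv:
  assumes "is_solution F I x" "t \<in> I"
  shows "((\<lambda>t. fst (x t)) has_real_derivative k0 - k1 * (eT - snd (x t)) * fst (x t) + km1 * snd (x t)) (at t)"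
    and "((\<lambda>t. snd (x t)) has_real_derivative k1 * (eT - snd (x t)) * fst (x t) - (km1 + k2) * snd (x t)) (at t)"
  using has_vector_derivative_components[OF solution_derivative[OF assms]] by (simp_all add: F_components)

lemma c_nonneg_barrier:
  assumes "t \<le> \<tau>"
    and dc: "\<And>u. t \<le> u \<Longrightarrow> u \<le> \<tau> \<Longrightarrow> (c has_real_derivative k1 * (eT - c u) * s u - (km1 + k2) * c u) (at u)"
    and s_nonneg: "\<And>u. t \<le> u \<Longrightarrow> u \<le> \<tau> \<Longrightarrow> s u \<ge> 0" and "c t \<ge> 0"
  shows "c \<tau> \<ge> 0"
proof -
  have "- c \<tau> \<le> 0"
  proof (rule DERIV_barrier_le[where f="\<lambda>u. - c u" and f'="\<lambda>u. - (k1 * (eT - c u) * s u - (km1 + k2) * c u)"])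
    show "((\<lambda>u. - c u) has_real_derivative - (k1 * (eT - c u) * s u - (km1 + k2) * c u)) (at u)"
      if "t \<le> u" "u \<le> \<tau>" for u using DERIV_minus[OF dc[OF that]] .
    show "- (k1 * (eT - c u) * s u - (km1 + k2) * c u) \<le> 0" if u: "t \<le> u" "u \<le> \<tau>" "0 < - c u" for u
    proof -
      have "k1 * (eT - c u) * s u \<ge> 0" using k1 eT u s_nonneg[OF u(1,2)] by simp
      moreover have "(km1 + k2) * c u \<le> 0" using km1 k2 u(3) by (simp add: mult_nonneg_nonpos)
      ultimately show ?thesis by linarith
    qed
  qed (use assms in auto)
  then show ?thesis by simp
qed

lemma first_quadrant_invariant:
  assumes "0 \<le> b"
    and ds: "\<And>t. 0 \<le> t \<Longrightarrow> t \<le> b \<Longrightarrow> (s has_real_derivative k0 - k1 * (eT - c t) * s t + km1 * c t) (at t)"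
    and dc: "\<And>t. 0 \<le> t \<Longrightarrow> t \<le> b \<Longrightarrow> (c has_real_derivative k1 * (eT - c t) * s t - (km1 + k2) * c t) (at t)"
    and start: "s 0 \<ge> 0" "c 0 \<ge> 0"
  shows "s b \<ge> 0 \<and> c b \<ge> 0"
proof (rule real_interval_induct[where a=0 and b=b and P="\<lambda>\<tau>. s \<tau> \<ge> 0 \<and> c \<tau> \<ge> 0"])
  show "0 \<le> b" by (rule assms(1))
next
  fix t assume t: "0 \<le> t" "t \<le> b" and H: "\<And>\<tau>. 0 \<le> \<tau> \<Longrightarrow> \<tau> < t \<Longrightarrow> s \<tau> \<ge> 0 \<and> c \<tau> \<ge> 0"
  show "s t \<ge> 0 \<and> c t \<ge> 0"
  proof (cases "t = 0")
    case True then show ?thesis using start by simp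
  next
    case False
    then have "0 < t" using t by simp
    then show ?thesis
      using isCont_lowerbound_left[OF DERIV_isCont[OF ds[OF t]]] isCont_lowerbound_left[OF DERIV_isCont[OF dc[OF t]]] H
      by (meson order_less_imp_le)
  qed
next
  fix t assume t: "0 \<le> t" "t < b" and H: "\<And>\<tau>. 0 \<le> \<tau> \<Longrightarrow> \<tau> \<le> t \<Longrightarrow> s \<tau> \<ge> 0 \<and> c \<tau> \<ge> 0"
  have Pt: "s t \<ge> 0" "c t \<ge> 0" using H[of t] t by auto
  \<comment> \<open>On the edge \<open>s = 0\<close> of the quadrant the field points strictly inwards, \<open>s' = k0 + km1 c > 0\<close>.\<close>
  have "s t > 0 \<or> (s t \<ge> 0 \<and> k0 - k1 * (eT - c t) * s t + km1 * c t > 0)"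
    using k0_pos km1 Pt by (cases "s t > 0") (simp_all add: add_pos_nonneg)
  from DERIV_pos_right[OF ds[of t] this] obtain d1
    where d1: "d1 > 0" "\<And>h. 0 < h \<Longrightarrow> h < d1 \<Longrightarrow> s (t + h) > 0"
    using t by auto
  define d where "d = min d1 (b - t)"
  have "s \<tau> \<ge> 0 \<and> c \<tau> \<ge> 0" if \<tau>: "t < \<tau>" "\<tau> < t + d" for \<tau>
  proof -
    have s_nonneg: "s u \<ge> 0" if "t \<le> u" "u \<le> \<tau>" for u
    proof (cases "u = t")
      case False
      then have "0 < u - t" "u - t < d1" using that \<tau> by (auto simp: d_def)
      then show ?thesis using d1(2)[of "u - t"] by simp
    qed (use Pt in simp)
    have "c \<tau> \<ge> 0"
      using \<tau> t Pt(2) by (intro c_nonneg_barrier[of t \<tau> c s] dc s_nonneg) (auto simp: d_def)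
    then show ?thesis using s_nonneg[of \<tau>] \<tau> by simp
  qed
  moreover have "d > 0" using d1 t by (simp add: d_def)
  ultimately show "\<exists>d>0. \<forall>\<tau>. t < \<tau> \<and> \<tau> < t + d \<longrightarrow> s \<tau> \<ge> 0 \<and> c \<tau> \<ge> 0" by blast
qed

lemma solution_first_quadrant:
  assumes sol: "is_solution F I x" and I0: "0 \<in> I" and start: "fst (x 0) \<ge> 0" "snd (x 0) \<ge> 0"
    and b: "b \<in> I" "0 \<le> b"
  shows "fst (x b) \<ge> 0 \<and> snd (x b) \<ge> 0"
proof -
  have inI: "t \<in> I" if "0 \<le> t" "t \<le> b" for t
    using mem_is_interval_1_I[OF solution_open_interval(2)[OF sol] I0 b(1) that] .
  show ?thesis
  proof (rule first_quadrant_invariant[where s="\<lambda>t. fst (x t)" and c="\<lambda>t. snd (x t)", OF b(2) _ _ start])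
    show "((\<lambda>t. fst (x t)) has_real_derivative k0 - k1 * (eT - snd (x t)) * fst (x t) + km1 * snd (x t)) (at t)"
      "((\<lambda>t. snd (x t)) has_real_derivative k1 * (eT - snd (x t)) * fst (x t) - (km1 + k2) * snd (x t)) (at t)"
      if "0 \<le> t" "t \<le> b" for t
      using solution_component_deriv[OF sol inI[OF that]] by simp_all
  qed
qed

lemma first_quadrant_forward_complete:
  assumes mx: "is_maximal_solution F I x" and I0: "0 \<in> I" and start: "fst (x 0) \<ge> 0" "snd (x 0) \<ge> 0"
  shows "\<not> bdd_above I"
proof
  assume bdd: "bdd_above I"
  have sol: "is_solution F I x" using mx by (simp add: is_maximal_solution_def)
  define s c where "s t = fst (x t)" and "c t = snd (x t)" for t
  have "norm (x t) \<le> s 0 + c 0 + k0 * Sup I" if t: "t \<in> I" "t \<ge> 0" for t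
  proof -
    \<comment> \<open>\<open>(s + c)' = k0 - k2 c \<le> k0\<close> in the first quadrant\<close>
    have "s t + c t - k0 * t \<le> s 0 + c 0 - k0 * 0"
    proof (rule DERIV_nonpos_imp_nonincreasing[where f="\<lambda>u. s u + c u - k0 * u", OF t(2)])
      fix u assume u: "0 \<le> u" "u \<le> t"
      have uI: "u \<in> I" using mem_is_interval_1_I[OF solution_open_interval(2)[OF sol] I0 t(1) u] .
      have "((\<lambda>u. s u + c u - k0 * u) has_real_derivative
          (k0 - k1 * (eT - c u) * s u + km1 * c u) + (k1 * (eT - c u) * s u - (km1 + k2) * c u) - k0 * 1) (at u)"
        unfolding s_def c_def by (auto intro!: derivative_eq_intros solution_component_deriv[OF sol uI])
      moreover have "(k0 - k1 * (eT - c u) * s u + km1 * c u) + (k1 * (eT - c u) * s u - (km1 + k2) * c u) - k0 * 1 \<le> 0"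
        using solution_first_quadrant[OF sol I0 start uI u(1)] k2 by (simp add: algebra_simps s_def c_def)
      ultimately show "\<exists>y. ((\<lambda>u. s u + c u - k0 * u) has_real_derivative y) (at u) \<and> y \<le> 0" by blast
    qed
    moreover have "norm (x t) \<le> \<bar>s t\<bar> + \<bar>c t\<bar>" using norm_prod_le_abs_sum[of "x t"] by (simp add: s_def c_def)
    moreover have "k0 * t \<le> k0 * Sup I" using cSup_upper[OF t(1) bdd] k0 by (simp add: mult_left_mono)
    ultimately show ?thesis using solution_first_quadrant[OF sol I0 start t] by (simp add: s_def c_def)
  qed
  then show False using maximal_solution_unbounded_above[OF mx I0] bdd by blast
qed

context
  fixes s c :: "real \<Rightarrow> real"
  assumes ds: "\<And>t. 0 \<le> t \<Longrightarrow> (s has_real_derivative k0 - k1 * (eT - c t) * s t + km1 * c t) (at t)"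
    and dc: "\<And>t. 0 \<le> t \<Longrightarrow> (c has_real_derivative k1 * (eT - c t) * s t - (km1 + k2) * c t) (at t)"
    and nonneg: "\<And>t. 0 \<le> t \<Longrightarrow> s t \<ge> 0 \<and> c t \<ge> 0"
begin

lemma c_stays_below:
  assumes "eT \<le> l" "0 \<le> t1" "t1 \<le> t" "c t1 \<le> l"
  shows "c t \<le> l"
proof (rule DERIV_barrier_le[where f=c and f'="\<lambda>u. k1 * (eT - c u) * s u - (km1 + k2) * c u" and a=t1])
  show "(c has_real_derivative k1 * (eT - c u) * s u - (km1 + k2) * c u) (at u)" if "t1 \<le> u" "u \<le> t" for u
    using dc that assms(2) by simp
  show "k1 * (eT - c u) * s u - (km1 + k2) * c u \<le> 0" if u: "t1 \<le> u" "u \<le> t" "l < c u" for u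
  proof -
    have u0: "0 \<le> u" using u assms(2) by simp
    have "k1 * (eT - c u) * s u \<le> 0"
      using k1 u assms(1) nonneg[OF u0] by (simp add: mult_nonneg_nonpos mult_nonpos_nonneg)
    moreover have "(km1 + k2) * c u \<ge> 0" using km1 k2 nonneg[OF u0] by simp
    ultimately show ?thesis by linarith
  qed
qed (use assms in auto)

lemma c_le_max: "0 \<le> t \<Longrightarrow> c t \<le> max (c 0) eT"
  using c_stays_below[of "max (c 0) eT" 0 t] by simp

lemma c_reaches_level:
  assumes \<epsilon>: "\<epsilon> > 0"
  shows "\<exists>t1\<ge>0. c t1 \<le> eT + \<epsilon>"
proof (rule ccontr)
  assume "\<not> (\<exists>t1\<ge>0. c t1 \<le> eT + \<epsilon>)"
  then have gt: "c t > eT + \<epsilon>" if "t \<ge> 0" for t using that by force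
  define N where "N = c 0 / (k2 * \<epsilon>) + 1"
  have N0: "N \<ge> 0" using nonneg[of 0] k2_pos \<epsilon> by (simp add: N_def)
  have "c N + k2 * \<epsilon> * N \<le> c 0 + k2 * \<epsilon> * 0"
  proof (rule DERIV_nonpos_imp_nonincreasing[where f="\<lambda>u. c u + k2 * \<epsilon> * u"])
    show "0 \<le> N" by (rule N0)
    fix u assume u: "0 \<le> u" "u \<le> N"
    have "((\<lambda>u. c u + k2 * \<epsilon> * u) has_real_derivative
        (k1 * (eT - c u) * s u - (km1 + k2) * c u) + k2 * \<epsilon> * 1) (at u)"
      by (auto intro!: derivative_eq_intros dc[OF u(1)])
    moreover have "(k1 * (eT - c u) * s u - (km1 + k2) * c u) + k2 * \<epsilon> * 1 \<le> 0"
    proof -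
      have cu: "c u > eT + \<epsilon>" using gt[OF u(1)] .
      have "k1 * (eT - c u) * s u \<le> 0"
        using k1 cu \<epsilon> nonneg[OF u(1)] by (simp add: mult_nonneg_nonpos mult_nonpos_nonneg)
      moreover have "km1 * c u \<ge> 0" using km1 nonneg[OF u(1)] by simp
      moreover have "k2 * c u \<ge> k2 * (eT + \<epsilon>)" using k2 cu by (simp add: mult_left_mono)
      moreover have "k2 * eT \<ge> 0" using k2 eT by simp
      ultimately show ?thesis by (simp add: algebra_simps)
    qed
    ultimately show "\<exists>y. ((\<lambda>u. c u + k2 * \<epsilon> * u) has_real_derivative y) (at u) \<and> y \<le> 0" by blast
  qed
  moreover have "k2 * \<epsilon> * N = c 0 + k2 * \<epsilon>" using k2_pos \<epsilon> by (simp add: N_def field_simps)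
  ultimately have "c N \<le> - k2 * \<epsilon>" by simp
  moreover have "k2 * \<epsilon> > 0" using k2_pos \<epsilon> by simp
  ultimately show False using nonneg[OF N0] by simp
qed

lemma c_eventually_le:
  assumes "\<epsilon> > 0"
  shows "\<forall>\<^sub>F t in at_top. c t \<le> eT + \<epsilon>"
proof -
  obtain t1 where t1: "t1 \<ge> 0" "c t1 \<le> eT + \<epsilon>" using c_reaches_level[OF assms] by blast
  show ?thesis unfolding eventually_at_top_linorder
    using c_stays_below[of "eT + \<epsilon>" t1] t1 assms by (intro exI[where x=t1]) auto
qed

lemma s_tendsto_at_top: "filterlim s at_top at_top"
proof -
  define \<eta> where "\<eta> = (k0 - k2 * eT) / 2"
  have \<eta>_pos: "\<eta> > 0" using inflow_dominates by (simp add: \<eta>_def)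
  obtain t1 where t1: "t1 \<ge> 0" "\<And>t. t \<ge> t1 \<Longrightarrow> c t \<le> eT + \<eta> / k2"
  proof -
    have "\<eta> / k2 > 0" using \<eta>_pos k2_pos by simp
    from c_reaches_level[OF this] obtain t1 where "t1 \<ge> 0" "c t1 \<le> eT + \<eta> / k2" by blast
    then show ?thesis using that c_stays_below[of "eT + \<eta> / k2" t1] \<eta>_pos k2_pos by simp
  qed
  define C where "C = max (c 0) eT"
  \<comment> \<open>once \<open>c \<le> eT + \<eta>/k2\<close>, the total \<open>s + c\<close> grows at rate \<open>k0 - k2 c \<ge> \<eta>\<close>\<close>
  have s_grows: "s t \<ge> \<eta> * (t - t1) - C" if "t \<ge> t1" for t
  proof -
    have "s t1 + c t1 - \<eta> * t1 \<le> s t + c t - \<eta> * t"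
    proof (rule DERIV_nonneg_imp_nondecreasing[where f="\<lambda>u. s u + c u - \<eta> * u"])
      show "t1 \<le> t" by (rule that)
      fix u assume u: "t1 \<le> u" "u \<le> t"
      have u0: "0 \<le> u" using u t1 by simp
      have "((\<lambda>u. s u + c u - \<eta> * u) has_real_derivative
          (k0 - k1 * (eT - c u) * s u + km1 * c u) + (k1 * (eT - c u) * s u - (km1 + k2) * c u) - \<eta> * 1) (at u)"
        by (auto intro!: derivative_eq_intros ds[OF u0] dc[OF u0])
      moreover have "(k0 - k1 * (eT - c u) * s u + km1 * c u) + (k1 * (eT - c u) * s u - (km1 + k2) * c u) - \<eta> * 1 \<ge> 0"
      proof -
        have "k2 * c u \<le> k2 * (eT + \<eta> / k2)" using t1(2)[of u] u k2 by (simp add: mult_left_mono)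
        also have "\<dots> = k2 * eT + \<eta>" using k2_pos by (simp add: field_simps)
        finally have "k2 * c u \<le> k2 * eT + \<eta>" .
        moreover have "(k0 - k1 * (eT - c u) * s u + km1 * c u) + (k1 * (eT - c u) * s u - (km1 + k2) * c u) - \<eta> * 1
            = k0 - k2 * c u - \<eta>" by (simp add: algebra_simps)
        moreover have "2 * \<eta> = k0 - k2 * eT" by (simp add: \<eta>_def)
        ultimately show ?thesis by linarith
      qed
      ultimately show "\<exists>y. ((\<lambda>u. s u + c u - \<eta> * u) has_real_derivative y) (at u) \<and> y \<ge> 0" by blast
    qed
    then show ?thesis using nonneg[OF t1(1)] c_le_max[of t] that t1 by (simp add: C_def algebra_simps)
  qed
  show ?thesis
    unfolding filterlim_at_top eventually_at_top_linorder
  proof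
    fix Z
    show "\<exists>N. \<forall>t\<ge>N. Z \<le> s t"
    proof (intro exI allI impI)
      fix t assume t: "t1 + \<bar>Z + C\<bar> / \<eta> \<le> t"
      have "\<bar>Z + C\<bar> \<le> \<eta> * (t - t1)" using t \<eta>_pos by (simp add: field_simps)
      then show "Z \<le> s t" using s_grows[of t] t \<eta>_pos by (smt (verit) divide_nonneg_pos)
    qed
  qed
qed

end

context
  fixes s c :: "real \<Rightarrow> real"
  assumes ds: "\<And>t. 0 \<le> t \<Longrightarrow> (s has_real_derivative k0 - k1 * (eT - c t) * s t + km1 * c t) (at t)"
    and dc: "\<And>t. 0 \<le> t \<Longrightarrow> (c has_real_derivative k1 * (eT - c t) * s t - (km1 + k2) * c t) (at t)"
    and nonneg: "\<And>t. 0 \<le> t \<Longrightarrow> s t \<ge> 0 \<and> c t \<ge> 0"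
begin

lemma c_gains_below_level:
  assumes \<epsilon>: "\<epsilon> > 0"
  obtains t2 where "t2 \<ge> 0"
    "\<And>u. u \<ge> t2 \<Longrightarrow> c u < eT - \<epsilon> \<Longrightarrow> k1 * (eT - c u) * s u - (km1 + k2) * c u \<ge> 1"
proof -
  define C where "C = max (c 0) eT"
  define S0 where "S0 = ((km1 + k2) * C + 1) / (k1 * \<epsilon>)"
  obtain N where N: "\<And>t. t \<ge> N \<Longrightarrow> S0 \<le> s t"
    using s_tendsto_at_top[OF ds dc nonneg] unfolding filterlim_at_top eventually_at_top_linorder by blast
  define t2 where "t2 = max N 0"
  have t2: "t2 \<ge> 0" "\<And>t. t \<ge> t2 \<Longrightarrow> S0 \<le> s t" using N by (auto simp: t2_def)
  have C0: "C \<ge> 0" using eT by (simp add: C_def le_max_iff_disj)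
  have "k1 * (eT - c u) * s u - (km1 + k2) * c u \<ge> 1" if u: "u \<ge> t2" "c u < eT - \<epsilon>" for u
  proof -
    have u0: "u \<ge> 0" using u t2 by simp
    have "k1 * \<epsilon> * S0 \<le> k1 * (eT - c u) * s u"
    proof (rule mult_mono)
      show "k1 * \<epsilon> \<le> k1 * (eT - c u)" using k1 u by (simp add: mult_left_mono)
      show "S0 \<le> s u" using t2(2)[OF u(1)] .
      show "0 \<le> k1 * (eT - c u)" using k1 u nonneg[OF u0] \<epsilon> by simp
      show "0 \<le> S0" using km1 k2 C0 k1 \<epsilon> by (simp add: S0_def)
    qed
    moreover have "k1 * \<epsilon> * S0 = (km1 + k2) * C + 1" using k1_pos \<epsilon> by (simp add: S0_def)
    moreover have "(km1 + k2) * c u \<le> (km1 + k2) * C"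
      using c_le_max[OF ds dc nonneg u0] km1 k2 by (simp add: C_def mult_left_mono)
    ultimately show ?thesis by linarith
  qed
  then show ?thesis using that t2(1) by blast
qed

lemma c_eventually_ge:
  assumes \<epsilon>: "\<epsilon> > 0"
  shows "\<forall>\<^sub>F t in at_top. c t \<ge> eT - \<epsilon>"
proof -
  obtain t2 where t2: "t2 \<ge> 0"
    and gain: "\<And>u. u \<ge> t2 \<Longrightarrow> c u < eT - \<epsilon> \<Longrightarrow> k1 * (eT - c u) * s u - (km1 + k2) * c u \<ge> 1"
    using c_gains_below_level[OF \<epsilon>] by blast
  define C where "C = max (c 0) eT"
  have C0: "C \<ge> 0" using eT by (simp add: C_def le_max_iff_disj)
  have "\<exists>t3\<ge>t2. c t3 \<ge> eT - \<epsilon>"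
  proof (rule ccontr)
    assume "\<not> (\<exists>t3\<ge>t2. c t3 \<ge> eT - \<epsilon>)"
    then have low: "c t < eT - \<epsilon>" if "t \<ge> t2" for t using that by force
    \<comment> \<open>then \<open>c\<close> would rise faster than \<open>t\<close>, past its bound \<open>C\<close>\<close>
    have "c t2 - t2 \<le> c (t2 + C + 1) - (t2 + C + 1)"
    proof (rule DERIV_nonneg_imp_nondecreasing[where f="\<lambda>u. c u - u"])
      show "t2 \<le> t2 + C + 1" using C0 by simp
      fix u assume u: "t2 \<le> u" "u \<le> t2 + C + 1"
      have u0: "u \<ge> 0" using u t2 by simp
      have "((\<lambda>u. c u - u) has_real_derivative (k1 * (eT - c u) * s u - (km1 + k2) * c u) - 1) (at u)"
        using DERIV_diff[OF dc[OF u0] DERIV_ident] by simp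
      moreover have "(k1 * (eT - c u) * s u - (km1 + k2) * c u) - 1 \<ge> 0"
        using gain[OF u(1) low[OF u(1)]] by simp
      ultimately show "\<exists>y. ((\<lambda>u. c u - u) has_real_derivative y) (at u) \<and> y \<ge> 0" by blast
    qed
    then have "c (t2 + C + 1) \<ge> C + 1" using nonneg[OF t2] by simp
    moreover have "c (t2 + C + 1) \<le> C" using c_le_max[OF ds dc nonneg] C0 t2 by (simp add: C_def)
    ultimately show False by simp
  qed
  then obtain t3 where t3: "t3 \<ge> t2" "c t3 \<ge> eT - \<epsilon>" by blast
  show ?thesis unfolding eventually_at_top_linorder
  proof (intro exI allI impI)
    fix t assume t: "t3 \<le> t"
    have "- c t \<le> - (eT - \<epsilon>)"
    proof (rule DERIV_barrier_le[where f="\<lambda>u. - c u" and f'="\<lambda>u. - (k1 * (eT - c u) * s u - (km1 + k2) * c u)" and a=t3])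
      show "t3 \<le> t" by (rule t)
      show "((\<lambda>u. - c u) has_real_derivative - (k1 * (eT - c u) * s u - (km1 + k2) * c u)) (at u)"
        if "t3 \<le> u" "u \<le> t" for u using DERIV_minus[OF dc[of u]] that t3 t2 by simp
      show "- (k1 * (eT - c u) * s u - (km1 + k2) * c u) \<le> 0"
        if "t3 \<le> u" "u \<le> t" "- (eT - \<epsilon>) < - c u" for u using gain[of u] that t3 by simp
      show "- c t3 \<le> - (eT - \<epsilon>)" using t3 by simp
    qed
    then show "eT - \<epsilon> \<le> c t" by simp
  qed
qed

lemma c_tendsto_eT: "(c \<longlongrightarrow> eT) at_top"
proof (rule order_tendstoI)
  fix a assume a: "a < eT"
  then have "(eT - a) / 2 > 0" by simp
  from c_eventually_ge[OF this] show "\<forall>\<^sub>F t in at_top. a < c t"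
  proof (rule eventually_mono)
    fix t assume "eT - (eT - a) / 2 \<le> c t"
    then show "a < c t" using a by argo
  qed
next
  fix a assume a: "eT < a"
  then have "(a - eT) / 2 > 0" by simp
  from c_eventually_le[OF ds dc nonneg this] show "\<forall>\<^sub>F t in at_top. c t < a"
  proof (rule eventually_mono)
    fix t assume "c t \<le> eT + (a - eT) / 2"
    then show "c t < a" using a by argo
  qed
qed

end

lemma first_quadrant_tendsto_P1:
  assumes mx: "is_maximal_solution F I x" and I0: "0 \<in> I" and start: "fst (x 0) \<ge> 0" "snd (x 0) \<ge> 0"
  shows "((\<lambda>t. poincare (x t)) \<longlongrightarrow> P1) (upper_end I) \<and> ((\<lambda>t. snd (x t)) \<longlongrightarrow> eT) (upper_end I)"
proof -
  have sol: "is_solution F I x" using mx by (simp add: is_maximal_solution_def)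
  have unbounded: "\<not> bdd_above I" by (rule first_quadrant_forward_complete[OF mx I0 start])
  have inI: "t \<in> I" if "0 \<le> t" for t
  proof -
    obtain t' where "t' \<in> I" "t < t'" using unbounded unfolding bdd_above_def by (meson not_le)
    then show ?thesis using mem_is_interval_1_I[OF solution_open_interval(2)[OF sol] I0] that by simp
  qed
  note ds = solution_component_deriv(1)[OF sol inI] and dc = solution_component_deriv(2)[OF sol inI]
  have nonneg: "fst (x t) \<ge> 0 \<and> snd (x t) \<ge> 0" if "0 \<le> t" for t
    using solution_first_quadrant[OF sol I0 start inI[OF that] that] .
  have c_bounded: "\<forall>\<^sub>F t in at_top. \<bar>snd (x t)\<bar> \<le> max (snd (x 0)) eT"
    unfolding eventually_at_top_linorder using c_le_max[OF ds dc nonneg] nonneg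
    by (intro exI[of _ 0]) (auto simp: abs_le_iff)
  have "filterlim (\<lambda>t. fst (x t)) at_top at_top" by (rule s_tendsto_at_top[OF ds dc nonneg])
  from tendsto_poincare_P1[OF this c_bounded]
  have "((\<lambda>t. poincare (fst (x t), snd (x t))) \<longlongrightarrow> P1) at_top" .
  moreover have "upper_end I = at_top" using unbounded by (simp add: upper_end_def)
  ultimately show ?thesis using c_tendsto_eT[OF ds dc nonneg] by simp
qed

section \<open>The saddle and its unstable manifold\<close>

definition c0 :: real where "c0 = k0 / k2"
definition s0 :: real where "s0 = (km1 + k2) * k0 / (k1 * (k2 * eT - k0))"
definition d0 :: real where "d0 = c0 - eT"
definition b0 :: real where "b0 = k1 * s0 - k1 * d0 + km1 + k2"

text \<open>Coordinates centred at the saddle \<open>P0 = (s0, c0)\<close>: \<open>u = s + c - s0 - c0\<close>, \<open>w = c0 - c\<close>.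
  In them the system reads \<open>u' = k2 w\<close>, \<open>w' = k1 d0 u - w (k1 (u + w) + b0)\<close>.\<close>

definition u_of :: "real \<times> real \<Rightarrow> real" where "u_of p = fst p + snd p - s0 - c0"
definition w_of :: "real \<times> real \<Rightarrow> real" where "w_of p = c0 - snd p"
definition uw_point :: "real \<Rightarrow> real \<Rightarrow> real \<times> real" where "uw_point u w = (s0 + u + w, c0 - w)"

text \<open>The slope \<open>dw/du\<close> of the orbits, and the slope \<open>mu\<close> of the unstable eigendirection
  \<open>(1, mu)\<close> of the linearisation at the saddle, the positive root of \<open>k2 mu\<^sup>2 + b0 mu = k1 d0\<close>.\<close>

definition orbit_slope :: "real \<Rightarrow> real \<Rightarrow> real" where
  "orbit_slope u w = (k1 * d0 * u - w * (k1 * (u + w) + b0)) / (k2 * w)"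
definition mu :: real where "mu = (- b0 + sqrt (b0\<^sup>2 + 4 * k2 * (k1 * d0))) / (2 * k2)"

lemma k2_c0: "k2 * c0 = k0" using k2_pos by (simp add: c0_def)

lemma d0_pos: "d0 > 0"
proof -
  have "k2 * eT < k2 * c0" using inflow_dominates k2_c0 by simp
  then show ?thesis using k2_pos by (simp add: d0_def)
qed

lemma c0_s0_relation: "(km1 + k2) * c0 = - k1 * d0 * s0"
proof -
  have ne: "k2 * eT - k0 \<noteq> 0" using inflow_dominates by simp
  have "k1 * d0 * s0 = (k0 / k2 - eT) * ((km1 + k2) * k0 / (k2 * eT - k0))"
    using k1_pos by (simp add: d0_def c0_def s0_def)
  also have "\<dots> = - (km1 + k2) * k0 / k2"
    using ne k2_pos by (simp add: field_simps)
  finally have "k1 * d0 * s0 = - (km1 + k2) * k0 / k2" .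
  then have "(km1 + k2) * k0 / k2 = - k1 * d0 * s0" by linarith
  then show ?thesis by (simp add: c0_def)
qed

lemma w_rate:
  "- (k1 * (eT - c) * s - (km1 + k2) * c)
    = k1 * d0 * u_of (s, c) - w_of (s, c) * (k1 * (u_of (s, c) + w_of (s, c)) + b0)"
proof -
  have "eT = c0 - d0" by (simp add: d0_def)
  with c0_s0_relation show ?thesis unfolding u_of_def w_of_def b0_def fst_conv snd_conv by algebra
qed

lemma P0_eq: "P0 k0 k1 km1 k2 eT = (s0, c0)" by (simp add: P0_def s0_def c0_def)
lemma u_of_uw_point [simp]: "u_of (uw_point u w) = u" by (simp add: u_of_def uw_point_def)
lemma w_of_uw_point [simp]: "w_of (uw_point u w) = w" by (simp add: w_of_def uw_point_def)
lemma uw_point_of: "uw_point (u_of p) (w_of p) = p" by (simp add: u_of_def w_of_def uw_point_def prod_eq_iff)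
lemma uw_zero_imp_P0: "u_of p = 0 \<Longrightarrow> w_of p = 0 \<Longrightarrow> p = (s0, c0)"
  using uw_point_of[of p] by (simp add: uw_point_def)

lemma F_at_P0: "F (s0, c0) = 0"
proof -
  have "fst (F (s0, c0)) + snd (F (s0, c0)) = k0 - k2 * c0" by (simp add: F_components algebra_simps)
  then have "fst (F (s0, c0)) + snd (F (s0, c0)) = 0" using k2_c0 by simp
  moreover have "snd (F (s0, c0)) = 0"
    using w_rate[where s=s0 and c=c0] by (simp add: F_components u_of_def w_of_def)
  ultimately show ?thesis by (simp add: prod_eq_iff)
qed

lemma
  shows mu_pos: "mu > 0" and mu_eigen_eq: "k2 * mu\<^sup>2 + b0 * mu = k1 * d0"
    and mu_gain_pos: "k2 * mu + b0 > 0"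
proof -
  define D where "D = b0\<^sup>2 + 4 * k2 * (k1 * d0)"
  have Dp: "D > b0\<^sup>2" using k2_pos k1_pos d0_pos by (simp add: D_def)
  have r: "sqrt D > \<bar>b0\<bar>" using Dp by (metis real_sqrt_abs real_sqrt_less_iff)
  have D0: "D \<ge> 0" using Dp zero_le_power2[of b0] by linarith
  have rr: "(sqrt D)\<^sup>2 = D" using D0 by simp
  show mp: "mu > 0" using r k2_pos by (simp add: mu_def D_def[symmetric])
  show eq: "k2 * mu\<^sup>2 + b0 * mu = k1 * d0"
  proof -
    have g: "k2 * ((r - b0) / (2 * k2))\<^sup>2 + b0 * ((r - b0) / (2 * k2)) = (r\<^sup>2 - b0\<^sup>2) / (4 * k2)" for r
      using k2_pos by (simp add: field_simps power2_eq_square)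
    have m: "mu = (sqrt D - b0) / (2 * k2)" by (simp add: mu_def D_def)
    have "k2 * mu\<^sup>2 + b0 * mu = ((sqrt D)\<^sup>2 - b0\<^sup>2) / (4 * k2)"
      unfolding m by (rule g)
    also have "\<dots> = (D - b0\<^sup>2) / (4 * k2)" using rr by simp
    also have "\<dots> = k1 * d0" using k2_pos by (simp add: D_def)
    finally show ?thesis .
  qed
  have "(k2 * mu + b0) * mu = k1 * d0" using eq by (simp add: algebra_simps power2_eq_square)
  moreover have "k1 * d0 > 0" using k1_pos d0_pos by simp
  ultimately show "k2 * mu + b0 > 0" using mp by (metis zero_less_mult_pos2)
qed

lemma uw_deriv:
  assumes "is_solution F I x" "t \<in> I"
  shows "((\<lambda>t. u_of (x t)) has_real_derivative k2 * w_of (x t)) (at t)"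
    "((\<lambda>t. w_of (x t)) has_real_derivative
        k1 * d0 * u_of (x t) - w_of (x t) * (k1 * (u_of (x t) + w_of (x t)) + b0)) (at t)"
proof -
  note d1 = solution_component_deriv(1)[OF assms] and d2 = solution_component_deriv(2)[OF assms]
  have "((\<lambda>t. fst (x t) + snd (x t) - s0 - c0) has_real_derivative
      (k0 - k1 * (eT - snd (x t)) * fst (x t) + km1 * snd (x t)) +
      (k1 * (eT - snd (x t)) * fst (x t) - (km1 + k2) * snd (x t))) (at t)"
    using DERIV_diff[OF DERIV_diff[OF DERIV_add[OF d1 d2] DERIV_const] DERIV_const] by simp
  moreover have "(k0 - k1 * (eT - snd (x t)) * fst (x t) + km1 * snd (x t)) +
      (k1 * (eT - snd (x t)) * fst (x t) - (km1 + k2) * snd (x t)) = k2 * w_of (x t)"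
    using k2_c0 by (simp add: w_of_def algebra_simps)
  ultimately show "((\<lambda>t. u_of (x t)) has_real_derivative k2 * w_of (x t)) (at t)"
    by (simp add: u_of_def)
  have "((\<lambda>t. c0 - snd (x t)) has_real_derivative
      - (k1 * (eT - snd (x t)) * fst (x t) - (km1 + k2) * snd (x t))) (at t)"
    using DERIV_diff[OF DERIV_const d2] by simp
  then show "((\<lambda>t. w_of (x t)) has_real_derivative
        k1 * d0 * u_of (x t) - w_of (x t) * (k1 * (u_of (x t) + w_of (x t)) + b0)) (at t)"
    using w_rate[where s="fst (x t)" and c="snd (x t)"] by (simp add: w_of_def)
qed

lemma orbit_slope_mult: "w \<noteq> 0 \<Longrightarrow> k2 * w * orbit_slope u w = k1 * d0 * u - w * (k1 * (u + w) + b0)"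
  using k2_pos by (simp add: orbit_slope_def)

lemma orbit_slope_diff: "w1 \<noteq> 0 \<Longrightarrow> w2 \<noteq> 0 \<Longrightarrow>
    orbit_slope u w1 - orbit_slope u w2 = - (w1 - w2) * (k1 * d0 * u / (k2 * w1 * w2) + k1 / k2)"
  using k2_pos by (simp add: orbit_slope_def field_simps)

text \<open>The wedge \<open>lower_edge u \<le> w \<le> min (mu u) w_max\<close> in the quadrant \<open>u, w > 0\<close> is forward
  invariant. \<open>lower_edge\<close> is a concave curve of initial slope \<open>a0 \<le> mu\<close> and height below \<open>d0\<close>;
  \<open>a0\<close> is small enough that orbits cross it upwards.\<close>

definition a0 :: real where "a0 = min mu (k1 * d0 / (k2 + k1 * d0 + \<bar>b0\<bar> + 1))"
definition lower_edge :: "real \<Rightarrow> real" where "lower_edge u = a0 * d0 * u / (d0 + a0 * u)"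
definition w_max :: real where "w_max = max mu (max d0 (\<bar>b0\<bar> / k1))"

lemma
  shows a0_pos: "a0 > 0" and a0_le_mu: "a0 \<le> mu"
    and a0_small: "k1 * d0 / a0 \<ge> k2 + k1 * d0 + \<bar>b0\<bar> + 1"
proof -
  define q where "q = k1 * d0 / (k2 + k1 * d0 + \<bar>b0\<bar> + 1)"
  have den: "k2 + k1 * d0 + \<bar>b0\<bar> + 1 > 0" using k2_pos k1_pos d0_pos by (simp add: add_pos_nonneg)
  have qp: "q > 0" using k1_pos d0_pos den by (simp add: q_def)
  have aq: "a0 = min mu q" by (simp add: a0_def q_def)
  show ap: "a0 > 0" using aq qp mu_pos by simp
  show "a0 \<le> mu" using aq by simp
  have "a0 \<le> q" using aq by simp
  then have "k1 * d0 / q \<le> k1 * d0 / a0" using ap k1_pos d0_pos by (intro divide_left_mono) auto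
  moreover have "k1 * d0 / q = k2 + k1 * d0 + \<bar>b0\<bar> + 1" using den k1_pos d0_pos by (simp add: q_def)
  ultimately show "k1 * d0 / a0 \<ge> k2 + k1 * d0 + \<bar>b0\<bar> + 1" by simp
qed

lemma
  assumes "u \<ge> 0"
  shows lower_edge_nonneg: "lower_edge u \<ge> 0" and lower_edge_le: "lower_edge u \<le> a0 * u"
    and lower_edge_less_d0: "lower_edge u < d0" and lower_edge_pos: "u > 0 \<Longrightarrow> lower_edge u > 0"
    and lower_edge_deriv: "(lower_edge has_real_derivative a0 * d0\<^sup>2 / (d0 + a0 * u)\<^sup>2) (at u)"
    and lower_edge_deriv_le: "a0 * d0\<^sup>2 / (d0 + a0 * u)\<^sup>2 \<le> a0"
proof -
  have ap: "a0 > 0" by (rule a0_pos)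
  have q: "d0 + a0 * u > 0" "d0 + a0 * u \<ge> d0" using d0_pos ap assms by (auto simp: add_pos_nonneg)
  show "lower_edge u \<ge> 0" using ap d0_pos assms q by (simp add: lower_edge_def)
  show "lower_edge u \<le> a0 * u"
  proof -
    have "a0 * d0 * u \<le> a0 * u * (d0 + a0 * u)" using ap assms by (simp add: algebra_simps)
    then show ?thesis using q by (simp add: lower_edge_def divide_le_eq)
  qed
  show "lower_edge u < d0"
  proof -
    have "a0 * d0 * u < d0 * (d0 + a0 * u)" using d0_pos by (simp add: algebra_simps power2_eq_square)
    then show ?thesis using q by (simp add: lower_edge_def divide_less_eq)
  qed
  show "u > 0 \<Longrightarrow> lower_edge u > 0" unfolding lower_edge_def using ap d0_pos q(1)
    by (intro divide_pos_pos mult_pos_pos) auto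
  have "((\<lambda>u. a0 * d0 * u / (d0 + a0 * u)) has_real_derivative
      ((a0 * d0 * 1) * (d0 + a0 * u) - a0 * d0 * u * (0 + a0 * 1)) / (d0 + a0 * u)\<^sup>2) (at u)"
    using q by (intro derivative_eq_intros) (auto simp: power2_eq_square)
  moreover have "((a0 * d0 * 1) * (d0 + a0 * u) - a0 * d0 * u * (0 + a0 * 1)) = a0 * d0\<^sup>2"
    by (simp add: algebra_simps power2_eq_square)
  ultimately show "(lower_edge has_real_derivative a0 * d0\<^sup>2 / (d0 + a0 * u)\<^sup>2) (at u)"
    by (simp add: lower_edge_def[abs_def])
  have "d0\<^sup>2 \<le> (d0 + a0 * u)\<^sup>2" using q d0_pos by (intro power_mono) auto
  then have "d0\<^sup>2 / (d0 + a0 * u)\<^sup>2 \<le> 1" using q by simp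
  then show "a0 * d0\<^sup>2 / (d0 + a0 * u)\<^sup>2 \<le> a0" using ap mult_left_mono[of _ 1 a0] by fastforce
qed

lemma lower_edge_mono: "0 \<le> u \<Longrightarrow> u \<le> v \<Longrightarrow> lower_edge u \<le> lower_edge v"
proof -
  assume uv: "0 \<le> u" "u \<le> v"
  show "lower_edge u \<le> lower_edge v"
  proof (rule DERIV_nonneg_imp_nondecreasing[where f=lower_edge, OF uv(2)])
    fix x assume "u \<le> x" "x \<le> v"
    then have x: "x \<ge> 0" using uv by simp
    have "a0 * d0\<^sup>2 / (d0 + a0 * x)\<^sup>2 \<ge> 0" using a0_pos by simp
    then show "\<exists>y. (lower_edge has_real_derivative y) (at x) \<and> 0 \<le> y" using lower_edge_deriv[OF x] by blast
  qed
qed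

lemma lower_edge_crossed_upwards:
  assumes up: "u > 0" and wp: "w > 0" and wl: "w < lower_edge u"
  shows "a0 * d0\<^sup>2 / (d0 + a0 * u)\<^sup>2 * (k2 * w) - (k1 * d0 * u - w * (k1 * (u + w) + b0)) \<le> 0"
proof -
  define ed where "ed u = a0 * d0\<^sup>2 / (d0 + a0 * u)\<^sup>2" for u
  define X where "X = k1 * d0 / a0"
  have ap: "a0 > 0" by (rule a0_pos)
  have X: "X \<ge> k2 + k1 * d0 + \<bar>b0\<bar> + 1" using a0_small by (simp add: X_def)
  have q: "d0 + a0 * u > 0" using d0_pos ap up by (simp add: add_pos_pos)
  have wq: "w * (d0 + a0 * u) < a0 * d0 * u" using q wl by (simp add: lower_edge_def less_divide_eq)
  have wdd: "w < d0" using wl lower_edge_less_d0[of u] up by simp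
  have t1': "ed u * (k2 * w) \<le> k2 * w"
  proof -
    have "ed u \<le> a0" using lower_edge_deriv_le[of u] up by (simp add: ed_def)
    also have "a0 \<le> 1"
    proof -
      have "k1 * d0 / a0 \<ge> k1 * d0" using X k2_pos abs_ge_zero[of b0] unfolding X_def by linarith
      then have "k1 * d0 \<le> k1 * d0 / a0" .
      then have "k1 * d0 * a0 \<le> k1 * d0" using ap by (simp add: le_divide_eq)
      then show ?thesis using k1_pos d0_pos by (simp add: mult_le_cancel_left1)
    qed
    finally have "ed u \<le> 1" .
    then show ?thesis using k2_pos wp by (simp add: mult_left_le_one_le)
  qed
  have kdu: "k1 * d0 * u > X * w + k1 * w * u"
  proof -
    have "(k1 / a0) * (w * (d0 + a0 * u)) < (k1 / a0) * (a0 * d0 * u)"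
      using wq k1_pos ap by (intro mult_strict_left_mono) auto
    moreover have "(k1 / a0) * (w * (d0 + a0 * u)) = X * w + k1 * w * u"
      using ap by (simp add: X_def field_simps)
    moreover have "(k1 / a0) * (a0 * d0 * u) = k1 * d0 * u" using ap by simp
    ultimately show ?thesis by linarith
  qed
  have ww: "k1 * w * w \<le> k1 * d0 * w" using wdd wp k1 by (intro mult_mono) auto
  have "ed u * (k2 * w) - (k1 * d0 * u - w * (k1 * (u + w) + b0))
      \<le> k2 * w - (k1 * d0 * u - k1 * w * u - k1 * w * w - b0 * w)"
    using t1' by (simp add: algebra_simps)
  also have "\<dots> < k2 * w - (X * w - k1 * d0 * w - b0 * w)" using kdu ww by linarith
  also have "\<dots> = w * (k2 + k1 * d0 + b0 - X)" by (simp add: algebra_simps)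
  also have "\<dots> \<le> 0"
  proof -
    have "k2 + k1 * d0 + b0 - X \<le> 0" using X by linarith
    then show ?thesis using wp by (simp add: mult_nonneg_nonpos)
  qed
  finally show ?thesis by (simp add: ed_def)
qed

context
  fixes U W :: "real \<Rightarrow> real" and t1 t2 :: real
  assumes t12: "t1 \<le> t2"
    and dU: "\<And>t. t1 \<le> t \<Longrightarrow> t \<le> t2 \<Longrightarrow> (U has_real_derivative k2 * W t) (at t)"
    and dW: "\<And>t. t1 \<le> t \<Longrightarrow> t \<le> t2 \<Longrightarrow>
        (W has_real_derivative k1 * d0 * U t - W t * (k1 * (U t + W t) + b0)) (at t)"
    and pos: "\<And>t. t1 \<le> t \<Longrightarrow> t \<le> t2 \<Longrightarrow> U t > 0 \<and> W t > 0"
begin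

lemma w_le_mu_u_invariant: "W t1 \<le> mu * U t1 \<Longrightarrow> W t2 \<le> mu * U t2"
proof -
  assume h: "W t1 \<le> mu * U t1"
  have "W t2 - mu * U t2 \<le> 0"
  proof (rule DERIV_barrier_le[where f="\<lambda>t. W t - mu * U t" and
        f'="\<lambda>t. (k1 * d0 * U t - W t * (k1 * (U t + W t) + b0)) - mu * (k2 * W t)", OF t12])
    show "((\<lambda>t. W t - mu * U t) has_real_derivative
        (k1 * d0 * U t - W t * (k1 * (U t + W t) + b0)) - mu * (k2 * W t)) (at t)"
      if "t1 \<le> t" "t \<le> t2" for t
      by (rule DERIV_diff[OF dW[OF that] DERIV_cmult[OF dU[OF that]]])
    show "(k1 * d0 * U t - W t * (k1 * (U t + W t) + b0)) - mu * (k2 * W t) \<le> 0"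
      if t: "t1 \<le> t" "t \<le> t2" "0 < W t - mu * U t" for t
    proof -
      have eq: "(k1 * d0 * U t - W t * (k1 * (U t + W t) + b0)) - mu * (k2 * W t)
          = (k2 * mu + b0) * (mu * U t - W t) - k1 * (W t * (U t + W t))"
        using mu_eigen_eq by (simp add: algebra_simps power2_eq_square) (metis mult.assoc mult.commute distrib_left)
      have "(k2 * mu + b0) * (mu * U t - W t) \<le> 0"
        using mu_gain_pos t(3) by (simp add: mult_nonneg_nonpos)
      moreover have "k1 * (W t * (U t + W t)) \<ge> 0" using pos[OF t(1,2)] k1 by simp
      ultimately show ?thesis using eq by linarith
    qed
    show "W t1 - mu * U t1 \<le> 0" using h by simp
  qed
  then show ?thesis by simp
qed

lemma w_le_w_max_invariant: "W t1 \<le> L \<Longrightarrow> w_max \<le> L \<Longrightarrow> W t2 \<le> L"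
proof -
  assume h: "W t1 \<le> L" "w_max \<le> L"
  show "W t2 \<le> L"
  proof (rule DERIV_barrier_le[where f=W and f'="\<lambda>t. k1 * d0 * U t - W t * (k1 * (U t + W t) + b0)", OF t12])
    show "(W has_real_derivative k1 * d0 * U t - W t * (k1 * (U t + W t) + b0)) (at t)"
      if "t1 \<le> t" "t \<le> t2" for t using dW[OF that] .
    show "k1 * d0 * U t - W t * (k1 * (U t + W t) + b0) \<le> 0" if t: "t1 \<le> t" "t \<le> t2" "L < W t" for t
    proof -
      have Wd: "W t > d0" "W t > \<bar>b0\<bar> / k1" using h(2) t(3) by (auto simp: w_max_def)
      have "k1 * W t > \<bar>b0\<bar>" using Wd(2) k1_pos by (simp add: divide_less_eq mult.commute)
      then have kb: "k1 * W t + b0 > 0" by linarith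
      have e: "k1 * d0 * U t - W t * (k1 * (U t + W t) + b0) = k1 * U t * (d0 - W t) - W t * (k1 * W t + b0)"
        by (simp add: algebra_simps)
      have "k1 * U t * (d0 - W t) \<le> 0" using pos[OF t(1,2)] k1 Wd(1) by (simp add: mult_nonneg_nonpos)
      moreover have "W t * (k1 * W t + b0) > 0" using pos[OF t(1,2)] kb by simp
      ultimately show ?thesis using e by linarith
    qed
    show "W t1 \<le> L" by (rule h(1))
  qed
qed

lemma lower_edge_invariant: "lower_edge (U t1) \<le> W t1 \<Longrightarrow> lower_edge (U t2) \<le> W t2"
proof -
  assume h: "lower_edge (U t1) \<le> W t1"
  define ed where "ed u = a0 * d0\<^sup>2 / (d0 + a0 * u)\<^sup>2" for u
  have "lower_edge (U t2) - W t2 \<le> 0"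
  proof (rule DERIV_barrier_le[where f="\<lambda>t. lower_edge (U t) - W t" and
        f'="\<lambda>t. ed (U t) * (k2 * W t) - (k1 * d0 * U t - W t * (k1 * (U t + W t) + b0))", OF t12])
    show "((\<lambda>t. lower_edge (U t) - W t) has_real_derivative
        ed (U t) * (k2 * W t) - (k1 * d0 * U t - W t * (k1 * (U t + W t) + b0))) (at t)"
      if t: "t1 \<le> t" "t \<le> t2" for t
    proof -
      have u0: "U t \<ge> 0" using pos[OF t] by simp
      show ?thesis
        using DERIV_diff[OF DERIV_chain2[OF lower_edge_deriv[OF u0] dU[OF t]] dW[OF t]] by (simp add: ed_def)
    qed
    show "ed (U t) * (k2 * W t) - (k1 * d0 * U t - W t * (k1 * (U t + W t) + b0)) \<le> 0"
      if t: "t1 \<le> t" "t \<le> t2" "0 < lower_edge (U t) - W t" for t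
      using lower_edge_crossed_upwards[of "U t" "W t"] pos[OF t(1,2)] t(3) by (simp add: ed_def)
    show "lower_edge (U t1) - W t1 \<le> 0" using h by simp
  qed
  then show ?thesis by simp
qed
end

lemma norm_uw_point_le: "norm (uw_point u w) \<le> \<bar>s0\<bar> + \<bar>c0\<bar> + \<bar>u\<bar> + 2 * \<bar>w\<bar>"
proof -
  have "norm (uw_point u w) \<le> \<bar>s0 + u + w\<bar> + \<bar>c0 - w\<bar>" using norm_prod_le_abs_sum[of "uw_point u w"] by (simp add: uw_point_def)
  then show ?thesis by linarith
qed

definition in_wedge :: "real \<times> real \<Rightarrow> bool" where
  "in_wedge p \<longleftrightarrow> u_of p > 0 \<and> w_of p > 0 \<and> w_of p \<le> mu * u_of p \<and>
     lower_edge (u_of p) \<le> w_of p \<and> w_of p \<le> w_max"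

lemma wedge_invariant:
  assumes sol: "is_solution F I x" and I0: "0 \<in> I" and start: "in_wedge (x 0)"
    and t: "t \<in> I" "t \<ge> 0"
  shows "in_wedge (x t)"
proof -
  define U W where "U = (\<lambda>t. u_of (x t))" and "W = (\<lambda>t. w_of (x t))"
  have inI: "\<tau> \<in> I" if "0 \<le> \<tau>" "\<tau> \<le> t" for \<tau>
    using mem_is_interval_1_I[OF solution_open_interval(2)[OF sol] I0 t(1) that] .
  have dU: "(U has_real_derivative k2 * W s) (at s)" if "0 \<le> s" "s \<le> t" for s
    using uw_deriv(1)[OF sol inI[OF that]] by (simp add: U_def W_def)
  have dW: "(W has_real_derivative k1 * d0 * U s - W s * (k1 * (U s + W s) + b0)) (at s)"
    if "0 \<le> s" "s \<le> t" for s
    using uw_deriv(2)[OF sol inI[OF that]] by (simp add: U_def W_def)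
  have pos: "U \<tau> > 0 \<and> W \<tau> > 0" if "0 \<le> \<tau>" "\<tau> \<le> t" for \<tau>
  proof (rule positive_quadrant_invariant[where a=k2 and b="k1 * d0" and \<phi>="\<lambda>t. k1 * (U t + W t) + b0"
        and ta=0 and tb=\<tau> and U=U and W=W])
    show "k2 > 0" "k1 * d0 > 0" using k2_pos k1_pos d0_pos by simp_all
    show "U 0 > 0" "W 0 > 0" using start by (simp_all add: in_wedge_def U_def W_def)
    show "(U has_real_derivative k2 * W s) (at s)" if "0 \<le> s" "s \<le> \<tau>" for s
      using dU that \<open>\<tau> \<le> t\<close> by simp
    show "(W has_real_derivative k1 * d0 * U s - W s * (k1 * (U s + W s) + b0)) (at s)"
      if "0 \<le> s" "s \<le> \<tau>" for s
      using dW that \<open>\<tau> \<le> t\<close> by simp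
  qed (rule that(1))
  have "W t \<le> mu * U t"
    by (rule w_le_mu_u_invariant[OF t(2) dU dW pos]) (use start in \<open>auto simp: in_wedge_def U_def W_def\<close>)
  moreover have "lower_edge (U t) \<le> W t"
    by (rule lower_edge_invariant[OF t(2) dU dW pos]) (use start in \<open>auto simp: in_wedge_def U_def W_def\<close>)
  moreover have "W t \<le> w_max"
    by (rule w_le_w_max_invariant[OF t(2) dU dW pos]) (use start in \<open>auto simp: in_wedge_def U_def W_def\<close>)
  ultimately show ?thesis using pos[of t] t by (simp add: in_wedge_def U_def W_def)
qed

lemma wedge_u_growth:
  assumes sol: "is_solution F I x" and I0: "0 \<in> I" and start: "in_wedge (x 0)"
    and t: "t \<in> I" "t \<ge> 0"
  shows "u_of (x 0) + k2 * lower_edge (u_of (x 0)) * t \<le> u_of (x t)"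
    and "u_of (x t) \<le> u_of (x 0) + k2 * w_max * t"
proof -
  define U W where "U = (\<lambda>t. u_of (x t))" and "W = (\<lambda>t. w_of (x t))"
  have inI: "\<tau> \<in> I" if "0 \<le> \<tau>" "\<tau> \<le> t" for \<tau>
    using mem_is_interval_1_I[OF solution_open_interval(2)[OF sol] I0 t(1) that] .
  have dU: "(U has_real_derivative k2 * W s) (at s)" if "0 \<le> s" "s \<le> t" for s
    using uw_deriv(1)[OF sol inI[OF that]] by (simp add: U_def W_def)
  have wedge: "in_wedge (x s)" if "0 \<le> s" "s \<le> t" for s
    using wedge_invariant[OF sol I0 start inI[OF that] that(1)] .
  have "U 0 \<le> U s" if "0 \<le> s" "s \<le> t" for s
  proof (rule DERIV_nonneg_imp_nondecreasing[where f=U, OF that(1)])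
    fix y assume "0 \<le> y" "y \<le> s"
    then show "\<exists>d. (U has_real_derivative d) (at y) \<and> 0 \<le> d"
      using dU[of y] wedge[of y] that k2 by (intro exI[where x="k2 * W y"]) (auto simp: in_wedge_def W_def)
  qed
  then have "k2 * lower_edge (U 0) \<le> k2 * W s" if "0 \<le> s" "s \<le> t" for s
  proof -
    have "lower_edge (U 0) \<le> lower_edge (U s)"
      using lower_edge_mono[of "U 0" "U s"] \<open>\<And>s. 0 \<le> s \<Longrightarrow> s \<le> t \<Longrightarrow> U 0 \<le> U s\<close>[OF that] start
      by (simp add: in_wedge_def U_def)
    also have "\<dots> \<le> W s" using wedge[OF that] by (simp add: in_wedge_def U_def W_def)
    finally show ?thesis using k2 by (simp add: mult_left_mono)
  qed
  note slow = this
  have "U 0 - k2 * lower_edge (U 0) * 0 \<le> U t - k2 * lower_edge (U 0) * t"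
  proof (rule DERIV_nonneg_imp_nondecreasing[where f="\<lambda>s. U s - k2 * lower_edge (U 0) * s", OF t(2)])
    fix s assume s: "0 \<le> s" "s \<le> t"
    have "((\<lambda>s. U s - k2 * lower_edge (U 0) * s) has_real_derivative k2 * W s - k2 * lower_edge (U 0)) (at s)"
      using dU[OF s] by (auto intro!: derivative_eq_intros)
    then show "\<exists>y. ((\<lambda>s. U s - k2 * lower_edge (U 0) * s) has_real_derivative y) (at s) \<and> 0 \<le> y"
      using slow[OF s] by force
  qed
  then show "u_of (x 0) + k2 * lower_edge (u_of (x 0)) * t \<le> u_of (x t)" by (simp add: U_def)
  have "k2 * W s \<le> k2 * w_max" if "0 \<le> s" "s \<le> t" for s
    using wedge[OF that] k2 by (simp add: in_wedge_def W_def mult_left_mono)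
  note fast = this
  have "U t - k2 * w_max * t \<le> U 0 - k2 * w_max * 0"
  proof (rule DERIV_nonpos_imp_nonincreasing[where f="\<lambda>s. U s - k2 * w_max * s", OF t(2)])
    fix s assume s: "0 \<le> s" "s \<le> t"
    have "((\<lambda>s. U s - k2 * w_max * s) has_real_derivative k2 * W s - k2 * w_max) (at s)"
      using dU[OF s] by (auto intro!: derivative_eq_intros)
    then show "\<exists>y. ((\<lambda>s. U s - k2 * w_max * s) has_real_derivative y) (at s) \<and> y \<le> 0"
      using fast[OF s] by force
  qed
  then show "u_of (x t) \<le> u_of (x 0) + k2 * w_max * t" by (simp add: U_def)
qed

lemma wedge_forward_complete:
  assumes mx: "is_maximal_solution F I x" and I0: "0 \<in> I" and start: "in_wedge (x 0)"
  shows "\<not> bdd_above I"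
proof
  assume bdd: "bdd_above I"
  have sol: "is_solution F I x" using mx by (simp add: is_maximal_solution_def)
  have "norm (x t) \<le> \<bar>s0\<bar> + \<bar>c0\<bar> + (u_of (x 0) + k2 * w_max * Sup I) + 2 * w_max"
    if t: "t \<in> I" "t \<ge> 0" for t
  proof -
    have "norm (x t) = norm (uw_point (u_of (x t)) (w_of (x t)))" using uw_point_of[of "x t"] by simp
    also have "\<dots> \<le> \<bar>s0\<bar> + \<bar>c0\<bar> + \<bar>u_of (x t)\<bar> + 2 * \<bar>w_of (x t)\<bar>" by (rule norm_uw_point_le)
    also have "\<dots> \<le> \<bar>s0\<bar> + \<bar>c0\<bar> + (u_of (x 0) + k2 * w_max * Sup I) + 2 * w_max"
    proof -
      have "w_max \<ge> 0" using mu_pos by (simp add: w_max_def)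
      then have "k2 * w_max * t \<le> k2 * w_max * Sup I"
        using cSup_upper[OF t(1) bdd] k2 by (intro mult_left_mono) simp_all
      then show ?thesis
        using wedge_invariant[OF sol I0 start t] wedge_u_growth(2)[OF sol I0 start t]
        by (simp add: in_wedge_def)
    qed
    finally show ?thesis .
  qed
  then show False using maximal_solution_unbounded_above[OF mx I0] bdd by blast
qed

lemma in_wedge_on_eigendirection:
  assumes "0 < v" "v \<le> 1"
  shows "in_wedge (uw_point v (mu * v))"
proof -
  have "lower_edge v \<le> mu * v"
    using lower_edge_le[of v] a0_le_mu assms by (meson less_imp_le mult_right_mono order_trans)
  moreover have "mu * v \<le> mu" using mu_pos assms by (simp add: mult_le_cancel_left1)
  then have "mu * v \<le> w_max" by (simp add: w_max_def)
  ultimately show ?thesis using assms mu_pos by (simp add: in_wedge_def)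
qed

lemma wedge_orbit_graph:
  assumes start: "in_wedge (uw_point v0 w0)"
  shows "\<exists>g. (\<forall>v>v0. (g has_real_derivative orbit_slope v (g v)) (at v)) \<and>
             (\<forall>v>v0. in_wedge (uw_point v (g v)))"
proof -
  obtain I x where mx: "is_maximal_solution F I x" and I0: "0 \<in> I" and x0: "x 0 = uw_point v0 w0"
    using maximal_solution_exists by blast
  have sol: "is_solution F I x" using mx by (simp add: is_maximal_solution_def)
  have start': "in_wedge (x 0)" using start x0 by simp
  have inI: "t \<in> I" if "t \<ge> 0" for t
    using interval_unbounded_above_mem[OF solution_open_interval(2)[OF sol] I0
        wedge_forward_complete[OF mx I0 start'] that] .
  define U W where "U = (\<lambda>t. u_of (x t))" and "W = (\<lambda>t. w_of (x t))"
  have wedge: "in_wedge (x t)" if "t \<ge> 0" for t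
    using wedge_invariant[OF sol I0 start' inI[OF that] that] .
  have dU: "(U has_real_derivative k2 * W t) (at t)" if "t \<ge> 0" for t
    using uw_deriv(1)[OF sol inI[OF that]] by (simp add: U_def W_def)
  have dW: "(W has_real_derivative k1 * d0 * U t - W t * (k1 * (U t + W t) + b0)) (at t)" if "t \<ge> 0" for t
    using uw_deriv(2)[OF sol inI[OF that]] by (simp add: U_def W_def)
  have W_pos: "W t > 0" if "t \<ge> 0" for t using wedge[OF that] by (simp add: in_wedge_def W_def)
  have U0: "U 0 = v0" using x0 by (simp add: U_def)
  have "lower_edge v0 > 0" using lower_edge_pos[of v0] start by (simp add: in_wedge_def)
  then obtain \<tau> where \<tau>: "\<And>v. v \<ge> U 0 \<Longrightarrow> \<tau> v \<ge> 0 \<and> U (\<tau> v) = v"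
    and \<tau>U: "\<And>t. t \<ge> 0 \<Longrightarrow> \<tau> (U t) = t"
    using inverse_of_increasing_unbounded[of U "\<lambda>t. k2 * W t" "k2 * lower_edge v0", OF dU]
      W_pos k2_pos wedge_u_growth(1)[OF sol I0 start' inI] U0
    by (auto simp: U_def x0)
  have d\<tau>: "(\<tau> has_real_derivative inverse (k2 * W (\<tau> v))) (at v)" if "v > U 0" for v
    using DERIV_inverse_of_increasing[OF dU _ \<tau> \<tau>U that] W_pos k2_pos by simp
  define g where "g v = W (\<tau> v)" for v
  have "(g has_real_derivative orbit_slope v (g v)) (at v)" if v: "v > v0" for v
  proof -
    define t where "t = \<tau> v"
    have t: "0 \<le> t" "U t = v" using \<tau>[of v] v U0 by (auto simp: t_def)
    have "U 0 < v" using v U0 by simp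
    have "(g has_real_derivative
        (k1 * d0 * U t - W t * (k1 * (U t + W t) + b0)) * inverse (k2 * W t)) (at v)"
      unfolding g_def[abs_def] using DERIV_chain2[OF _ d\<tau>[OF \<open>U 0 < v\<close>], of W] dW[OF t(1)] by (simp add: t_def)
    moreover have "(k1 * d0 * U t - W t * (k1 * (U t + W t) + b0)) * inverse (k2 * W t) = orbit_slope v (g v)"
      using W_pos[OF t(1)] k2_pos t by (simp add: orbit_slope_def g_def t_def divide_inverse)
    ultimately show ?thesis by simp
  qed
  moreover have "in_wedge (uw_point v (g v))" if v: "v > v0" for v
    using wedge[of "\<tau> v"] \<tau>[of v] v U0 uw_point_of[of "x (\<tau> v)"] by (simp add: g_def U_def W_def)
  ultimately show ?thesis by blast
qed

text \<open>\<open>approx_graph n\<close> is the orbit through the point of the eigendirection \<open>w = mu u\<close> at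
  \<open>u = 1/(n + 1)\<close>, written as a graph over \<open>u\<close>. Since \<open>orbit_slope u w\<close> decreases in \<open>w\<close>,
  such graphs approach each other as \<open>u\<close> grows; this makes them a Cauchy sequence whose limit
  is the unstable manifold of the saddle.\<close>

definition wedge_graph :: "real \<Rightarrow> (real \<Rightarrow> real) \<Rightarrow> bool" where
  "wedge_graph v0 g \<longleftrightarrow> (\<forall>v>v0. (g has_real_derivative orbit_slope v (g v)) (at v)) \<and>
             (\<forall>v>v0. lower_edge v \<le> g v \<and> g v \<le> mu * v \<and> g v \<le> w_max)"

definition approx_graph :: "nat \<Rightarrow> real \<Rightarrow> real" where
  "approx_graph n = (SOME g. wedge_graph (1 / (real n + 1)) g)"

lemma approx_graph_wedge: "wedge_graph (1 / (real n + 1)) (approx_graph n)"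
proof -
  have "0 < 1 / (real n + 1)" "1 / (real n + 1) \<le> 1" by (simp_all add: field_simps)
  from wedge_orbit_graph[OF in_wedge_on_eigendirection[OF this]]
  have "\<exists>g. wedge_graph (1 / (real n + 1)) g" unfolding wedge_graph_def in_wedge_def by (simp, blast)
  then show ?thesis unfolding approx_graph_def by (rule someI_ex)
qed

lemma approx_graph_deriv:
  "v > 1 / (real n + 1) \<Longrightarrow> (approx_graph n has_real_derivative orbit_slope v (approx_graph n v)) (at v)"
  using approx_graph_wedge[of n] by (simp add: wedge_graph_def)
lemma approx_graph_bounds:
  "v > 1 / (real n + 1) \<Longrightarrow>
    lower_edge v \<le> approx_graph n v \<and> approx_graph n v \<le> mu * v \<and> approx_graph n v \<le> w_max"
  using approx_graph_wedge[of n] by (simp add: wedge_graph_def)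

lemma orbit_slope_diff_abs:
  assumes "u > 0" "w1 > 0" "w2 > 0"
  shows "\<bar>orbit_slope u w1 - orbit_slope u w2\<bar> = \<bar>w1 - w2\<bar> * (k1 * d0 * u / (k2 * w1 * w2) + k1 / k2)"
proof -
  have "k1 * d0 * u / (k2 * w1 * w2) + k1 / k2 \<ge> 0" using assms k1 k2_pos d0_pos by simp
  moreover have "\<bar>- (w1 - w2)\<bar> = \<bar>w1 - w2\<bar>" by simp
  ultimately show ?thesis using orbit_slope_diff[of w1 w2 u] assms by (simp only: abs_mult)
qed

lemma orbit_graphs_contract:
  assumes a0: "a \<ge> 0"
    and d1: "\<And>u. u > a \<Longrightarrow> (g1 has_real_derivative orbit_slope u (g1 u)) (at u)"
    and d2: "\<And>u. u > a \<Longrightarrow> (g2 has_real_derivative orbit_slope u (g2 u)) (at u)"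
    and p1: "\<And>u. u > a \<Longrightarrow> g1 u > 0" and p2: "\<And>u. u > a \<Longrightarrow> g2 u > 0"
    and v: "a < v" "v \<le> v'"
  shows "\<bar>g1 v' - g2 v'\<bar> \<le> \<bar>g1 v - g2 v\<bar>"
proof -
  have "(g1 v' - g2 v')\<^sup>2 \<le> (g1 v - g2 v)\<^sup>2"
  proof (rule DERIV_nonpos_imp_nonincreasing[where f="\<lambda>u. (g1 u - g2 u)\<^sup>2", OF v(2)])
    fix u assume u: "v \<le> u" "u \<le> v'"
    then have ua: "u > a" using v by simp
    have "((\<lambda>u. (g1 u - g2 u)\<^sup>2) has_real_derivative
        2 * (g1 u - g2 u) * (orbit_slope u (g1 u) - orbit_slope u (g2 u))) (at u)"
      using DERIV_power[OF DERIV_diff[OF d1[OF ua] d2[OF ua]], of 2] by (simp add: algebra_simps)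
    moreover have "2 * (g1 u - g2 u) * (orbit_slope u (g1 u) - orbit_slope u (g2 u)) \<le> 0"
    proof -
      define K where "K = k1 * d0 * u / (k2 * g1 u * g2 u) + k1 / k2"
      have "K \<ge> 0" using k1 k2_pos d0_pos p1[OF ua] p2[OF ua] ua a0 by (simp add: K_def)
      moreover have "orbit_slope u (g1 u) - orbit_slope u (g2 u) = - (g1 u - g2 u) * K"
        using orbit_slope_diff p1[OF ua] p2[OF ua] by (simp add: K_def)
      moreover have "2 * (g1 u - g2 u) * (- (g1 u - g2 u) * K) = - (2 * K * (g1 u - g2 u)\<^sup>2)"
        by (simp add: power2_eq_square algebra_simps)
      ultimately show ?thesis by simp
    qed
    ultimately show "\<exists>y. ((\<lambda>u. (g1 u - g2 u)\<^sup>2) has_real_derivative y) (at u) \<and> y \<le> 0" by blast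
  qed
  then show ?thesis by (simp add: abs_le_square_iff)
qed

lemma approx_graph_pos: "v > 1 / (real n + 1) \<Longrightarrow> approx_graph n v > 0"
proof -
  assume v: "v > 1 / (real n + 1)"
  have "v > 0" using v by (smt (verit) divide_nonneg_nonneg of_nat_0_le_iff)
  then show ?thesis using approx_graph_bounds[OF v] lower_edge_pos[of v] by simp
qed

lemma approx_graphs_close:
  assumes k: "k \<ge> 1" and j: "j \<ge> k" and v: "v \<ge> 1 / real k"
  shows "\<bar>approx_graph j v - approx_graph k v\<bar> \<le> mu / real k"
proof -
  define a where "a = 1 / (real k + 1)"
  have a0: "a \<ge> 0" by (simp add: a_def)
  have ak: "a < 1 / real k" using k by (simp add: a_def frac_less2)
  have aj: "1 / (real j + 1) \<le> a" using j by (simp add: a_def frac_le)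
  have "\<bar>approx_graph j v - approx_graph k v\<bar> \<le> \<bar>approx_graph j (1 / real k) - approx_graph k (1 / real k)\<bar>"
  proof (rule orbit_graphs_contract[OF a0 _ _ _ _ ak v])
    show "(approx_graph j has_real_derivative orbit_slope u (approx_graph j u)) (at u)" if "u > a" for u
      using approx_graph_deriv that aj by simp
    show "(approx_graph k has_real_derivative orbit_slope u (approx_graph k u)) (at u)" if "u > a" for u
      using approx_graph_deriv that by (simp add: a_def)
    show "approx_graph j u > 0" if "u > a" for u using approx_graph_pos that aj by simp
    show "approx_graph k u > 0" if "u > a" for u using approx_graph_pos that by (simp add: a_def)
  qed
  also have "\<dots> \<le> mu / real k"
  proof -
    have "1 / real k > 1 / (real j + 1)" using aj ak by simp
    then have bj: "0 < approx_graph j (1 / real k)" "approx_graph j (1 / real k) \<le> mu * (1 / real k)"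
      using approx_graph_pos[of j "1 / real k"] approx_graph_bounds[of j "1 / real k"] by auto
    have bk: "0 < approx_graph k (1 / real k)" "approx_graph k (1 / real k) \<le> mu * (1 / real k)"
      using approx_graph_pos[of k "1 / real k"] approx_graph_bounds[of k "1 / real k"] ak by (auto simp: a_def)
    show ?thesis using bj bk by (simp add: abs_le_iff)
  qed
  finally show ?thesis .
qed

definition unstable_graph :: "real \<Rightarrow> real" where "unstable_graph v = lim (\<lambda>j. approx_graph j v)"

lemma small_inverse_nat_exists: "v > 0 \<Longrightarrow> e > 0 \<Longrightarrow> \<exists>k::nat. k \<ge> 1 \<and> 1 / real k \<le> v \<and> mu / real k < e"
proof -
  assume v: "v > 0" and e: "e > 0"
  define k where "k = nat (ceiling (1 / v)) + nat (ceiling (mu / e)) + 1"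
  have k1': "real k \<ge> 1 / v" "real k > mu / e" "k \<ge> 1" unfolding k_def
    by (simp_all add: add.commute) (linarith, linarith)
  have kp: "real k > 0" using k1' by simp
  have "1 / real k \<le> v" using k1'(1) v kp by (simp add: divide_le_eq mult.commute)
  moreover have "mu / real k < e" using k1'(2) e kp by (simp add: divide_less_eq mult.commute)
  ultimately show ?thesis using k1'(3) by blast
qed

lemma approx_graph_converges: "v > 0 \<Longrightarrow> (\<lambda>j. approx_graph j v) \<longlonglongrightarrow> unstable_graph v"
proof -
  assume v: "v > 0"
  have "Cauchy (\<lambda>j. approx_graph j v)"
  proof (rule metric_CauchyI)
    fix e :: real assume e: "e > 0"
    obtain k where k: "k \<ge> 1" "1 / real k \<le> v" "mu / real k < e / 2"
      using small_inverse_nat_exists[OF v, of "e/2"] e by auto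
    show "\<exists>M. \<forall>m\<ge>M. \<forall>n\<ge>M. dist (approx_graph m v) (approx_graph n v) < e"
    proof (intro exI allI impI)
      fix m n assume mn: "k \<le> m" "k \<le> n"
      have "\<bar>approx_graph m v - approx_graph k v\<bar> \<le> mu / real k" by (rule approx_graphs_close[OF k(1) mn(1) k(2)])
      moreover have "\<bar>approx_graph n v - approx_graph k v\<bar> \<le> mu / real k" by (rule approx_graphs_close[OF k(1) mn(2) k(2)])
      moreover have "\<bar>approx_graph m v - approx_graph n v\<bar> \<le> \<bar>approx_graph m v - approx_graph k v\<bar> + \<bar>approx_graph n v - approx_graph k v\<bar>"
        using abs_triangle_ineq[of "approx_graph m v - approx_graph k v" "approx_graph k v - approx_graph n v"] by (simp add: abs_minus_commute)
      ultimately have "\<bar>approx_graph m v - approx_graph n v\<bar> < e" using k(3) by linarith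
      then show "dist (approx_graph m v) (approx_graph n v) < e" by (simp add: dist_real_def)
    qed
  qed
  then show ?thesis by (simp add: unstable_graph_def Cauchy_convergent_iff convergent_LIMSEQ_iff)
qed

lemma unstable_graph_close:
  assumes k: "k \<ge> 1" and v: "v \<ge> 1 / real k"
  shows "\<bar>unstable_graph v - approx_graph k v\<bar> \<le> mu / real k"
proof -
  have "1 / real k > 0" using k by simp
  then have vp: "v > 0" using v by linarith
  show ?thesis
  proof (rule LIMSEQ_le_const2)
    show "(\<lambda>j. \<bar>approx_graph j v - approx_graph k v\<bar>) \<longlonglongrightarrow> \<bar>unstable_graph v - approx_graph k v\<bar>"
      by (intro tendsto_intros approx_graph_converges[OF vp])
    show "\<exists>N. \<forall>j\<ge>N. \<bar>approx_graph j v - approx_graph k v\<bar> \<le> mu / real k"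
      using approx_graphs_close[OF k _ v] by blast
  qed
qed

lemma
  assumes v: "v > 0"
  shows unstable_graph_ge: "lower_edge v \<le> unstable_graph v" and unstable_graph_le: "unstable_graph v \<le> mu * v"
    and unstable_graph_le_w_max: "unstable_graph v \<le> w_max" and unstable_graph_pos: "unstable_graph v > 0"
proof -
  obtain N :: nat where N: "1 / (real N + 1) < v"
  proof -
    obtain k where k: "k \<ge> 1" "1 / real k \<le> v" "mu / real k < 1" using small_inverse_nat_exists[OF v, of 1] by auto
    have "1 / (real k + 1) < 1 / real k" using k(1) by (simp add: frac_less2)
    then show ?thesis using that k(2) by (meson order_less_le_trans)
  qed
  have ev: "\<forall>\<^sub>F j in sequentially. lower_edge v \<le> approx_graph j v \<and> approx_graph j v \<le> mu * v \<and> approx_graph j v \<le> w_max"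
    unfolding eventually_sequentially
  proof (intro exI allI impI)
    fix j assume "N \<le> j"
    then have "1 / (real j + 1) \<le> 1 / (real N + 1)" by (simp add: frac_le)
    then show "lower_edge v \<le> approx_graph j v \<and> approx_graph j v \<le> mu * v \<and> approx_graph j v \<le> w_max" using approx_graph_bounds N by simp
  qed
  have c: "(\<lambda>j. approx_graph j v) \<longlonglongrightarrow> unstable_graph v" by (rule approx_graph_converges[OF v])
  show l: "lower_edge v \<le> unstable_graph v" by (rule tendsto_lowerbound[OF c]) (use ev in \<open>auto elim: eventually_mono\<close>)
  show "unstable_graph v \<le> mu * v" by (rule tendsto_upperbound[OF c]) (use ev in \<open>auto elim: eventually_mono\<close>)
  show "unstable_graph v \<le> w_max" by (rule tendsto_upperbound[OF c]) (use ev in \<open>auto elim: eventually_mono\<close>)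
  show "unstable_graph v > 0" using l lower_edge_pos[of v] v by simp
qed

lemma orbit_slope_approx_graph_close:
  assumes v: "v > 0" and N: "N \<ge> 1" "1 / real N \<le> v / 2" and u: "v / 2 \<le> u" "u \<le> 2 * v"
  shows "\<bar>orbit_slope u (approx_graph (j + N) u) - orbit_slope u (unstable_graph u)\<bar>
    \<le> mu / real (j + N) * (k1 * d0 * (2 * v) / (k2 * (lower_edge (v / 2))\<^sup>2) + k1 / k2)"
proof -
  define S where "S = {v / 2 .. 2 * v}"
  define f where "f j = approx_graph (j + N)" for j
  have Npos: "real N > 0" using N by simp
  have uS: "u > 0" "u \<ge> 1 / real N" "u \<le> 2 * v" "u \<ge> v / 2" if "u \<in> S" for u
    using that N v Npos by (auto simp: S_def)
  have lv: "lower_edge (v / 2) > 0" using lower_edge_pos[of "v/2"] v by simp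
  define Kc where "Kc = k1 * d0 * (2 * v) / (k2 * (lower_edge (v / 2))\<^sup>2) + k1 / k2"
  have closeb: "\<bar>f j u - unstable_graph u\<bar> \<le> mu / real (j + N)" if u: "u \<in> S" for j u
  proof -
    have "1 / real (j + N) \<le> 1 / real N" using Npos by (simp add: frac_le)
    then have "u \<ge> 1 / real (j + N)" using uS[OF u] by linarith
    then show ?thesis using unstable_graph_close[of "j + N" u] N by (simp add: f_def abs_minus_commute)
  qed
  have lowb: "f j u \<ge> lower_edge (v / 2)" "unstable_graph u \<ge> lower_edge (v / 2)" if u: "u \<in> S" for j u
  proof -
    have m: "lower_edge (v / 2) \<le> lower_edge u" using uS[OF u] v by (intro lower_edge_mono) auto
    have "1 / (real (j + N) + 1) < 1 / real N" using Npos by (simp add: frac_less2)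
    then have "u > 1 / (real (j + N) + 1)" using uS[OF u] by linarith
    then show "f j u \<ge> lower_edge (v / 2)" using approx_graph_bounds[of "j + N" u] m by (simp add: f_def)
    show "unstable_graph u \<ge> lower_edge (v / 2)" using unstable_graph_ge[OF uS(1)[OF u]] m by simp
  qed
  have Hb: "\<bar>orbit_slope u (f j u) - orbit_slope u (unstable_graph u)\<bar> \<le> mu / real (j + N) * Kc" if u: "u \<in> S" for j u
  proof -
    have fp: "f j u > 0" "unstable_graph u > 0" using lowb(1)[OF u, of j] lowb(2)[OF u] lv by linarith+
    have "\<bar>orbit_slope u (f j u) - orbit_slope u (unstable_graph u)\<bar> = \<bar>f j u - unstable_graph u\<bar> * (k1 * d0 * u / (k2 * f j u * unstable_graph u) + k1 / k2)"
      by (rule orbit_slope_diff_abs[OF uS(1)[OF u] fp])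
    also have "\<dots> \<le> mu / real (j + N) * Kc"
    proof (rule mult_mono)
      show "\<bar>f j u - unstable_graph u\<bar> \<le> mu / real (j + N)" by (rule closeb[OF u])
      have "k1 * d0 * u / (k2 * f j u * unstable_graph u) \<le> k1 * d0 * (2 * v) / (k2 * (lower_edge (v / 2))\<^sup>2)"
      proof (rule frac_le)
        show "0 \<le> k1 * d0 * (2 * v)" using k1 d0_pos v by simp
        show "k1 * d0 * u \<le> k1 * d0 * (2 * v)" using uS[OF u] k1 d0_pos by (simp add: mult_left_mono)
        show "0 < k2 * (lower_edge (v / 2))\<^sup>2" using k2_pos lv by simp
        have "(lower_edge (v / 2))\<^sup>2 \<le> f j u * unstable_graph u"
          unfolding power2_eq_square by (rule mult_mono) (use lowb(1)[OF u, of j] lowb(2)[OF u] lv in linarith)+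
        then show "k2 * (lower_edge (v / 2))\<^sup>2 \<le> k2 * f j u * unstable_graph u" using k2_pos by (simp add: mult.assoc)
      qed
      then show "k1 * d0 * u / (k2 * f j u * unstable_graph u) + k1 / k2 \<le> Kc" by (simp add: Kc_def)
      show "0 \<le> mu / real (j + N)" using mu_pos by simp
      show "0 \<le> k1 * d0 * u / (k2 * f j u * unstable_graph u) + k1 / k2" using k1 d0_pos uS[OF u] k2_pos fp by simp
    qed
    finally show ?thesis .
  qed
  show ?thesis using Hb[of u j] u by (simp add: S_def f_def Kc_def)
qed

lemma unstable_graph_deriv:
  assumes v: "v > 0"
  shows "(unstable_graph has_real_derivative orbit_slope v (unstable_graph v)) (at v)"
proof -
  obtain N :: nat where N: "N \<ge> 1" "1 / real N \<le> v / 2"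
    using small_inverse_nat_exists[of "v/2" 1] v by auto
  have Npos: "real N > 0" using N by simp
  define Kc where "Kc = k1 * d0 * (2 * v) / (k2 * (lower_edge (v / 2))\<^sup>2) + k1 / k2"
  show ?thesis
  proof (rule DERIV_sequence_limit[where f="\<lambda>j. approx_graph (j + N)" and a="v / 2" and b="2 * v"])
    show "v / 2 < v" "v < 2 * v" using v by simp_all
    fix u assume u: "u \<in> {v / 2..2 * v}"
    have "1 / (real (j + N) + 1) < 1 / real N" for j using Npos by (simp add: frac_less2)
    moreover have "1 / real N \<le> u" using u N(2) by simp
    ultimately have "u > 1 / (real (j + N) + 1)" for j by (meson order_less_le_trans)
    then show "(approx_graph (j + N) has_real_derivative orbit_slope u (approx_graph (j + N) u)) (at u)" for j
      using approx_graph_deriv by blast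
    show "(\<lambda>j. approx_graph (j + N) u) \<longlonglongrightarrow> unstable_graph u"
      using LIMSEQ_ignore_initial_segment[OF approx_graph_converges, of u N] u v by simp
  next
    fix e :: real assume e: "e > 0"
    have "(\<lambda>j. mu * Kc * (1 / real (j + N))) \<longlonglongrightarrow> mu * Kc * 0"
      by (intro tendsto_intros LIMSEQ_ignore_initial_segment[OF lim_inverse_n'])
    then have "\<forall>\<^sub>F j in sequentially. mu * Kc * (1 / real (j + N)) < e" using e by (simp add: order_tendsto_iff)
    then show "\<forall>\<^sub>F j in sequentially. \<forall>u\<in>{v / 2..2 * v}.
        \<bar>orbit_slope u (approx_graph (j + N) u) - orbit_slope u (unstable_graph u)\<bar> \<le> e"
    proof (rule eventually_mono)
      fix j assume j: "mu * Kc * (1 / real (j + N)) < e"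
      show "\<forall>u\<in>{v / 2..2 * v}.
          \<bar>orbit_slope u (approx_graph (j + N) u) - orbit_slope u (unstable_graph u)\<bar> \<le> e"
      proof
        fix u assume "u \<in> {v / 2..2 * v}"
        then have "\<bar>orbit_slope u (approx_graph (j + N) u) - orbit_slope u (unstable_graph u)\<bar>
            \<le> mu / real (j + N) * Kc"
          using orbit_slope_approx_graph_close[OF v N] by (simp add: Kc_def)
        then show "\<bar>orbit_slope u (approx_graph (j + N) u) - orbit_slope u (unstable_graph u)\<bar> \<le> e"
          using j by simp
      qed
    qed
  qed
qed

section \<open>The connection from P0 to P1\<close>

definition graph_gap :: "real \<times> real \<Rightarrow> real" where
  "graph_gap p = w_of p - unstable_graph (u_of p)"

definition gap_rate :: "real \<times> real \<Rightarrow> real" where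
  "gap_rate p = k1 * d0 * u_of p / unstable_graph (u_of p) + k1 * w_of p"

lemma graph_gap_deriv:
  assumes sol: "is_solution F K z" and t: "t \<in> K" and U: "u_of (z t) > 0"
  shows "((\<lambda>t. graph_gap (z t)) has_real_derivative - gap_rate (z t) * graph_gap (z t)) (at t)"
proof -
  define u w V where "u = u_of (z t)" and "w = w_of (z t)" and "V = unstable_graph u"
  have Vp: "V > 0" using unstable_graph_pos[of u] U by (simp add: V_def u_def)
  have d: "((\<lambda>t. w_of (z t) - unstable_graph (u_of (z t))) has_real_derivative
      (k1 * d0 * u - w * (k1 * (u + w) + b0)) - orbit_slope u V * (k2 * w)) (at t)"
    using DERIV_diff[OF uw_deriv(2)[OF sol t] DERIV_chain2[OF unstable_graph_deriv[OF U] uw_deriv(1)[OF sol t]]]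
    by (simp add: u_def w_def V_def)
  have HV: "orbit_slope u V = (k1 * d0 * u - V * (k1 * (u + V) + b0)) / (k2 * V)"
    using orbit_slope_mult[of V u] Vp k2_pos by (simp add: field_simps)
  have "(k1 * d0 * u - w * (k1 * (u + w) + b0)) - orbit_slope u V * (k2 * w)
      = - (k1 * d0 * u / V + k1 * w) * (w - V)"
    unfolding HV using Vp k2_pos by (simp add: field_simps)
  then show ?thesis using d by (simp add: u_def w_def V_def graph_gap_def gap_rate_def)
qed

lemma graph_gap_sq_deriv:
  assumes "is_solution F K z" "t \<in> K" "u_of (z t) > 0"
  shows "((\<lambda>t. (graph_gap (z t))\<^sup>2) has_real_derivative - 2 * gap_rate (z t) * (graph_gap (z t))\<^sup>2) (at t)"
  using DERIV_power[OF graph_gap_deriv[OF assms], of 2] by (simp add: power2_eq_square algebra_simps)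

lemma graph_gap_sq_nonincreasing:
  assumes sol: "is_solution F K z" and ab: "a \<in> K" "b \<in> K" "a \<le> b"
    and pos: "\<And>s. a \<le> s \<Longrightarrow> s \<le> b \<Longrightarrow> u_of (z s) > 0 \<and> w_of (z s) > 0"
  shows "(graph_gap (z b))\<^sup>2 \<le> (graph_gap (z a))\<^sup>2"
proof (rule DERIV_nonpos_imp_nonincreasing[where f="\<lambda>t. (graph_gap (z t))\<^sup>2", OF ab(3)])
  fix s assume s: "a \<le> s" "s \<le> b"
  have sK: "s \<in> K" using mem_is_interval_1_I[OF solution_open_interval(2)[OF sol] ab(1,2) s] .
  have "gap_rate (z s) \<ge> 0"
    using pos[OF s] k1 d0_pos unstable_graph_pos[of "u_of (z s)"] by (simp add: gap_rate_def)
  then have "- 2 * gap_rate (z s) * (graph_gap (z s))\<^sup>2 \<le> 0" by simp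
  then show "\<exists>y. ((\<lambda>t. (graph_gap (z t))\<^sup>2) has_real_derivative y) (at s) \<and> y \<le> 0"
    using graph_gap_sq_deriv[OF sol sK] pos[OF s] by blast
qed

lemma graph_gap_zero_backward:
  assumes sol: "is_solution F K z" and ab: "a \<in> K" "b \<in> K" "a \<le> b"
    and pos: "\<And>s. a \<le> s \<Longrightarrow> s \<le> b \<Longrightarrow> u_of (z s) > 0" and zero: "graph_gap (z b) = 0"
  shows "graph_gap (z a) = 0"
proof -
  have inK: "s \<in> K" if "a \<le> s" "s \<le> b" for s
    using mem_is_interval_1_I[OF solution_open_interval(2)[OF sol] ab(1,2) that] .
  have "isCont (\<lambda>t. gap_rate (z t)) s" if "a \<le> s" "s \<le> b" for s
  proof -
    have z: "isCont z s" using solution_isCont[OF sol inK[OF that]] .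
    have zu: "isCont (\<lambda>t. u_of (z t)) s" using z unfolding u_of_def by (intro continuous_intros)
    have "isCont (\<lambda>t. unstable_graph (u_of (z t))) s"
      using isCont_o2[OF zu DERIV_isCont[OF unstable_graph_deriv[OF pos[OF that]]]] .
    moreover have "unstable_graph (u_of (z s)) \<noteq> 0" using unstable_graph_pos[OF pos[OF that]] by simp
    ultimately show ?thesis unfolding gap_rate_def u_of_def w_of_def using z
      by (intro continuous_intros) (auto simp: u_of_def)
  qed
  then have cont: "continuous_on {a..b} (\<lambda>t. gap_rate (z t))"
    by (intro continuous_at_imp_continuous_on) auto
  obtain M where M: "\<forall>y\<in>(\<lambda>t. gap_rate (z t)) ` {a..b}. norm y \<le> M"
    using compact_imp_bounded[OF compact_continuous_image[OF cont compact_Icc]] unfolding bounded_iff by blast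
  have "(graph_gap (z a))\<^sup>2 = 0"
  proof (rule gronwall_vanishing[where e="\<lambda>t. (graph_gap (z t))\<^sup>2"
        and e'="\<lambda>s. - 2 * gap_rate (z s) * (graph_gap (z s))\<^sup>2" and M="2 * M" and a=a and b=b and tz=b])
    fix s assume s: "a \<le> s" "s \<le> b"
    show "((\<lambda>t. (graph_gap (z t))\<^sup>2) has_real_derivative - 2 * gap_rate (z s) * (graph_gap (z s))\<^sup>2) (at s)"
      using graph_gap_sq_deriv[OF sol inK[OF s] pos[OF s]] .
    have "\<bar>gap_rate (z s)\<bar> \<le> M" using M s by auto
    then have "\<bar>gap_rate (z s)\<bar> * (graph_gap (z s))\<^sup>2 \<le> M * (graph_gap (z s))\<^sup>2" by (simp add: mult_right_mono)
    then show "\<bar>- 2 * gap_rate (z s) * (graph_gap (z s))\<^sup>2\<bar> \<le> 2 * M * (graph_gap (z s))\<^sup>2" by (simp add: abs_mult)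
  qed (use ab zero in auto)
  then show ?thesis by simp
qed

lemma solution_image_unstable_graph:
  assumes sol: "is_solution F K z"
    and pos: "\<And>t. t \<in> K \<Longrightarrow> u_of (z t) > 0 \<and> w_of (z t) = unstable_graph (u_of (z t))"
    and lo: "((\<lambda>t. u_of (z t)) \<longlongrightarrow> 0) (lower_end K)"
    and hi: "filterlim (\<lambda>t. u_of (z t)) at_top (upper_end K)"
  shows "z ` K = {uw_point u (unstable_graph u) | u. u > 0}"
proof
  show "z ` K \<subseteq> {uw_point u (unstable_graph u) | u. u > 0}"
  proof
    fix p assume "p \<in> z ` K"
    then obtain t where t: "t \<in> K" "p = z t" by blast
    have "p = uw_point (u_of (z t)) (w_of (z t))" using uw_point_of[of "z t"] t by simp
    then show "p \<in> {uw_point u (unstable_graph u) | u. u > 0}" using pos[OF t(1)] by auto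
  qed
  show "{uw_point u (unstable_graph u) | u. u > 0} \<subseteq> z ` K"
  proof
    fix p assume "p \<in> {uw_point u (unstable_graph u) | u. u > 0}"
    then obtain u where u: "u > 0" "p = uw_point u (unstable_graph u)" by blast
    have oK: "open K" "is_interval K" "K \<noteq> {}" using sol by (auto simp: is_solution_def)
    obtain t0 where t0: "t0 \<in> K" using oK(3) by blast
    have e1: "\<forall>\<^sub>F t in lower_end K. u_of (z t) < u \<and> (t \<in> K \<and> t < t0)"
      using order_tendstoD(2)[OF lo u(1)] eventually_lower_end[OF oK(1,2) t0] by (rule eventually_conj)
    obtain ta where ta: "u_of (z ta) < u" "ta \<in> K" using eventually_happens'[OF lower_end_neq_bot e1] by blast
    have e2: "\<forall>\<^sub>F t in upper_end K. u < u_of (z t) \<and> (t \<in> K \<and> t > t0)"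
      using filterlim_at_top_dense[THEN iffD1, OF hi, rule_format, of u] eventually_upper_end[OF oK(1,2) t0]
      by (rule eventually_conj)
    obtain tb where tb: "u < u_of (z tb)" "tb \<in> K" using eventually_happens'[OF upper_end_neq_bot e2] by blast
    have cU: "continuous_on K (\<lambda>t. u_of (z t))"
      using uw_deriv(1)[OF sol] by (meson DERIV_isCont continuous_at_imp_continuous_on)
    have "connected ((\<lambda>t. u_of (z t)) ` K)"
      using connected_continuous_image[OF cU] oK(2) by (simp add: is_interval_connected_1)
    then have "is_interval ((\<lambda>t. u_of (z t)) ` K)" by (simp add: is_interval_connected_1)
    then have "u \<in> (\<lambda>t. u_of (z t)) ` K"
      unfolding is_interval_1 using ta tb by (meson imageI less_imp_le)
    then obtain t where t: "t \<in> K" "u_of (z t) = u" by blast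
    have "z t = uw_point (u_of (z t)) (w_of (z t))" using uw_point_of[of "z t"] by simp
    also have "\<dots> = p" using pos[OF t(1)] t(2) u(2) by simp
    finally show "p \<in> z ` K" using t(1) by (metis imageI)
  qed
qed

lemma in_wedge_unstable_graph: "v > 0 \<Longrightarrow> v \<le> 1 \<Longrightarrow> in_wedge (uw_point v (unstable_graph v))"
  using unstable_graph_ge[of v] unstable_graph_le[of v] unstable_graph_le_w_max[of v] unstable_graph_pos[of v]
    mu_pos by (simp add: in_wedge_def mult_le_cancel_left1)

context
  fixes I x
  assumes mx: "is_maximal_solution F I x" and I0: "0 \<in> I"
    and x0: "x 0 = uw_point 1 (unstable_graph 1)"
begin

private lemma x_solution: "is_solution F I x"
  using mx by (simp add: is_maximal_solution_def)

private lemma x_start: "in_wedge (x 0)"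
  using in_wedge_unstable_graph[of 1] x0 by simp

lemma heteroclinic_forward:
  assumes "t \<ge> 0"
  shows "t \<in> I" "in_wedge (x t)" "graph_gap (x t) = 0" "1 + k2 * lower_edge 1 * t \<le> u_of (x t)"
proof -
  have inI: "t \<in> I" if "t \<ge> 0" for t
    using interval_unbounded_above_mem[OF solution_open_interval(2)[OF x_solution] I0
        wedge_forward_complete[OF mx I0 x_start] that] .
  show "t \<in> I" using inI[OF assms] .
  show wedge: "in_wedge (x t)" using wedge_invariant[OF x_solution I0 x_start inI[OF assms] assms] .
  have "(graph_gap (x t))\<^sup>2 \<le> (graph_gap (x 0))\<^sup>2"
    using wedge_invariant[OF x_solution I0 x_start inI] assms
    by (intro graph_gap_sq_nonincreasing[OF x_solution I0 inI[OF assms]]) (auto simp: in_wedge_def)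
  then show "graph_gap (x t) = 0" using x0 by (simp add: graph_gap_def)
  show "1 + k2 * lower_edge 1 * t \<le> u_of (x t)"
    using wedge_u_growth(1)[OF x_solution I0 x_start inI[OF assms] assms] x0 by simp
qed

lemma heteroclinic_backward_pos:
  assumes t: "t \<in> I" "t \<le> 0"
  shows "u_of (x t) > 0"
proof (rule ccontr)
  assume nt: "\<not> u_of (x t) > 0"
  define U W where "U = (\<lambda>t. u_of (x t))" and "W = (\<lambda>t. w_of (x t))"
  have inI: "s \<in> I" if "t \<le> s" "s \<le> 0" for s
    using mem_is_interval_1_I[OF solution_open_interval(2)[OF x_solution] t(1) I0 that] .
  have contU: "isCont U s" and contW: "isCont W s" if "s \<in> I" for s
    using solution_isCont[OF x_solution that] unfolding U_def W_def u_of_def w_of_def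
    by (auto intro!: continuous_intros)
  define S where "S = {t..0} \<inter> U -` {..0}"
  have cS: "closed S" unfolding S_def
    by (rule continuous_closed_preimage) (use contU inI in \<open>auto intro!: continuous_at_imp_continuous_on\<close>)
  have tS: "t \<in> S" using nt t by (simp add: S_def U_def)
  have bdd: "bdd_above S" by (auto simp: S_def intro: bdd_aboveI[where M=0])
  define \<sigma> where "\<sigma> = Sup S"
  have \<sigma>S: "\<sigma> \<in> S" unfolding \<sigma>_def using closed_contains_Sup[OF _ bdd cS] tS by blast
  have U0: "U 0 = 1" using x0 by (simp add: U_def)
  have \<sigma>0: "\<sigma> < 0"
  proof -
    have "\<sigma> \<le> 0" "U \<sigma> \<le> 0" using \<sigma>S by (auto simp: S_def)
    moreover have "\<sigma> \<noteq> 0" using \<open>U \<sigma> \<le> 0\<close> U0 by auto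
    ultimately show ?thesis by simp
  qed
  have \<sigma>t: "t \<le> \<sigma>" using \<sigma>S by (simp add: S_def)
  have \<sigma>I: "\<sigma> \<in> I" using inI \<sigma>t \<sigma>0 by simp
  have right: "U s > 0" if "\<sigma> < s" "s \<le> 0" for s
  proof (rule ccontr)
    assume "\<not> U s > 0"
    then have "s \<in> S" using that \<sigma>t by (simp add: S_def)
    then have "s \<le> \<sigma>" unfolding \<sigma>_def using bdd by (simp add: cSup_upper)
    then show False using that by simp
  qed
  \<comment> \<open>after \<open>\<sigma>\<close> the orbit lies on the graph, so it is squeezed into \<open>P0\<close> as \<open>s\<close> decreases to \<open>\<sigma>\<close>\<close>
  have on_graph: "lower_edge (U s) \<le> W s \<and> W s \<le> mu * U s" if "\<sigma> < s" "s \<le> 0" for s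
  proof -
    have "graph_gap (x s) = 0"
      using graph_gap_zero_backward[OF x_solution inI[of s] I0 _ _, of] that \<sigma>t right x0
      by (auto simp: graph_gap_def U_def)
    then show ?thesis
      using unstable_graph_ge[OF right[OF that]] unstable_graph_le[OF right[OF that]] by (simp add: graph_gap_def U_def W_def)
  qed
  have "U \<sigma> \<ge> 0"
    by (rule isCont_lowerbound_right[OF contU[OF \<sigma>I] \<sigma>0]) (use right in \<open>auto intro: less_imp_le\<close>)
  then have Us: "U \<sigma> = 0" using \<sigma>S by (simp add: S_def)
  have "W \<sigma> - mu * U \<sigma> \<le> 0"
  proof (rule isCont_upperbound_right[where f="\<lambda>s. W s - mu * U s", OF _ \<sigma>0])
    show "isCont (\<lambda>s. W s - mu * U s) \<sigma>" using contU[OF \<sigma>I] contW[OF \<sigma>I] by (intro continuous_intros)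
    show "W s - mu * U s \<le> 0" if "\<sigma> < s" "s < 0" for s using on_graph[of s] that by simp
  qed
  moreover have "W \<sigma> \<ge> 0"
  proof (rule isCont_lowerbound_right[OF contW[OF \<sigma>I] \<sigma>0])
    fix s assume s: "\<sigma> < s" "s < 0"
    have "lower_edge (U s) \<ge> 0" using lower_edge_nonneg[of "U s"] right[of s] s by simp
    then show "W s \<ge> 0" using on_graph[of s] s by simp
  qed
  ultimately have "W \<sigma> = 0" using Us by simp
  then have "x \<sigma> = (s0, c0)" using uw_zero_imp_P0[of "x \<sigma>"] Us by (simp add: U_def W_def)
  then have "x 0 = (s0, c0)" using solution_through_equilibrium[OF x_solution F_at_P0 \<sigma>I _ I0] by simp
  then show False using U0 by (simp add: U_def u_of_def)
qed

lemma heteroclinic_backward: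
  assumes t: "t \<in> I" "t \<le> 0"
  shows "graph_gap (x t) = 0"
proof (rule graph_gap_zero_backward[OF x_solution t(1) I0 t(2)])
  show "u_of (x s) > 0" if "t \<le> s" "s \<le> 0" for s
    using heteroclinic_backward_pos mem_is_interval_1_I[OF solution_open_interval(2)[OF x_solution] t(1) I0 that] that
    by blast
  show "graph_gap (x 0) = 0" using x0 by (simp add: graph_gap_def)
qed

lemma heteroclinic_on_graph: "t \<in> I \<Longrightarrow> u_of (x t) > 0 \<and> w_of (x t) = unstable_graph (u_of (x t))"
  using heteroclinic_forward[of t] heteroclinic_backward[of t] heteroclinic_backward_pos[of t]
  by (cases "t \<ge> 0") (auto simp: in_wedge_def graph_gap_def)

lemma heteroclinic_domain: "I = UNIV"
proof -
  have "\<not> bdd_below I"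
  proof (rule maximal_solution_unbounded_below[OF mx I0, of "\<bar>s0\<bar> + \<bar>c0\<bar> + 1 + 2 * mu"])
    fix t assume t: "t \<in> I" "t \<le> 0"
    have inI: "s \<in> I" if "t \<le> s" "s \<le> 0" for s
      using mem_is_interval_1_I[OF solution_open_interval(2)[OF x_solution] t(1) I0 that] .
    have "u_of (x t) \<le> u_of (x 0)"
    proof (rule DERIV_nonneg_imp_nondecreasing[where f="\<lambda>t. u_of (x t)", OF t(2)])
      fix s assume s: "t \<le> s" "s \<le> 0"
      have "w_of (x s) > 0"
        using heteroclinic_on_graph[OF inI[OF s]] unstable_graph_pos by simp
      then show "\<exists>y. ((\<lambda>t. u_of (x t)) has_real_derivative y) (at s) \<and> 0 \<le> y"
        using uw_deriv(1)[OF x_solution inI[OF s]] k2 by (intro exI[where x="k2 * w_of (x s)"]) simp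
    qed
    then have U: "0 < u_of (x t)" "u_of (x t) \<le> 1" using heteroclinic_on_graph[OF t(1)] x0 by auto
    then have "mu * u_of (x t) \<le> mu" using mu_pos by (simp add: mult_left_le_one_le)
    then have W: "0 < w_of (x t)" "w_of (x t) \<le> mu"
      using heteroclinic_on_graph[OF t(1)] unstable_graph_le[OF U(1)] unstable_graph_pos[OF U(1)] by auto
    have "norm (x t) = norm (uw_point (u_of (x t)) (w_of (x t)))" using uw_point_of[of "x t"] by simp
    also have "\<dots> \<le> \<bar>s0\<bar> + \<bar>c0\<bar> + \<bar>u_of (x t)\<bar> + 2 * \<bar>w_of (x t)\<bar>" by (rule norm_uw_point_le)
    also have "\<dots> \<le> \<bar>s0\<bar> + \<bar>c0\<bar> + 1 + 2 * mu" using U W by simp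
    finally show "norm (x t) \<le> \<bar>s0\<bar> + \<bar>c0\<bar> + 1 + 2 * mu" .
  qed
  moreover have "\<not> bdd_above I" using wedge_forward_complete[OF mx I0 x_start] .
  ultimately have "t \<in> I" for t
    using interval_unbounded_below_mem[OF solution_open_interval(2)[OF x_solution] I0, of t]
      interval_unbounded_above_mem[OF solution_open_interval(2)[OF x_solution] I0, of t]
    by (cases "t \<le> 0") auto
  then show ?thesis by blast
qed

lemma heteroclinic_u_tendsto_0: "((\<lambda>t. u_of (x t)) \<longlongrightarrow> 0) at_bot"
proof -
  define U W where "U = (\<lambda>t. u_of (x t))" and "W = (\<lambda>t. w_of (x t))"
  have graph: "U t > 0 \<and> W t = unstable_graph (U t)" for t
    using heteroclinic_on_graph heteroclinic_domain by (simp add: U_def W_def)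
  have dU: "(U has_real_derivative k2 * W t) (at t)" for t
    using uw_deriv(1)[OF x_solution] heteroclinic_domain by (simp add: U_def W_def)
  have Umono: "U a \<le> U b" if "a \<le> b" for a b
  proof (rule DERIV_nonneg_imp_nondecreasing[where f=U, OF that])
    fix s show "\<exists>y. (U has_real_derivative y) (at s) \<and> 0 \<le> y"
      using dU[of s] graph[of s] unstable_graph_pos[of "U s"] k2 by (intro exI[where x="k2 * W s"]) simp
  qed
  show ?thesis
    unfolding U_def[symmetric]
  proof (rule order_tendstoI)
    fix a :: real assume "a < 0"
    then show "\<forall>\<^sub>F t in at_bot. a < U t" using graph by (intro always_eventually) (metis less_trans)
  next
    fix a :: real assume a: "0 < a"
    show "\<forall>\<^sub>F t in at_bot. U t < a"
    proof (rule ccontr)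
      assume "\<not> (\<forall>\<^sub>F t in at_bot. U t < a)"
      then have "\<forall>N. \<exists>t\<le>N. U t \<ge> a" unfolding eventually_at_bot_linorder by (meson not_le)
      then have Uge: "U t \<ge> a" for t using Umono by (meson order_trans)
      \<comment> \<open>then \<open>U' \<ge> k2 lower_edge a > 0\<close> throughout, and \<open>U\<close> would become negative in the past\<close>
      have la: "lower_edge a > 0" using lower_edge_pos[of a] a by simp
      define T where "T = - 2 / (k2 * lower_edge a)"
      have T: "T \<le> 0" using k2_pos la by (simp add: T_def)
      have "U T - k2 * lower_edge a * T \<le> U 0 - k2 * lower_edge a * 0"
      proof (rule DERIV_nonneg_imp_nondecreasing[where f="\<lambda>s. U s - k2 * lower_edge a * s", OF T])
        fix s assume s: "T \<le> s" "s \<le> 0"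
        have "((\<lambda>s. U s - k2 * lower_edge a * s) has_real_derivative k2 * W s - k2 * lower_edge a) (at s)"
          using DERIV_diff[OF dU[of s] DERIV_cmult[OF DERIV_ident, of "k2 * lower_edge a"]] by simp
        moreover have "k2 * W s - k2 * lower_edge a \<ge> 0"
        proof -
          have "lower_edge a \<le> lower_edge (U s)" using Uge[of s] a by (intro lower_edge_mono) auto
          also have "\<dots> \<le> W s" using graph[of s] unstable_graph_ge[of "U s"] by simp
          finally show ?thesis using k2 by (simp add: mult_left_mono)
        qed
        ultimately show "\<exists>y. ((\<lambda>s. U s - k2 * lower_edge a * s) has_real_derivative y) (at s) \<and> 0 \<le> y"
          by blast
      qed
      moreover have "k2 * lower_edge a * T = -2" using k2_pos la by (simp add: T_def)
      ultimately have "U T \<le> -1" using x0 by (simp add: U_def)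
      then show False using graph[of T] by simp
    qed
  qed
qed

lemma heteroclinic_tendsto_P0: "(x \<longlongrightarrow> (s0, c0)) at_bot"
proof -
  have graph: "u_of (x t) > 0 \<and> w_of (x t) = unstable_graph (u_of (x t))" for t
    using heteroclinic_on_graph heteroclinic_domain by simp
  have "((\<lambda>t. w_of (x t)) \<longlongrightarrow> 0) at_bot"
  proof (rule tendsto_sandwich[where f="\<lambda>t. 0" and h="\<lambda>t. mu * u_of (x t)"])
    show "\<forall>\<^sub>F t in at_bot. 0 \<le> w_of (x t)"
      using graph unstable_graph_pos by (simp add: less_imp_le)
    show "\<forall>\<^sub>F t in at_bot. w_of (x t) \<le> mu * u_of (x t)"
      using graph unstable_graph_le by simp
    show "((\<lambda>t. mu * u_of (x t)) \<longlongrightarrow> 0) at_bot"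
      using tendsto_mult[OF tendsto_const heteroclinic_u_tendsto_0, of mu] by simp
  qed simp
  then have "((\<lambda>t. uw_point (u_of (x t)) (w_of (x t))) \<longlongrightarrow> uw_point 0 0) at_bot"
    unfolding uw_point_def by (intro tendsto_intros heteroclinic_u_tendsto_0)
  then have "(x \<longlongrightarrow> uw_point 0 0) at_bot" by (simp only: uw_point_of)
  then show ?thesis by (simp add: uw_point_def)
qed

lemma heteroclinic_u_at_top: "filterlim (\<lambda>t. u_of (x t)) at_top at_top"
proof -
  have l1: "k2 * lower_edge 1 > 0" using lower_edge_pos[of 1] k2_pos by simp
  have "filterlim (\<lambda>t. 1 + k2 * lower_edge 1 * t) at_top at_top"
    by (rule filterlim_tendsto_add_at_top[OF tendsto_const
          filterlim_tendsto_pos_mult_at_top[OF tendsto_const l1 filterlim_ident]])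
  moreover have "\<forall>\<^sub>F t in at_top. 1 + k2 * lower_edge 1 * t \<le> u_of (x t)"
    unfolding eventually_at_top_linorder by (intro exI[of _ 0] allI impI heteroclinic_forward(4))
  ultimately show ?thesis by (rule filterlim_at_top_mono)
qed

lemma heteroclinic_tendsto_P1: "((\<lambda>t. poincare (x t)) \<longlongrightarrow> P1) at_top"
proof -
  have wedge: "\<forall>\<^sub>F t in at_top. in_wedge (x t)"
    unfolding eventually_at_top_linorder by (intro exI[of _ 0] allI impI heteroclinic_forward(2))
  have "\<forall>\<^sub>F t in at_top. \<bar>snd (x t)\<bar> \<le> \<bar>c0\<bar> + w_max"
    using wedge by (rule eventually_mono) (auto simp: in_wedge_def w_of_def)
  moreover have "filterlim (\<lambda>t. fst (x t)) at_top at_top"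
  proof (rule filterlim_at_top_mono[OF filterlim_tendsto_add_at_top[OF tendsto_const heteroclinic_u_at_top]])
    show "\<forall>\<^sub>F t in at_top. s0 + u_of (x t) \<le> fst (x t)"
      using wedge by (rule eventually_mono) (auto simp: in_wedge_def u_of_def w_of_def)
  qed
  ultimately show ?thesis using tendsto_poincare_P1 by fastforce
qed

end

lemma uw_quadrant_invariant:
  assumes x_solution: "is_solution F K z" and t: "t0 \<in> K" "t \<in> K" "t0 \<le> t"
  shows "u_of (z t0) > 0 \<Longrightarrow> w_of (z t0) > 0 \<Longrightarrow> u_of (z t) > 0 \<and> w_of (z t) > 0"
    and "u_of (z t0) < 0 \<Longrightarrow> w_of (z t0) < 0 \<Longrightarrow> u_of (z t) < 0 \<and> w_of (z t) < 0"
proof -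
  define U W where "U = (\<lambda>t. u_of (z t))" and "W = (\<lambda>t. w_of (z t))"
  have inK: "s \<in> K" if "t0 \<le> s" "s \<le> t" for s
    using mem_is_interval_1_I[OF solution_open_interval(2)[OF x_solution] t(1,2) that] .
  have dU: "(U has_real_derivative k2 * W s) (at s)" if "t0 \<le> s" "s \<le> t" for s
    using uw_deriv(1)[OF x_solution inK[OF that]] by (simp add: U_def W_def)
  have dW: "(W has_real_derivative k1 * d0 * U s - W s * (k1 * (U s + W s) + b0)) (at s)"
    if "t0 \<le> s" "s \<le> t" for s
    using uw_deriv(2)[OF x_solution inK[OF that]] by (simp add: U_def W_def)
  have ab: "k2 > 0" "k1 * d0 > 0" using k2_pos k1_pos d0_pos by simp_all
  show "u_of (z t) > 0 \<and> w_of (z t) > 0" if "u_of (z t0) > 0" "w_of (z t0) > 0"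
    using positive_quadrant_invariant[OF ab t(3) dU dW] that by (simp add: U_def W_def)
  \<comment> \<open>the system is odd in \<open>(u, w)\<close> up to the factor \<open>\<phi> = k1 (u + w) + b0\<close>\<close>
  have "(\<lambda>s. - U s) t > 0 \<and> (\<lambda>s. - W s) t > 0" if "u_of (z t0) < 0" "w_of (z t0) < 0"
  proof (rule positive_quadrant_invariant[OF ab t(3), where \<phi>="\<lambda>t. k1 * (U t + W t) + b0"])
    show "((\<lambda>s. - U s) has_real_derivative k2 * (- W s)) (at s)" if "t0 \<le> s" "s \<le> t" for s
      using DERIV_minus[OF dU[OF that]] by simp
    show "((\<lambda>s. - W s) has_real_derivative k1 * d0 * (- U s) - (- W s) * (k1 * (U s + W s) + b0)) (at s)"
      if "t0 \<le> s" "s \<le> t" for s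
      using DERIV_minus[OF dW[OF that]] by (simp add: algebra_simps)
  qed (use that in \<open>simp_all add: U_def W_def\<close>)
  then show "u_of (z t) < 0 \<and> w_of (z t) < 0" if "u_of (z t0) < 0" "w_of (z t0) < 0"
    using that by (simp add: U_def W_def)
qed

context
  fixes J y
  assumes mx: "is_maximal_solution F J y"
    and from_P0: "((\<lambda>t. poincare (y t)) \<longlongrightarrow> poincare (s0, c0)) (lower_end J)"
    and to_P1: "((\<lambda>t. poincare (y t)) \<longlongrightarrow> P1) (upper_end J)"
begin

private lemma y_solution: "is_solution F J y"
  using mx by (simp add: is_maximal_solution_def)

lemma orbit_uw_tendsto_0:
  "((\<lambda>t. u_of (y t)) \<longlongrightarrow> 0) (lower_end J)" "((\<lambda>t. w_of (y t)) \<longlongrightarrow> 0) (lower_end J)"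
proof -
  have y: "(y \<longlongrightarrow> (s0, c0)) (lower_end J)" using from_P0 by (simp add: tendsto_poincare_iff)
  have "isCont u_of (s0, c0)" "isCont w_of (s0, c0)"
    unfolding u_of_def[abs_def] w_of_def[abs_def] by (intro continuous_intros)+
  then have "((\<lambda>t. u_of (y t)) \<longlongrightarrow> u_of (s0, c0)) (lower_end J)" "((\<lambda>t. w_of (y t)) \<longlongrightarrow> w_of (s0, c0)) (lower_end J)"
    using isCont_tendsto_compose[OF _ y] by blast+
  then show "((\<lambda>t. u_of (y t)) \<longlongrightarrow> 0) (lower_end J)" "((\<lambda>t. w_of (y t)) \<longlongrightarrow> 0) (lower_end J)"
    by (simp_all add: u_of_def w_of_def)
qed

lemma orbit_u_at_top: "filterlim (\<lambda>t. u_of (y t)) at_top (upper_end J)"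
  using poincare_tendsto_P1_imp_at_top[OF to_P1, of 1 "- s0 - c0"] by (simp add: u_of_def algebra_simps)

lemma orbit_not_negative: "t \<in> J \<Longrightarrow> \<not> (u_of (y t) < 0 \<and> w_of (y t) < 0)"
proof
  assume t: "t \<in> J" and neg: "u_of (y t) < 0 \<and> w_of (y t) < 0"
  have "\<forall>\<^sub>F s in upper_end J. 0 < u_of (y s) \<and> (s \<in> J \<and> s > t)"
    using filterlim_at_top_dense[THEN iffD1, OF orbit_u_at_top, rule_format, of 0]
      eventually_upper_end[OF solution_open_interval(1,2)[OF y_solution] t]
    by (rule eventually_conj)
  then obtain s where "0 < u_of (y s)" "s \<in> J" "s > t" using eventually_happens'[OF upper_end_neq_bot] by blast
  then show False using uw_quadrant_invariant(2)[OF y_solution t, of s] neg by force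
qed

lemma orbit_positive:
  assumes t2: "t2 \<in> J"
  shows "u_of (y t2) > 0 \<and> w_of (y t2) > 0"
proof (rule ccontr)
  assume not_pos: "\<not> (u_of (y t2) > 0 \<and> w_of (y t2) > 0)"
  define U W where "U = (\<lambda>t. u_of (y t))" and "W = (\<lambda>t. w_of (y t))"
  have oJ: "open J" "is_interval J" using solution_open_interval[OF y_solution] by simp_all
  have inJ: "s \<in> J" if "a \<in> J" "b \<in> J" "a \<le> s" "s \<le> b" for a b s
    using mem_is_interval_1_I[OF oJ(2) that] .
  have dU: "(U has_real_derivative k2 * W t) (at t)" if "t \<in> J" for t
    using uw_deriv(1)[OF y_solution that] by (simp add: U_def W_def)
  \<comment> \<open>before \<open>t2\<close> the orbit stays in the quadrants where \<open>U W \<le> 0\<close>, so \<open>U\<^sup>2\<close> decreases there\<close>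
  have "U t * W t \<le> 0" if "t \<in> J" "t \<le> t2" for t
  proof -
    have "\<not> (U t > 0 \<and> W t > 0)" using uw_quadrant_invariant(1)[OF y_solution that(1) t2 that(2)] not_pos
      by (auto simp: U_def W_def)
    moreover have "\<not> (U t < 0 \<and> W t < 0)" using orbit_not_negative[OF that(1)] by (simp add: U_def W_def)
    ultimately show ?thesis by (metis mult_nonneg_nonpos mult_nonpos_nonneg not_le less_le)
  qed
  then have U2: "(U t)\<^sup>2 \<le> (U \<tau>)\<^sup>2" if "\<tau> \<in> J" "t \<in> J" "\<tau> \<le> t" "t \<le> t2" for \<tau> t
    using that k2 dU inJ[OF that(1,2)]
    by (intro DERIV_nonpos_imp_nonincreasing[where f="\<lambda>s. (U s)\<^sup>2", OF that(3)])
       (auto intro!: exI[of _ "2 * k2 * (U _ * W _)"] DERIV_power[of U, THEN DERIV_cong]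
             simp: mult_nonneg_nonpos algebra_simps)
  have U0: "U t = 0" if "t \<in> J" "t \<le> t2" for t
  proof -
    have "(U t)\<^sup>2 \<le> 0"
    proof (rule tendsto_lowerbound[where f="\<lambda>\<tau>. (U \<tau>)\<^sup>2"])
      show "((\<lambda>\<tau>. (U \<tau>)\<^sup>2) \<longlongrightarrow> 0) (lower_end J)"
        using tendsto_power[OF orbit_uw_tendsto_0(1), of 2] by (simp add: U_def)
      show "\<forall>\<^sub>F \<tau> in lower_end J. (U t)\<^sup>2 \<le> (U \<tau>)\<^sup>2"
        using eventually_lower_end[OF oJ that(1)] by (rule eventually_mono) (use U2 that in auto)
    qed simp
    then show ?thesis by simp
  qed
  obtain t1 where t1: "t1 \<in> J" "t1 < t2" using open_real_has_smaller[OF oJ(1) t2] by blast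
  obtain e where e: "e > 0" "ball t1 e \<subseteq> J" using oJ(1) t1(1) openE by blast
  have "k2 * W t1 = 0"
  proof (rule DERIV_local_const[OF dU[OF t1(1)]])
    show "0 < min e (t2 - t1)" using e t1 by simp
    show "\<forall>y. \<bar>t1 - y\<bar> < min e (t2 - t1) \<longrightarrow> U t1 = U y"
    proof (intro allI impI)
      fix s assume s: "\<bar>t1 - s\<bar> < min e (t2 - t1)"
      have "s \<in> J" using e s by (auto simp: dist_real_def)
      moreover have "s \<le> t2" using s by (simp add: abs_less_iff)
      ultimately show "U t1 = U s" using U0 U0[OF t1(1)] t1 by simp
    qed
  qed
  then have "y t1 = (s0, c0)" using uw_zero_imp_P0[of "y t1"] U0[OF t1(1)] t1 k2_pos by (simp add: U_def W_def)
  then have "\<forall>\<^sub>F t in upper_end J. poincare (y t) = poincare (s0, c0)"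
    using eventually_upper_end[OF oJ t1(1)] solution_through_equilibrium[OF y_solution F_at_P0 t1(1)]
    by (auto elim: eventually_mono)
  from Lim_transform_eventually[OF to_P1 this]
  have "((\<lambda>t. poincare (s0, c0)) \<longlongrightarrow> P1) (upper_end J)" .
  then show False using tendsto_unique[OF upper_end_neq_bot tendsto_const] poincare_neq_P1 by blast
qed

lemma orbit_on_graph:
  assumes t: "t \<in> J"
  shows "graph_gap (y t) = 0"
proof -
  have oJ: "open J" "is_interval J" using solution_open_interval[OF y_solution] by simp_all
  have "((\<lambda>t. unstable_graph (u_of (y t))) \<longlongrightarrow> 0) (lower_end J)"
  proof (rule tendsto_sandwich[where f="\<lambda>t. 0" and h="\<lambda>t. mu * u_of (y t)"])
    show "\<forall>\<^sub>F s in lower_end J. 0 \<le> unstable_graph (u_of (y s))"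
      using eventually_lower_end[OF oJ t] by (rule eventually_mono)
        (use orbit_positive unstable_graph_pos in \<open>auto intro: less_imp_le\<close>)
    show "\<forall>\<^sub>F s in lower_end J. unstable_graph (u_of (y s)) \<le> mu * u_of (y s)"
      using eventually_lower_end[OF oJ t] by (rule eventually_mono) (use orbit_positive unstable_graph_le in auto)
    show "((\<lambda>t. mu * u_of (y t)) \<longlongrightarrow> 0) (lower_end J)"
      using tendsto_mult[OF tendsto_const orbit_uw_tendsto_0(1), of mu] by simp
  qed simp
  from tendsto_diff[OF orbit_uw_tendsto_0(2) this]
  have gap_lim: "((\<lambda>\<tau>. graph_gap (y \<tau>)) \<longlongrightarrow> 0) (lower_end J)" by (simp add: graph_gap_def)
  \<comment> \<open>\<open>graph_gap\<^sup>2\<close> is nonincreasing along the orbit and tends to \<open>0\<close> at its start\<close>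
  have "(graph_gap (y t))\<^sup>2 \<le> 0"
  proof (rule tendsto_lowerbound[where f="\<lambda>\<tau>. (graph_gap (y \<tau>))\<^sup>2"])
    show "((\<lambda>\<tau>. (graph_gap (y \<tau>))\<^sup>2) \<longlongrightarrow> 0) (lower_end J)"
      using tendsto_power[OF gap_lim, of 2] by simp
    show "\<forall>\<^sub>F \<tau> in lower_end J. (graph_gap (y t))\<^sup>2 \<le> (graph_gap (y \<tau>))\<^sup>2"
      using eventually_lower_end[OF oJ t]
    proof (rule eventually_mono)
      fix \<tau> assume \<tau>: "\<tau> \<in> J \<and> \<tau> < t"
      show "(graph_gap (y t))\<^sup>2 \<le> (graph_gap (y \<tau>))\<^sup>2"
      proof (rule graph_gap_sq_nonincreasing[OF y_solution _ t])
        show "u_of (y s) > 0 \<and> w_of (y s) > 0" if "\<tau> \<le> s" "s \<le> t" for s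
          using orbit_positive mem_is_interval_1_I[OF oJ(2) _ t that] \<tau> by blast
      qed (use \<tau> in auto)
    qed
  qed (rule lower_end_neq_bot)
  then show ?thesis by simp
qed

lemma orbit_image: "y ` J = {uw_point u (unstable_graph u) | u. u > 0}"
proof (rule solution_image_unstable_graph[OF y_solution])
  show "u_of (y t) > 0 \<and> w_of (y t) = unstable_graph (u_of (y t))" if "t \<in> J" for t
    using orbit_positive[OF that] orbit_on_graph[OF that] by (simp add: graph_gap_def)
qed (use orbit_uw_tendsto_0(1) orbit_u_at_top in auto)

end

end

theorem proposition6p3:
  fixes k0 k1 km1 k2 eT :: real
  assumes "k0 \<ge> 0" "k1 \<ge> 0" "km1 \<ge> 0" "k2 \<ge> 0" "eT \<ge> 0"
    and "k1 \<noteq> 0" "k2 \<noteq> 0" "k2 * eT < k0"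
  shows "(\<forall>I x. is_maximal_solution (mm_field k0 k1 km1 k2 eT) I x \<and> 0 \<in> I \<and>
              fst (x 0) \<ge> 0 \<and> snd (x 0) \<ge> 0 \<longrightarrow>
              ((\<lambda>t. poincare (x t)) \<longlongrightarrow> P1) (upper_end I) \<and>
              ((\<lambda>t. snd (x t)) \<longlongrightarrow> eT) (upper_end I))
       \<and> (\<exists>I x. is_maximal_solution (mm_field k0 k1 km1 k2 eT) I x \<and>
              ((\<lambda>t. poincare (x t)) \<longlongrightarrow> poincare (P0 k0 k1 km1 k2 eT)) (lower_end I) \<and>
              ((\<lambda>t. poincare (x t)) \<longlongrightarrow> P1) (upper_end I) \<and>
              (\<forall>J y. is_maximal_solution (mm_field k0 k1 km1 k2 eT) J y \<and>
                 ((\<lambda>t. poincare (y t)) \<longlongrightarrow> poincare (P0 k0 k1 km1 k2 eT)) (lower_end J) \<and>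
                 ((\<lambda>t. poincare (y t)) \<longlongrightarrow> P1) (upper_end J) \<longrightarrow> y ` J = x ` I))"
proof -
  interpret mm_system k0 k1 km1 k2 eT by unfold_locales (use assms in auto)
  obtain I x where mx: "is_maximal_solution F I x" and I0: "0 \<in> I"
    and x0: "x 0 = uw_point 1 (unstable_graph 1)"
    using maximal_solution_exists by blast
  have I: "I = UNIV" by (rule heteroclinic_domain[OF mx I0 x0])
  have from_P0: "((\<lambda>t. poincare (x t)) \<longlongrightarrow> poincare (s0, c0)) (lower_end I)"
    using heteroclinic_tendsto_P0[OF mx I0 x0] by (simp add: I lower_end_UNIV tendsto_poincare_iff)
  have to_P1: "((\<lambda>t. poincare (x t)) \<longlongrightarrow> P1) (upper_end I)"
    using heteroclinic_tendsto_P1[OF mx I0 x0] by (simp add: I upper_end_UNIV)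
  have "y ` J = x ` I"
    if "is_maximal_solution F J y" "((\<lambda>t. poincare (y t)) \<longlongrightarrow> poincare (s0, c0)) (lower_end J)"
      "((\<lambda>t. poincare (y t)) \<longlongrightarrow> P1) (upper_end J)" for J y
    using orbit_image[OF that] orbit_image[OF mx from_P0 to_P1] by simp
  then show ?thesis
    using first_quadrant_tendsto_P1 mx from_P0 to_P1 unfolding P0_eq by blast
qed

end
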